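(* Let $(S_1,\dots,S_{n-1},P)$ be a $\Gamma_n$-contraction on a Hilbert space $\mathcal H$ with $P^{*m}\to0$ strongly, and let $(B_1,\dots,B_{n-1})$ be the fundamental operator tuple of $(S_1^*,\dots,S_{n-1}^*,P^* )$. Let $\mathcal H_P=(H^2(\mathbb D)\otimes\mathcal D_{P^*})\ominus M_{\Theta_P}(H^2(\mathbb D)\otimes\mathcal D_P)$. Then for each $i=1,\dots,n-1$, $S_i$ is unitarily equivalent to $P_{\mathcal H_P}(I\otimes B_i^*+M_z\otimes B_{n-i})|_{\mathcal H_P}$, and $P$ is unitarily equivalent to $P_{\mathcal H_P}(M_z\otimes I_{\mathcal D_{P^*}})|_{\mathcal H_P}$.
   Context: $\Gamma_n=\pi_n(\overline{\mathbb D}^n)$ with $\pi_n$ the symmetrization map. A $\Gamma_n$-contraction is a commuting tuple with Taylor joint spectrum in $\Gamma_n$ and $\|f(\cdot)\|\le\sup_{\Gamma_n}|f|$ for polynomials. $D_T=(I-T^*T)^{1/2}$, $\mathcal D_T=\overline{\operatorname{Ran}}D_T$. The fundamental operator tuple of the $\Gamma_n$-contraction $(S_1^*,\dots,S_{n-1}^*,P^* )$ is the unique $(B_1,\dots,B_{n-1})$ in $\mathcal B(\mathcal D_{P^*})$ with $S_i^*-S_{n-i}P^*=D_{P^*}B_iD_{P^*}$. $\Theta_P(z)=[-P+zD_{P^*}(I-zP^* )^{-1}D_P]|_{\mathcal D_P}$, $z\in\mathbb D$, is the characteristic function of $P$, and $M_{\Theta_P}:H^2(\mathbb D)\otimes\mathcal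 D_P\to H^2(\mathbb D)\otimes\mathcal D_{P^*}$ the induced multiplication operator. $M_z$ is multiplication by $z$ on $H^2(\mathbb D)$; $P_{\mathcal H_P}$ the orthogonal projection onto $\mathcal H_P$. *)

theory Defs
  imports "HOL-Analysis.Analysis"
begin

class complex_inner_space = ab_group_add +
  fixes cscale :: "complex \<Rightarrow> 'a \<Rightarrow> 'a"
    and cinner :: "'a \<Rightarrow> 'a \<Rightarrow> complex"
  assumes cscale_add_right: "cscale a (x + y) = cscale a x + cscale a y"
    and cscale_add_left: "cscale (a + b) x = cscale a x + cscale b x"
    and cscale_cscale: "cscale a (cscale b x) = cscale (a * b) x"
    and cscale_one: "cscale 1 x = x"
    and cinner_add_left: "cinner (x + y) z = cinner x z + cinner y z"
    and cinner_cscale_left: "cinner (cscale a x) y = a * cinner x y"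
    and cinner_commute: "cinner y x = cnj (cinner x y)"
    and cinner_self_nonneg: "0 \<le> Re (cinner x x)"
    and cinner_self_eq_zero: "cinner x x = 0 \<Longrightarrow> x = 0"

definition hnorm :: "'a::complex_inner_space \<Rightarrow> real" where
  "hnorm x = sqrt (Re (cinner x x))"

class chilbert_space = complex_inner_space +
  assumes hilbert_complete:
    "\<And>X. (\<forall>e>0. \<exists>N. \<forall>m\<ge>N. \<forall>k\<ge>N. sqrt (Re (cinner (X m - X k) (X m - X k))) < e) \<Longrightarrow>
          \<exists>L. (\<lambda>k. sqrt (Re (cinner (X k - L) (X k - L)))) \<longlonglongrightarrow> 0"

definition clinear :: "('a::complex_inner_space \<Rightarrow> 'b::complex_inner_space) \<Rightarrow> bool" where
  "clinear T \<longleftrightarrow> (\<forall>x y. T (x + y) = T x + T y) \<and> (\<forall>a x. T (cscale a x) = cscale a (T x))"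

definition bounded_op :: "('a::complex_inner_space \<Rightarrow> 'a) \<Rightarrow> bool" where
  "bounded_op T \<longleftrightarrow> clinear T \<and> (\<exists>K. \<forall>x. hnorm (T x) \<le> K * hnorm x)"

definition op_norm :: "('a::complex_inner_space \<Rightarrow> 'a) \<Rightarrow> real" where
  "op_norm T = Sup {hnorm (T x) | x. hnorm x \<le> 1}"

definition adj :: "('a::complex_inner_space \<Rightarrow> 'a) \<Rightarrow> 'a \<Rightarrow> 'a" where
  "adj T = (\<lambda>y. THE z. \<forall>x. cinner (T x) y = cinner x z)"

definition adj_on :: "'a::complex_inner_space set \<Rightarrow> ('a \<Rightarrow> 'a) \<Rightarrow> 'a \<Rightarrow> 'a" where
  "adj_on E T = (\<lambda>y. THE z. z \<in> E \<and> (\<forall>x\<in>E. cinner (T x) y = cinner x z))"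

definition positive_op :: "('a::complex_inner_space \<Rightarrow> 'a) \<Rightarrow> bool" where
  "positive_op A \<longleftrightarrow> bounded_op A \<and> (\<forall>x. Im (cinner (A x) x) = 0 \<and> 0 \<le> Re (cinner (A x) x))"

definition op_sqrt :: "('a::complex_inner_space \<Rightarrow> 'a) \<Rightarrow> 'a \<Rightarrow> 'a" where
  "op_sqrt A = (THE R. positive_op R \<and> R \<circ> R = A)"

definition defect :: "('a::complex_inner_space \<Rightarrow> 'a) \<Rightarrow> 'a \<Rightarrow> 'a" where
  "defect T = op_sqrt (\<lambda>x. x - adj T (T x))"

definition hclosure :: "'a::complex_inner_space set \<Rightarrow> 'a set" where
  "hclosure S = {y. \<forall>e>0. \<exists>x\<in>S. hnorm (x - y) < e}"

definition defect_space :: "('a::complex_inner_space \<Rightarrow> 'a) \<Rightarrow> 'a set" where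
  "defect_space T = hclosure (range (defect T))"

text \<open>Points of C^n are functions nat => complex vanishing at indices >= n.\<close>
definition esym :: "nat \<Rightarrow> nat \<Rightarrow> (nat \<Rightarrow> complex) \<Rightarrow> complex" where
  "esym n k z = (\<Sum>J\<in>{J. J \<subseteq> {..<n} \<and> card J = k}. \<Prod>j\<in>J. z j)"

text \<open>Gamma_n = pi_n(closed disc^n), pi_n(z) = (e_1(z),...,e_n(z)); coordinate k<n holds e_(k+1).\<close>
definition Gamma :: "nat \<Rightarrow> (nat \<Rightarrow> complex) set" where
  "Gamma n = {w. \<exists>z. (\<forall>j<n. cmod (z j) \<le> 1) \<and> (\<forall>k<n. w k = esym n (Suc k) z) \<and> (\<forall>k\<ge>n. w k = 0)}"

text \<open>Degree-k part of the Koszul complex: Lambda^k(C^n) tensor H, as functions on k-subsets.\<close>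
definition kz_space :: "nat \<Rightarrow> nat \<Rightarrow> (nat set \<Rightarrow> 'a::complex_inner_space) set" where
  "kz_space n k = {x. \<forall>J. x J \<noteq> 0 \<longrightarrow> J \<subseteq> {..<n} \<and> card J = k}"

definition kz_d :: "nat \<Rightarrow> (nat \<Rightarrow> 'a \<Rightarrow> 'a) \<Rightarrow> (nat set \<Rightarrow> 'a::complex_inner_space) \<Rightarrow> nat set \<Rightarrow> 'a" where
  "kz_d n T x = (\<lambda>J. if J \<subseteq> {..<n}
      then (\<Sum>i\<in>J. cscale ((-1) ^ card {j\<in>J. j < i}) (T i (x (J - {i})))) else 0)"

definition koszul_exact :: "nat \<Rightarrow> (nat \<Rightarrow> 'a::complex_inner_space \<Rightarrow> 'a) \<Rightarrow> bool" where
  "koszul_exact n T \<longleftrightarrow> (\<forall>k. \<forall>x\<in>kz_space n k. kz_d n T x = (\<lambda>J. 0) \<longrightarrow>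
      (if k = 0 then x = (\<lambda>J. 0) else (\<exists>y\<in>kz_space n (k - 1). x = kz_d n T y)))"

definition taylor_spectrum :: "nat \<Rightarrow> (nat \<Rightarrow> 'a::complex_inner_space \<Rightarrow> 'a) \<Rightarrow> (nat \<Rightarrow> complex) set" where
  "taylor_spectrum n T = {\<mu>. (\<forall>i\<ge>n. \<mu> i = 0) \<and>
      \<not> koszul_exact n (\<lambda>i x. T i x - cscale (\<mu> i) x)}"

text \<open>A polynomial in n variables: finitely supported coefficients on multi-indices in N^n.\<close>
definition is_mpoly :: "nat \<Rightarrow> ((nat \<Rightarrow> nat) \<Rightarrow> complex) \<Rightarrow> bool" where
  "is_mpoly n c \<longleftrightarrow> finite {\<alpha>. c \<alpha> \<noteq> 0} \<and> (\<forall>\<alpha>. c \<alpha> \<noteq> 0 \<longrightarrow> (\<forall>i\<ge>n. \<alpha> i = 0))"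

definition mpoly_eval :: "nat \<Rightarrow> ((nat \<Rightarrow> nat) \<Rightarrow> complex) \<Rightarrow> (nat \<Rightarrow> complex) \<Rightarrow> complex" where
  "mpoly_eval n c w = (\<Sum>\<alpha>\<in>{\<alpha>. c \<alpha> \<noteq> 0}. c \<alpha> * (\<Prod>i<n. w i ^ \<alpha> i))"

fun mono_op :: "(nat \<Rightarrow> 'a::type \<Rightarrow> 'a) \<Rightarrow> (nat \<Rightarrow> nat) \<Rightarrow> nat \<Rightarrow> 'a \<Rightarrow> 'a" where
  "mono_op T \<alpha> 0 = id"
| "mono_op T \<alpha> (Suc m) = mono_op T \<alpha> m \<circ> (T m ^^ \<alpha> m)"

definition mpoly_op :: "nat \<Rightarrow> ((nat \<Rightarrow> nat) \<Rightarrow> complex) \<Rightarrow> (nat \<Rightarrow> 'a \<Rightarrow> 'a) \<Rightarrow> 'a \<Rightarrow> 'a::complex_inner_space" where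
  "mpoly_op n c T = (\<lambda>x. \<Sum>\<alpha>\<in>{\<alpha>. c \<alpha> \<noteq> 0}. cscale (c \<alpha>) (mono_op T \<alpha> n x))"

definition gamma_contraction :: "nat \<Rightarrow> (nat \<Rightarrow> 'a::complex_inner_space \<Rightarrow> 'a) \<Rightarrow> bool" where
  "gamma_contraction n T \<longleftrightarrow>
     (\<forall>i<n. bounded_op (T i)) \<and> (\<forall>i<n. \<forall>j<n. T i \<circ> T j = T j \<circ> T i) \<and>
     taylor_spectrum n T \<subseteq> Gamma n \<and>
     (\<forall>c. is_mpoly n c \<longrightarrow> op_norm (mpoly_op n c T) \<le> Sup {cmod (mpoly_eval n c w) | w. w \<in> Gamma n})"

text \<open>The tuple (S_1,...,S_(n-1),P), indexed from 0.\<close>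
definition gtuple :: "nat \<Rightarrow> (nat \<Rightarrow> 'a::type \<Rightarrow> 'a) \<Rightarrow> ('a \<Rightarrow> 'a) \<Rightarrow> nat \<Rightarrow> 'a \<Rightarrow> 'a" where
  "gtuple n S P = (\<lambda>k. if k < n - 1 then S (Suc k) else P)"

text \<open>H^2(D) tensor E, realised via Taylor coefficients: square-summable E-valued sequences.\<close>
definition H2 :: "'a::complex_inner_space set \<Rightarrow> (nat \<Rightarrow> 'a) set" where
  "H2 E = {f. (\<forall>k. f k \<in> E) \<and> summable (\<lambda>k. (hnorm (f k))\<^sup>2)}"

definition l2_inner :: "(nat \<Rightarrow> 'a::complex_inner_space) \<Rightarrow> (nat \<Rightarrow> 'a) \<Rightarrow> complex" where
  "l2_inner f g = (\<Sum>k. cinner (f k) (g k))"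

text \<open>Taylor coefficients of Theta_P(z) = -P + sum_(m>=0) z^(m+1) D_(P*) P*^m D_P.\<close>
definition theta_coeff :: "('a::complex_inner_space \<Rightarrow> 'a) \<Rightarrow> nat \<Rightarrow> 'a \<Rightarrow> 'a" where
  "theta_coeff P m = (if m = 0 then (\<lambda>x. - P x)
      else (\<lambda>x. defect (adj P) ((adj P ^^ (m - 1)) (defect P x))))"

definition mult_theta :: "('a::complex_inner_space \<Rightarrow> 'a) \<Rightarrow> (nat \<Rightarrow> 'a) \<Rightarrow> nat \<Rightarrow> 'a" where
  "mult_theta P f = (\<lambda>k. \<Sum>j\<le>k. theta_coeff P (k - j) (f j))"

definition model_space :: "('a::complex_inner_space \<Rightarrow> 'a) \<Rightarrow> (nat \<Rightarrow> 'a) set" where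
  "model_space P = {g \<in> H2 (defect_space (adj P)).
      \<forall>f \<in> H2 (defect_space P). l2_inner g (mult_theta P f) = 0}"

definition l2_proj :: "(nat \<Rightarrow> 'a::complex_inner_space) set \<Rightarrow> (nat \<Rightarrow> 'a) \<Rightarrow> nat \<Rightarrow> 'a" where
  "l2_proj M g = (THE h. h \<in> M \<and> (\<forall>m\<in>M. l2_inner (\<lambda>k. g k - h k) m = 0))"

text \<open>I tensor B_i^* + M_z tensor B_(n-i) on H^2 tensor D_(P*).\<close>
definition model_S :: "nat \<Rightarrow> (nat \<Rightarrow> 'a \<Rightarrow> 'a) \<Rightarrow> ('a::complex_inner_space \<Rightarrow> 'a) \<Rightarrow> nat \<Rightarrow> (nat \<Rightarrow> 'a) \<Rightarrow> nat \<Rightarrow> 'a" where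
  "model_S n B P i g = (\<lambda>k. adj_on (defect_space (adj P)) (B i) (g k)
      + (if k = 0 then 0 else B (n - i) (g (k - 1))))"

definition shift :: "(nat \<Rightarrow> 'a::zero) \<Rightarrow> nat \<Rightarrow> 'a" where
  "shift g = (\<lambda>k. if k = 0 then 0 else g (k - 1))"

definition unitarily_equiv_compr :: "('a::complex_inner_space \<Rightarrow> 'a) \<Rightarrow> (nat \<Rightarrow> 'b::complex_inner_space) set
    \<Rightarrow> ((nat \<Rightarrow> 'b) \<Rightarrow> nat \<Rightarrow> 'b) \<Rightarrow> bool" where
  "unitarily_equiv_compr T M A \<longleftrightarrow> (\<exists>U. bij_betw U UNIV M \<and>
      (\<forall>x y k. U (x + y) k = U x k + U y k) \<and> (\<forall>a x k. U (cscale a x) k = cscale a (U x k)) \<and>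
      (\<forall>x y. l2_inner (U x) (U y) = cinner x y) \<and>
      (\<forall>x. U (T x) = l2_proj M (A (U x))))"

end

theory Submission
  imports Defs
begin

text \<open>
  For a pure contraction P, the map W h = (D_{P*} P*^k h)_k (the Taylor coefficients of
  D_{P*} (I - z P*)^{-1} h) is an isometry of H onto the model space
  H_P = (H^2 (x) D_{P*}) - M_Theta (H^2 (x) D_P), and W P* = M_z* W; hence P is unitarily
  equivalent to the compression of M_z (x) I.  Isometry is the telescoping identity
  |D_{P*} P*^k h|^2 = |P*^k h|^2 - |P*^(k+1) h|^2 together with purity; orthogonality of the
  range to M_Theta and surjectivity are computed coefficientwise from D_{P*}^2 = I - P P*.

  For S_i, combining the fundamental equation for i with the one for n - i and comparing on the
  dense range of D_{P*} gives D_{P*} S_i* = B_i D_{P*} + B_{n-i}* D_{P*} P*, i.e.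
  W S_i* = (I (x) B_i + M_z* (x) B_{n-i}*) W, which is the adjoint form of the claimed
  compression.  Of the Gamma_n-contraction hypotheses only boundedness, commutativity and
  the contractivity of P (von Neumann's inequality for the last coordinate) are used.
  Defect operators are square roots of I - T* T, obtained from the binomial series of
  1 - sqrt (1 - t).
\<close>

section \<open>Complex inner product spaces\<close>

lemma cscale_zero_right[simp]: "cscale a (0::'a::complex_inner_space) = 0"
  by (metis add_cancel_right_right cscale_add_right)
lemma cscale_zero_left[simp]: "cscale 0 (x::'a::complex_inner_space) = 0"
  by (metis add_cancel_right_right add_0 cscale_add_left)
lemma cscale_minus_right: "cscale a (- (x::'a::complex_inner_space)) = - cscale a x"
  by (metis add.right_inverse cscale_add_right cscale_zero_right minus_unique)
lemma cscale_minus_left: "cscale (- a) (x::'a::complex_inner_space) = - cscale a x"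
  by (metis add.right_inverse cscale_add_left cscale_zero_left minus_unique)
lemma cscale_diff_right: "cscale a ((x::'a::complex_inner_space) - y) = cscale a x - cscale a y"
  by (metis cscale_add_right cscale_minus_right diff_conv_add_uminus)
lemma cscale_neg1: "cscale (-1) (x::'a::complex_inner_space) = - x"
  by (simp add: cscale_minus_left cscale_one)
lemma cscale_sum: "cscale a (sum f A) = (\<Sum>i\<in>A. cscale a (f i::'a::complex_inner_space))"
  by (induction A rule: infinite_finite_induct) (auto simp: cscale_add_right)
lemma cscale_sum_left: "(\<Sum>i\<in>A. cscale (f i) v) = cscale (sum f A) (v::'a::complex_inner_space)"
  by (induction A rule: infinite_finite_induct) (auto simp: cscale_add_left)
lemma cscale_two: "cscale 2 (v::'a::complex_inner_space) = v + v"
  using cscale_add_left[of 1 1 v] by (simp add: cscale_one)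

lemma cinner_zero_left[simp]: "cinner 0 (y::'a::complex_inner_space) = 0"
  by (metis add_cancel_right_right add_0 cinner_add_left)
lemma cinner_add_right: "cinner (x::'a::complex_inner_space) (y + z) = cinner x y + cinner x z"
  by (metis cinner_add_left cinner_commute complex_cnj_add)
lemma cinner_zero_right[simp]: "cinner (x::'a::complex_inner_space) 0 = 0"
  by (metis cinner_commute cinner_zero_left complex_cnj_zero)
lemma cinner_cscale_right: "cinner (x::'a::complex_inner_space) (cscale a y) = cnj a * cinner x y"
  by (metis cinner_commute cinner_cscale_left complex_cnj_cnj complex_cnj_mult)
lemma cinner_minus_left: "cinner (- x::'a::complex_inner_space) y = - cinner x y"
  by (metis add.right_inverse add_eq_0_iff cinner_add_left cinner_zero_left)
lemma cinner_minus_right: "cinner (x::'a::complex_inner_space) (- y) = - cinner x y"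
  by (metis cinner_commute cinner_minus_left complex_cnj_minus)
lemma cinner_diff_left: "cinner ((x::'a::complex_inner_space) - y) z = cinner x z - cinner y z"
  by (metis cinner_add_left cinner_minus_left diff_conv_add_uminus)
lemma cinner_diff_right: "cinner (x::'a::complex_inner_space) (y - z) = cinner x y - cinner x z"
  by (metis cinner_add_right cinner_minus_right diff_conv_add_uminus)
lemma cinner_sum_left: "cinner (sum f A) (y::'a::complex_inner_space) = (\<Sum>i\<in>A. cinner (f i) y)"
  by (induction A rule: infinite_finite_induct) (auto simp: cinner_add_left)
lemma cinner_sum_right: "cinner (y::'a::complex_inner_space) (sum f A) = (\<Sum>i\<in>A. cinner y (f i))"
  by (induction A rule: infinite_finite_induct) (auto simp: cinner_add_right)

lemma cinner_self_real: "Im (cinner (x::'a::complex_inner_space) x) = 0"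
proof -
  have "cinner x x = cnj (cinner x x)" by (rule cinner_commute)
  from arg_cong[OF this, of Im] show ?thesis by simp
qed
lemma cinner_self_eq: "cinner (x::'a::complex_inner_space) x = complex_of_real (Re (cinner x x))"
  by (simp add: complex_eq_iff cinner_self_real)
lemma cinner_self_zero_iff[simp]: "cinner (x::'a::complex_inner_space) x = 0 \<longleftrightarrow> x = 0"
  using cinner_self_eq_zero by auto

lemma hnorm_sq: "(hnorm (x::'a::complex_inner_space))\<^sup>2 = Re (cinner x x)"
  by (simp add: hnorm_def cinner_self_nonneg real_sqrt_pow2)
lemma hnorm_sq_c: "complex_of_real ((hnorm (x::'a::complex_inner_space))\<^sup>2) = cinner x x"
  by (metis cinner_self_eq hnorm_sq)
lemma hnorm_nonneg[simp]: "0 \<le> hnorm (x::'a::complex_inner_space)"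
  by (simp add: hnorm_def cinner_self_nonneg)
lemma hnorm_zero[simp]: "hnorm (0::'a::complex_inner_space) = 0"
  by (simp add: hnorm_def)
lemma hnorm_eq_zero[simp]: "hnorm (x::'a::complex_inner_space) = 0 \<longleftrightarrow> x = 0"
proof
  assume "hnorm x = 0"
  then have "Re (cinner x x) = 0" using hnorm_sq[of x] by simp
  then have "cinner x x = 0" using cinner_self_eq[of x] by simp
  then show "x = 0" by simp
qed simp
lemma hnorm_cscale: "hnorm (cscale a (x::'a::complex_inner_space)) = cmod a * hnorm x"
proof -
  have "cinner (cscale a x) (cscale a x) = a * cnj a * cinner x x"
    by (simp add: cinner_cscale_left cinner_cscale_right)
  also have "a * cnj a = complex_of_real ((cmod a)\<^sup>2)" by (metis complex_norm_square)
  finally have "Re (cinner (cscale a x) (cscale a x)) = (cmod a)\<^sup>2 * Re (cinner x x)" by simp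
  then have "(hnorm (cscale a x))\<^sup>2 = (cmod a * hnorm x)\<^sup>2"
    by (simp add: hnorm_sq power_mult_distrib)
  then show ?thesis by (simp add: power2_eq_iff_nonneg)
qed
lemma hnorm_minus: "hnorm (- (x::'a::complex_inner_space)) = hnorm x"
  by (metis cscale_neg1 hnorm_cscale mult_1 norm_minus_cancel norm_one)
lemma hnorm_minus_commute: "hnorm ((x::'a::complex_inner_space) - y) = hnorm (y - x)"
  by (metis hnorm_minus minus_diff_eq)

lemma hnorm_add_sq: "(hnorm ((x::'a::complex_inner_space) + y))\<^sup>2 = (hnorm x)\<^sup>2 + (hnorm y)\<^sup>2 + 2 * Re (cinner x y)"
proof -
  have "cinner (x+y) (x+y) = cinner x x + cinner y y + (cinner x y + cnj (cinner x y))"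
    by (simp add: cinner_add_left cinner_add_right) (metis cinner_commute)
  then show ?thesis by (simp add: hnorm_sq complex_add_cnj)
qed
lemma hnorm_diff_sq: "(hnorm ((x::'a::complex_inner_space) - y))\<^sup>2 = (hnorm x)\<^sup>2 + (hnorm y)\<^sup>2 - 2 * Re (cinner x y)"
  using hnorm_add_sq[of x "-y"] by (simp add: hnorm_minus cinner_minus_right)

lemma cauchy_schwarz: "cmod (cinner (x::'a::complex_inner_space) y) \<le> hnorm x * hnorm y"
proof (cases "y = 0")
  case True then show ?thesis by simp
next
  case False
  define t where "t = cinner x y / cinner y y"
  have yy: "cinner y y = complex_of_real ((hnorm y)\<^sup>2)" by (rule hnorm_sq_c[symmetric])
  have ny: "hnorm y > 0" using False hnorm_eq_zero hnorm_nonneg by (metis less_eq_real_def)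
  have "0 \<le> (hnorm (x - cscale t y))\<^sup>2" by simp
  also have "(hnorm (x - cscale t y))\<^sup>2 = (hnorm x)\<^sup>2 - (cmod (cinner x y))\<^sup>2 / (hnorm y)\<^sup>2"
  proof -
    have "(hnorm (x - cscale t y))\<^sup>2 = (hnorm x)\<^sup>2 + (cmod t * hnorm y)\<^sup>2 - 2 * Re (cnj t * cinner x y)"
      by (simp add: hnorm_diff_sq hnorm_cscale cinner_cscale_right)
    also have "cnj t * cinner x y = complex_of_real ((cmod (cinner x y))\<^sup>2 / (hnorm y)\<^sup>2)"
      unfolding t_def yy using complex_norm_square[of "cinner x y"] by (simp add: field_simps)
    also have "cmod t = cmod (cinner x y) / (hnorm y)\<^sup>2"
      unfolding t_def yy by (simp add: norm_divide norm_power)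
    finally have e: "(hnorm (x - cscale t y))\<^sup>2 = (hnorm x)\<^sup>2 + (cmod (cinner x y) / (hnorm y)\<^sup>2 * hnorm y)\<^sup>2 - 2 * ((cmod (cinner x y))\<^sup>2 / (hnorm y)\<^sup>2)"
      using False by simp
    have "(cmod (cinner x y) / (hnorm y)\<^sup>2 * hnorm y)\<^sup>2 = (cmod (cinner x y))\<^sup>2 / (hnorm y)\<^sup>2"
      using ny by (simp add: power2_eq_square field_simps)
    with e show ?thesis by simp
  qed
  finally have "(cmod (cinner x y))\<^sup>2 \<le> (hnorm x * hnorm y)\<^sup>2"
    using ny by (simp add: power_mult_distrib) (metis pos_divide_le_eq zero_less_power)
  then show ?thesis by (simp add: power2_le_iff_abs_le)
qed

lemma hnorm_triangle: "hnorm ((x::'a::complex_inner_space) + y) \<le> hnorm x + hnorm y"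
proof -
  have "Re (cinner x y) \<le> hnorm x * hnorm y"
    using cauchy_schwarz[of x y] complex_Re_le_cmod order_trans by blast
  then have "(hnorm (x + y))\<^sup>2 \<le> (hnorm x + hnorm y)\<^sup>2"
    by (simp add: hnorm_add_sq power2_sum)
  then show ?thesis using hnorm_nonneg power2_le_imp_le by (metis add_nonneg_nonneg)
qed
lemma hnorm_triangle_diff: "hnorm ((x::'a::complex_inner_space) - y) \<le> hnorm x + hnorm y"
  by (metis diff_conv_add_uminus hnorm_minus hnorm_triangle)
lemma hnorm_diff_triangle: "hnorm ((x::'a::complex_inner_space) - z) \<le> hnorm (x - y) + hnorm (y - z)"
  by (metis diff_add_cancel add_diff_eq hnorm_triangle diff_diff_eq2)
lemma hnorm_sum: "hnorm (sum f A) \<le> (\<Sum>i\<in>A. hnorm (f i::'a::complex_inner_space))"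
  by (induction A rule: infinite_finite_induct) (auto intro: order_trans[OF hnorm_triangle])
lemma hnorm_reverse_triangle: "\<bar>hnorm (x::'a::complex_inner_space) - hnorm y\<bar> \<le> hnorm (x - y)"
  by (smt (verit) diff_add_cancel hnorm_minus_commute hnorm_triangle)

section \<open>Convergence and closed subspaces\<close>

definition hconv :: "(nat \<Rightarrow> 'a::complex_inner_space) \<Rightarrow> 'a \<Rightarrow> bool" where
  "hconv X L \<longleftrightarrow> (\<lambda>k. hnorm (X k - L)) \<longlonglongrightarrow> 0"

definition hsubspace :: "'a::complex_inner_space set \<Rightarrow> bool" where
  "hsubspace E \<longleftrightarrow> 0 \<in> E \<and> (\<forall>x\<in>E. \<forall>y\<in>E. x + y \<in> E) \<and> (\<forall>a. \<forall>x\<in>E. cscale a x \<in> E)"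

definition hclosed :: "'a::complex_inner_space set \<Rightarrow> bool" where
  "hclosed E \<longleftrightarrow> (\<forall>X L. (\<forall>k. X k \<in> E) \<longrightarrow> hconv X L \<longrightarrow> L \<in> E)"

lemma hsubspace_diff: "hsubspace E \<Longrightarrow> x \<in> E \<Longrightarrow> y \<in> E \<Longrightarrow> x - y \<in> E"
  unfolding hsubspace_def
  by (metis cscale_neg1 diff_conv_add_uminus)
lemma hsubspace_add: "hsubspace E \<Longrightarrow> x \<in> E \<Longrightarrow> y \<in> E \<Longrightarrow> x + y \<in> E"
  unfolding hsubspace_def by blast
lemma hsubspace_cscale: "hsubspace E \<Longrightarrow> x \<in> E \<Longrightarrow> cscale a x \<in> E"
  unfolding hsubspace_def by blast
lemma hsubspace_zero: "hsubspace E \<Longrightarrow> 0 \<in> E"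
  unfolding hsubspace_def by blast
lemma hsubspace_UNIV: "hsubspace (UNIV::'a::complex_inner_space set)"
  by (simp add: hsubspace_def)
lemma hclosed_UNIV: "hclosed (UNIV::'a::complex_inner_space set)"
  by (simp add: hclosed_def)

lemma tendsto0_le: "(g \<longlongrightarrow> 0) F \<Longrightarrow> (\<And>x. norm (f x) \<le> g x) \<Longrightarrow> (f \<longlongrightarrow> (0::'b::real_normed_vector)) F"
proof -
  assume a: "(g \<longlongrightarrow> 0) F" "\<And>x. norm (f x) \<le> g x"
  have "eventually (\<lambda>x. norm (f x) \<le> g x) F" using a(2) by (simp add: always_eventually)
  then show ?thesis using a(1) by (rule Lim_null_comparison)
qed

lemma hconv_unique: assumes "hconv X L" "hconv X M" shows "L = M"
proof -
  have "(\<lambda>k. hnorm (X k - L) + hnorm (X k - M)) \<longlonglongrightarrow> 0 + 0"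
    using assms unfolding hconv_def by (rule tendsto_add)
  then have lim: "(\<lambda>k. hnorm (X k - L) + hnorm (X k - M)) \<longlonglongrightarrow> 0" by simp
  have "hnorm (L - M) \<le> hnorm (X k - L) + hnorm (X k - M)" for k
    using hnorm_diff_triangle[of L M "X k"] hnorm_minus_commute[of L "X k"] by simp
  then have "hnorm (L - M) \<le> 0"
    by (intro LIMSEQ_le_const[OF lim]) blast
  then have "hnorm (L - M) = 0" using hnorm_nonneg[of "L - M"] by linarith
  then show ?thesis by simp
qed

lemma hconv_const: "hconv (\<lambda>k. c) c"
  by (simp add: hconv_def)

lemma hconv_iff_seq: "hconv X L \<longleftrightarrow> (\<forall>e>0. \<exists>N. \<forall>k\<ge>N. hnorm (X k - L) < e)"
  unfolding hconv_def LIMSEQ_def by (simp add: dist_real_def)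

lemma hconv_le: assumes "\<And>k. hnorm (Y k - M) \<le> c * hnorm (X k - L)" "hconv X L"
  shows "hconv Y M"
proof -
  have "(\<lambda>k. c * hnorm (X k - L)) \<longlonglongrightarrow> 0"
    using assms(2) unfolding hconv_def using tendsto_mult_right_zero by blast
  then show ?thesis unfolding hconv_def
    by (rule tendsto0_le) (simp add: assms(1))
qed

lemma hconv_add: assumes "hconv X L" "hconv Y M" shows "hconv (\<lambda>k. X k + Y k) (L + M)"
proof -
  have "(\<lambda>k. hnorm (X k - L) + hnorm (Y k - M)) \<longlonglongrightarrow> 0 + 0"
    using assms unfolding hconv_def by (rule tendsto_add)
  then have lim: "(\<lambda>k. hnorm (X k - L) + hnorm (Y k - M)) \<longlonglongrightarrow> 0" by simp
  have "hnorm (X k + Y k - (L + M)) \<le> hnorm (X k - L) + hnorm (Y k - M)" for k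
  proof -
    have "X k + Y k - (L + M) = (X k - L) + (Y k - M)" by (simp add: algebra_simps)
    then show ?thesis using hnorm_triangle[of "X k - L" "Y k - M"] by (simp only:)
  qed
  then show ?thesis unfolding hconv_def
    by (intro tendsto0_le[OF lim]) simp
qed

lemma hconv_minus: assumes "hconv X L" shows "hconv (\<lambda>k. - X k) (- L)"
proof -
  have "hnorm (- X k - - L) = hnorm (X k - L)" for k
    using hnorm_minus[of "X k - L"] by (simp add: algebra_simps)
  then show ?thesis using assms unfolding hconv_def by simp
qed

lemma hconv_diff: assumes "hconv X L" "hconv Y M" shows "hconv (\<lambda>k. X k - Y k) (L - M)"
  using hconv_add[OF assms(1) hconv_minus[OF assms(2)]] by simp

lemma hconv_cscale: assumes "hconv X L" shows "hconv (\<lambda>k. cscale a (X k)) (cscale a L)"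
  by (rule hconv_le[OF _ assms, of _ _ "cmod a"]) (simp add: hnorm_cscale cscale_diff_right[symmetric])

lemma hconv_hnorm: assumes "hconv X L" shows "(\<lambda>k. hnorm (X k)) \<longlonglongrightarrow> hnorm L"
proof -
  have "(\<lambda>k. hnorm (X k) - hnorm L) \<longlonglongrightarrow> 0"
    using assms unfolding hconv_def
    by (rule tendsto0_le) (simp add: hnorm_reverse_triangle)
  then show ?thesis by (simp add: LIM_zero_iff)
qed

lemma hconv_cinner_left: assumes "hconv X L" shows "(\<lambda>k. cinner (X k) y) \<longlonglongrightarrow> cinner L y"
proof -
  have "(\<lambda>k. hnorm (X k - L) * hnorm y) \<longlonglongrightarrow> 0"
    using assms unfolding hconv_def using tendsto_mult_left_zero by blast
  then have "(\<lambda>k. cinner (X k) y - cinner L y) \<longlonglongrightarrow> 0"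
    by (rule tendsto0_le) (simp add: cinner_diff_left[symmetric] cauchy_schwarz)
  then show ?thesis by (simp add: LIM_zero_iff)
qed

lemma hcauchy_conv:
  fixes X :: "nat \<Rightarrow> 'a::chilbert_space"
  assumes "\<forall>e>0. \<exists>N. \<forall>m\<ge>N. \<forall>k\<ge>N. hnorm (X m - X k) < e"
  shows "\<exists>L. hconv X L"
  using hilbert_complete[of X] assms unfolding hconv_def hnorm_def by blast

lemma hconv_le_bound:
  assumes "hconv X L" "\<And>k. hnorm (X k) \<le> B" shows "hnorm L \<le> B"
proof -
  have "(\<lambda>k. hnorm (X k)) \<longlonglongrightarrow> hnorm L" by (rule hconv_hnorm[OF assms(1)])
  then show ?thesis using assms(2) by (intro LIMSEQ_le_const2[of "\<lambda>k. hnorm (X k)"]) auto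
qed

lemma hconv_Suc: "hconv X L \<Longrightarrow> hconv (\<lambda>N. X (Suc N)) L"
  unfolding hconv_def by (rule LIMSEQ_Suc[where f="\<lambda>k. hnorm (X k - L)", simplified])

lemma hclosure_sub: "S \<subseteq> hclosure S"
  unfolding hclosure_def by force

lemma hconv_in_hclosure: assumes "\<forall>k. X k \<in> hclosure S" "hconv X L" shows "L \<in> hclosure S"
  unfolding hclosure_def
proof (intro CollectI allI impI)
  fix e :: real assume e: "e > 0"
  have e2: "e/2 > 0" using e by simp
  obtain N where N: "\<forall>k\<ge>N. hnorm (X k - L) < e/2" using assms(2) e2 unfolding hconv_iff_seq by blast
  define k where "k = N"
  have k: "hnorm (X k - L) < e/2" using N k_def by simp
  have "X k \<in> hclosure S" using assms(1) by blast
  then obtain x where x: "x \<in> S" "hnorm (x - X k) < e/2" using e2 unfolding hclosure_def by blast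
  have "hnorm (x - L) \<le> hnorm (x - X k) + hnorm (X k - L)" by (rule hnorm_diff_triangle)
  then show "\<exists>x\<in>S. hnorm (x - L) < e" using x k by (intro bexI[of _ x]) auto
qed

lemma hclosed_hclosure: "hclosed (hclosure S)"
  unfolding hclosed_def using hconv_in_hclosure by blast

lemma hclosure_seq: assumes "y \<in> hclosure S" obtains X where "\<forall>k. X k \<in> S" "hconv X y"
proof -
  have "\<forall>k. \<exists>x\<in>S. hnorm (x - y) < 1 / (Suc k)"
    using assms unfolding hclosure_def by auto
  then obtain X where X: "\<forall>k. X k \<in> S \<and> hnorm (X k - y) < 1 / Suc k" by metis
  have "hconv X y" unfolding hconv_def
    by (rule tendsto0_le[OF LIMSEQ_inverse_real_of_nat]) (use X less_imp_le in \<open>auto simp: inverse_eq_divide\<close>)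
  then show ?thesis using X that by blast
qed

lemma hsubspace_hclosure: assumes "hsubspace S" shows "hsubspace (hclosure S)"
  unfolding hsubspace_def
proof (intro conjI ballI allI)
  show "0 \<in> hclosure S" using assms hclosure_sub hsubspace_zero by blast
next
  fix x y assume "x \<in> hclosure S" "y \<in> hclosure S"
  then obtain X Y where "\<forall>k. X k \<in> S" "hconv X x" "\<forall>k. Y k \<in> S" "hconv Y y"
    by (metis hclosure_seq)
  then have "\<forall>k. X k + Y k \<in> hclosure S" "hconv (\<lambda>k. X k + Y k) (x + y)"
    using hclosure_sub hsubspace_add[OF assms] hconv_add by blast+
  then show "x + y \<in> hclosure S" by (rule hconv_in_hclosure)
next
  fix a x assume "x \<in> hclosure S"
  then obtain X where "\<forall>k. X k \<in> S" "hconv X x" by (metis hclosure_seq)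
  then have "\<forall>k. cscale a (X k) \<in> hclosure S" "hconv (\<lambda>k. cscale a (X k)) (cscale a x)"
    using hclosure_sub hsubspace_cscale[OF assms] hconv_cscale by blast+
  then show "cscale a x \<in> hclosure S" by (rule hconv_in_hclosure)
qed

lemma orth_hclosure: assumes "y \<in> hclosure S" "\<forall>s\<in>S. cinner s z = 0" shows "cinner y z = 0"
proof -
  obtain X where "\<forall>k. X k \<in> S" "hconv X y" using assms(1) by (metis hclosure_seq)
  then have "(\<lambda>k. cinner (X k) z) \<longlonglongrightarrow> cinner y z" using hconv_cinner_left by blast
  moreover have "(\<lambda>k. cinner (X k) z) = (\<lambda>k. 0)" using \<open>\<forall>k. X k \<in> S\<close> assms(2) by auto
  ultimately show ?thesis by (metis LIMSEQ_unique tendsto_const)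
qed

section \<open>Orthogonal projection and the Riesz representation\<close>

lemma lim_inv_Suc: "(\<lambda>k. 1 / real (Suc k)) \<longlonglongrightarrow> 0"
  using LIMSEQ_Suc[OF lim_1_over_n] by simp

lemma parallelogram: "(hnorm ((a::'a::complex_inner_space) + b))\<^sup>2 + (hnorm (a - b))\<^sup>2 = 2 * (hnorm a)\<^sup>2 + 2 * (hnorm b)\<^sup>2"
  using hnorm_add_sq[of a b] hnorm_diff_sq[of a b] by simp

lemma parallelogram_midpoint:
  fixes x a b :: "'a::complex_inner_space"
  assumes d: "0 \<le> d" "d \<le> hnorm (x - cscale (1/2) (a + b))"
  shows "(hnorm (a - b))\<^sup>2 \<le> 2 * (hnorm (x - a))\<^sup>2 + 2 * (hnorm (x - b))\<^sup>2 - 4 * d\<^sup>2"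
proof -
  have "(x - a) + (x - b) = cscale 2 (x - cscale (1/2) (a + b))"
    by (simp add: cscale_diff_right cscale_cscale cscale_one cscale_two algebra_simps)
  then have "hnorm ((x - a) + (x - b)) = 2 * hnorm (x - cscale (1/2) (a + b))"
    by (simp add: hnorm_cscale)
  then have "(2 * d)\<^sup>2 \<le> (hnorm ((x - a) + (x - b)))\<^sup>2" using d by (simp add: power_mono)
  moreover have "(x - a) - (x - b) = b - a" by simp
  ultimately show ?thesis
    using parallelogram[of "x - a" "x - b"] hnorm_minus_commute[of a b] by (simp add: power_mult_distrib)
qed

lemma minimizing_sequence_Cauchy:
  fixes x :: "'a::complex_inner_space"
  assumes E: "hsubspace E" and Y: "\<And>k. Y k \<in> E" and d0: "0 \<le> d"
    and dle: "\<And>e. e \<in> E \<Longrightarrow> d \<le> hnorm (x - e)" and close: "\<And>k. hnorm (x - Y k) < d + 1 / Suc k"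
  shows "\<forall>e>0. \<exists>N. \<forall>m\<ge>N. \<forall>k\<ge>N. hnorm (Y m - Y k) < e"
proof (intro allI impI)
  fix e :: real assume "e > 0"
  define b where "b = (\<lambda>N::nat. 4 * (d + 1 / Suc N)\<^sup>2 - 4 * d\<^sup>2)"
  have b: "(hnorm (Y m - Y k))\<^sup>2 \<le> b N" if "N \<le> m" "N \<le> k" for N m k
  proof -
    have "cscale (1/2) (Y m + Y k) \<in> E" using E Y by (intro hsubspace_cscale hsubspace_add)
    then have "(hnorm (Y m - Y k))\<^sup>2 \<le> 2 * (hnorm (x - Y m))\<^sup>2 + 2 * (hnorm (x - Y k))\<^sup>2 - 4 * d\<^sup>2"
      using d0 dle by (intro parallelogram_midpoint) auto
    moreover have "(hnorm (x - Y i))\<^sup>2 \<le> (d + 1 / Suc N)\<^sup>2" if "N \<le> i" for i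
    proof -
      have "1 / real (Suc i) \<le> 1 / real (Suc N)" using that by (simp add: frac_le)
      then have "hnorm (x - Y i) \<le> d + 1 / Suc N" using close[of i] by linarith
      then show ?thesis by (intro power_mono) auto
    qed
    ultimately show ?thesis using that unfolding b_def by (smt (verit, best))
  qed
  have "b \<longlonglongrightarrow> 4 * (d + 0)\<^sup>2 - 4 * d\<^sup>2"
    unfolding b_def by (intro tendsto_intros lim_inv_Suc)
  then have "b \<longlonglongrightarrow> 0" by simp
  then obtain N where "\<forall>n\<ge>N. norm (b n - 0) < e\<^sup>2" using LIMSEQ_D[of b 0 "e\<^sup>2"] \<open>e > 0\<close> by auto
  then have "(hnorm (Y m - Y k))\<^sup>2 < e\<^sup>2" if "N \<le> m" "N \<le> k" for m k
    using b[OF that] by auto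
  then show "\<exists>N. \<forall>m\<ge>N. \<forall>k\<ge>N. hnorm (Y m - Y k) < e"
    using \<open>e > 0\<close> power_less_imp_less_base[of _ 2 e] by (meson less_imp_le)
qed

lemma closed_subspace_nearest_point:
  fixes x :: "'a::chilbert_space"
  assumes E: "hsubspace E" "hclosed E"
  obtains p where "p \<in> E" "\<And>e. e \<in> E \<Longrightarrow> hnorm (x - p) \<le> hnorm (x - e)"
proof -
  define d where "d = Inf ((\<lambda>e. hnorm (x - e)) ` E)"
  have E0: "E \<noteq> {}" using hsubspace_zero[OF E(1)] by blast
  have dle: "d \<le> hnorm (x - e)" if "e \<in> E" for e
    unfolding d_def using that by (intro cInf_lower bdd_belowI[of _ 0]) auto
  have d0: "0 \<le> d" unfolding d_def using E0 by (intro cInf_greatest) auto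
  have "\<exists>e\<in>E. hnorm (x - e) < d + 1 / Suc k" for k
    using cInf_lessD[of "(\<lambda>e. hnorm (x - e)) ` E" "d + 1 / Suc k"] E0 unfolding d_def by auto
  then obtain Y where Y: "\<And>k. Y k \<in> E" "\<And>k. hnorm (x - Y k) < d + 1 / Suc k" by metis
  obtain p where p: "hconv Y p"
    using hcauchy_conv minimizing_sequence_Cauchy[OF E(1) Y(1) d0 dle Y(2)] by blast
  have "p \<in> E" using E(2) Y(1) p unfolding hclosed_def by blast
  moreover have "hnorm (x - p) \<le> d"
  proof -
    have lim: "(\<lambda>k. d + 1 / Suc k + hnorm (Y k - p)) \<longlonglongrightarrow> d + 0 + 0"
      using p unfolding hconv_def by (intro tendsto_add tendsto_const lim_inv_Suc)
    have "hnorm (x - p) \<le> d + 1 / Suc k + hnorm (Y k - p)" for k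
      using hnorm_diff_triangle[of x p "Y k"] Y(2)[of k] by simp
    then show ?thesis using LIMSEQ_le_const[OF lim] by auto
  qed
  ultimately show ?thesis using that dle by force
qed

lemma nearest_point_orthogonal:
  fixes x :: "'a::complex_inner_space"
  assumes E: "hsubspace E" and pE: "p \<in> E"
    and nearest: "\<And>e. e \<in> E \<Longrightarrow> hnorm (x - p) \<le> hnorm (x - e)" and eE: "e \<in> E"
  shows "cinner (x - p) e = 0"
proof (rule ccontr)
  define z where "z = x - p"
  define c where "c = cinner z e"
  assume "cinner (x - p) e \<noteq> 0"
  then have c0: "c \<noteq> 0" unfolding c_def z_def by simp
  \<comment> \<open>moving from p towards e by a small multiple of c strictly decreases the distance to x\<close>
  define s :: real where "s = 1 / ((hnorm e)\<^sup>2 + 1)"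
  have pe: "(hnorm e)\<^sup>2 + 1 > 0" by (simp add: add_nonneg_pos)
  have s0: "s > 0" unfolding s_def using pe by simp
  have s1: "s * (hnorm e)\<^sup>2 < 1" unfolding s_def using pe by (simp add: field_simps)
  define t where "t = complex_of_real s * c"
  have "p + cscale t e \<in> E" using E pE eE by (intro hsubspace_add hsubspace_cscale)
  then have "hnorm z \<le> hnorm (z - cscale t e)"
    using nearest unfolding z_def by (fastforce simp: algebra_simps)
  then have "(hnorm z)\<^sup>2 \<le> (hnorm (z - cscale t e))\<^sup>2" by (simp add: power_mono)
  also have "(hnorm (z - cscale t e))\<^sup>2 = (hnorm z)\<^sup>2 + (s * cmod c * hnorm e)\<^sup>2 - 2 * (s * (cmod c)\<^sup>2)"
  proof -
    have "cinner z (cscale t e) = complex_of_real (s * (cmod c)\<^sup>2)"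
      unfolding t_def c_def using complex_norm_square[of "cinner z e"]
      by (simp add: cinner_cscale_right mult.commute)
    then show ?thesis using s0 by (simp add: hnorm_diff_sq hnorm_cscale t_def norm_mult)
  qed
  finally have "2 * (s * (cmod c)\<^sup>2) \<le> (s * (hnorm e)\<^sup>2) * (s * (cmod c)\<^sup>2)"
    by (simp add: power_mult_distrib power2_eq_square algebra_simps)
  moreover have "s * (cmod c)\<^sup>2 > 0" using s0 c0 by simp
  ultimately have "2 \<le> s * (hnorm e)\<^sup>2" by (simp add: mult_le_cancel_right)
  then show False using s1 by simp
qed

lemma orthogonal_projection_exists:
  fixes x :: "'a::chilbert_space"
  assumes E: "hsubspace E" "hclosed E"
  shows "\<exists>p\<in>E. \<forall>e\<in>E. cinner (x - p) e = 0"
  by (metis closed_subspace_nearest_point[OF E] nearest_point_orthogonal[OF E(1)])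

lemma additive_on_diff:
  fixes f :: "'a::complex_inner_space \<Rightarrow> 'b::ab_group_add"
  assumes E: "hsubspace E" and add: "\<forall>x\<in>E. \<forall>y\<in>E. f (x + y) = f x + f y"
    and x: "x \<in> E" and y: "y \<in> E"
  shows "f (x - y) = f x - f y"
proof -
  have "f x = f ((x - y) + y)" by simp
  also have "\<dots> = f (x - y) + f y" using add hsubspace_diff[OF E x y] y by blast
  finally show ?thesis by simp
qed

lemma functional_kernel_closed_subspace:
  fixes \<phi> :: "'a::complex_inner_space \<Rightarrow> complex"
  assumes E: "hsubspace E" "hclosed E"
    and add: "\<forall>x\<in>E. \<forall>y\<in>E. \<phi> (x + y) = \<phi> x + \<phi> y"
    and scl: "\<forall>a. \<forall>x\<in>E. \<phi> (cscale a x) = a * \<phi> x"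
    and bnd: "\<forall>x\<in>E. cmod (\<phi> x) \<le> K * hnorm x"
  shows "hsubspace {x\<in>E. \<phi> x = 0}" "hclosed {x\<in>E. \<phi> x = 0}"
proof -
  note diff = additive_on_diff[OF E(1) add]
  have "\<phi> 0 = 0" using diff[of 0 0] hsubspace_zero[OF E(1)] by simp
  then show "hsubspace {x\<in>E. \<phi> x = 0}" unfolding hsubspace_def
    using E(1) add scl by (simp add: hsubspace_zero hsubspace_add hsubspace_cscale)
  show "hclosed {x\<in>E. \<phi> x = 0}" unfolding hclosed_def
  proof (intro allI impI)
    fix X L assume X: "\<forall>k. X k \<in> {x\<in>E. \<phi> x = 0}" "hconv X L"
    have LE: "L \<in> E" using E(2) X unfolding hclosed_def by blast
    have "cmod (\<phi> L) \<le> K * hnorm (X k - L)" for k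
    proof -
      have "X k \<in> E" "\<phi> (X k) = 0" using X(1) by auto
      then have "\<phi> (L - X k) = \<phi> L" using diff[OF LE] by simp
      moreover have "L - X k \<in> E" using hsubspace_diff[OF E(1) LE \<open>X k \<in> E\<close>] .
      ultimately show ?thesis using bnd hnorm_minus_commute[of L "X k"] by metis
    qed
    moreover have "(\<lambda>k. K * hnorm (X k - L)) \<longlonglongrightarrow> 0"
      using X(2) unfolding hconv_def by (rule tendsto_mult_right_zero)
    ultimately have "cmod (\<phi> L) \<le> 0"
      using LIMSEQ_le_const[of "\<lambda>k. K * hnorm (X k - L)" 0 "cmod (\<phi> L)"] by blast
    then show "L \<in> {x\<in>E. \<phi> x = 0}" using LE by simp
  qed
qed

lemma riesz_representation:
  fixes \<phi> :: "'a::chilbert_space \<Rightarrow> complex"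
  assumes E: "hsubspace E" "hclosed E"
    and add: "\<forall>x\<in>E. \<forall>y\<in>E. \<phi> (x + y) = \<phi> x + \<phi> y"
    and scl: "\<forall>a. \<forall>x\<in>E. \<phi> (cscale a x) = a * \<phi> x"
    and bnd: "\<forall>x\<in>E. cmod (\<phi> x) \<le> K * hnorm x"
  shows "\<exists>z\<in>E. \<forall>x\<in>E. \<phi> x = cinner x z"
proof (cases "\<forall>x\<in>E. \<phi> x = 0")
  case True
  then show ?thesis using hsubspace_zero[OF E(1)] by (intro bexI[of _ 0]) auto
next
  case False
  define N where "N = {x\<in>E. \<phi> x = 0}"
  note N = functional_kernel_closed_subspace[OF assms, folded N_def]
  note diff = additive_on_diff[OF E(1) add]
  obtain x0 where x0: "x0 \<in> E" "\<phi> x0 \<noteq> 0" using False by blast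
  obtain p where p: "p \<in> N" "\<forall>e\<in>N. cinner (x0 - p) e = 0"
    using orthogonal_projection_exists[OF N] by blast
  \<comment> \<open>w spans the orthogonal complement of the kernel within E\<close>
  define w where "w = x0 - p"
  have pE: "p \<in> E" "\<phi> p = 0" using p(1) by (auto simp: N_def)
  have wE: "w \<in> E" unfolding w_def using hsubspace_diff[OF E(1) x0(1) pE(1)] .
  have phiw: "\<phi> w = \<phi> x0" unfolding w_def using diff[OF x0(1) pE(1)] pE(2) by simp
  have w0: "cinner w w \<noteq> 0" using phiw x0(2) diff[OF wE wE] by auto
  define z where "z = cscale (cnj (\<phi> w / cinner w w)) w"
  have "\<phi> x = cinner x z" if xE: "x \<in> E" for x
  proof -
    define v where "v = cscale (\<phi> x) w - cscale (\<phi> w) x"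
    have c: "cscale (\<phi> x) w \<in> E" "cscale (\<phi> w) x \<in> E" using E(1) xE wE by (auto intro: hsubspace_cscale)
    have "\<phi> v = \<phi> x * \<phi> w - \<phi> w * \<phi> x" unfolding v_def diff[OF c] using scl xE wE by simp
    then have "v \<in> N" unfolding v_def N_def using hsubspace_diff[OF E(1) c] by simp
    then have "cinner w v = 0" using p(2) w_def by simp
    then have "cnj (\<phi> x) * cinner w w = cnj (\<phi> w) * cinner w x"
      unfolding v_def by (simp add: cinner_diff_right cinner_cscale_right)
    then have "\<phi> x * cinner w w = \<phi> w * cinner x w"
      by (metis cinner_commute complex_cnj_cnj complex_cnj_mult)
    then show ?thesis using w0 unfolding z_def by (simp add: cinner_cscale_right field_simps)
  qed
  moreover have "z \<in> E" unfolding z_def using E(1) wE by (rule hsubspace_cscale)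
  ultimately show ?thesis by blast
qed

section \<open>Bounded operators and adjoints\<close>

lemma clinear_add: "clinear T \<Longrightarrow> T (x + y) = T x + T y"
  unfolding clinear_def by blast
lemma clinear_cscale: "clinear T \<Longrightarrow> T (cscale a x) = cscale a (T x)"
  unfolding clinear_def by blast
lemma clinear_zero: "clinear T \<Longrightarrow> T 0 = 0"
  using clinear_cscale[of T 0 0] by simp
lemma clinear_minus: "clinear T \<Longrightarrow> T (- x) = - T x"
proof -
  assume c: "clinear T"
  have "T (- x) = T (cscale (-1) x)" by (simp only: cscale_neg1)
  also have "\<dots> = cscale (-1) (T x)" by (rule clinear_cscale[OF c])
  also have "\<dots> = - T x" by (rule cscale_neg1)
  finally show ?thesis .
qed
lemma clinear_diff: "clinear T \<Longrightarrow> T (x - y) = T x - T y"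
proof -
  assume c: "clinear T"
  have "T (x - y) = T (x + - y)" by (simp only: diff_conv_add_uminus)
  also have "\<dots> = T x + - T y" by (simp only: clinear_add[OF c] clinear_minus[OF c])
  finally show ?thesis by (simp only: diff_conv_add_uminus)
qed
lemma clinear_sum: "clinear T \<Longrightarrow> T (sum f A) = (\<Sum>i\<in>A. T (f i))"
  by (induction A rule: infinite_finite_induct) (auto simp: clinear_zero clinear_add)
lemma clinearI: "(\<And>x y. T (x + y) = T x + T y) \<Longrightarrow> (\<And>a x. T (cscale a x) = cscale a (T x)) \<Longrightarrow> clinear T"
  unfolding clinear_def by blast

lemma bounded_op_clinear: "bounded_op T \<Longrightarrow> clinear T"
  unfolding bounded_op_def by blast
lemma bounded_op_bound: assumes "bounded_op T" obtains K where "K \<ge> 0" "\<And>x. hnorm (T x) \<le> K * hnorm x"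
proof -
  obtain K where K: "\<forall>x. hnorm (T x) \<le> K * hnorm x" using assms unfolding bounded_op_def by blast
  have "hnorm (T x) \<le> max K 0 * hnorm x" for x
    using K[rule_format, of x] hnorm_nonneg[of x] by (smt (verit) mult_right_mono)
  then show ?thesis using that[of "max K 0"] by simp
qed
lemma bounded_opI: "clinear T \<Longrightarrow> (\<And>x. hnorm (T x) \<le> K * hnorm x) \<Longrightarrow> bounded_op T"
  unfolding bounded_op_def by blast

lemma bounded_op_id: "bounded_op (\<lambda>x. x)"
  by (rule bounded_opI[where K=1]) (auto simp: clinear_def)

lemma bounded_op_comp: assumes "bounded_op S" "bounded_op T" shows "bounded_op (\<lambda>x. S (T x))"
proof -
  obtain K1 where K1: "K1 \<ge> 0" "\<And>x. hnorm (S x) \<le> K1 * hnorm x" using assms(1) bounded_op_bound by blast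
  obtain K2 where K2: "K2 \<ge> 0" "\<And>x. hnorm (T x) \<le> K2 * hnorm x" using assms(2) bounded_op_bound by blast
  have "hnorm (S (T x)) \<le> (K1 * K2) * hnorm x" for x
  proof -
    have "hnorm (S (T x)) \<le> K1 * hnorm (T x)" by (rule K1(2))
    also have "\<dots> \<le> K1 * (K2 * hnorm x)" using K1(1) K2(2) by (rule mult_left_mono[rotated])
    finally show ?thesis by (simp add: mult.assoc)
  qed
  moreover have "clinear (\<lambda>x. S (T x))"
    using bounded_op_clinear[OF assms(1)] bounded_op_clinear[OF assms(2)]
    by (intro clinearI) (simp_all add: clinear_add clinear_cscale)
  ultimately show ?thesis by (intro bounded_opI)
qed

lemma bounded_op_diff: assumes "bounded_op S" "bounded_op T" shows "bounded_op (\<lambda>x. S x - T x)"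
proof -
  obtain K1 where K1: "K1 \<ge> 0" "\<And>x. hnorm (S x) \<le> K1 * hnorm x" using assms(1) bounded_op_bound by blast
  obtain K2 where K2: "K2 \<ge> 0" "\<And>x. hnorm (T x) \<le> K2 * hnorm x" using assms(2) bounded_op_bound by blast
  have "hnorm (S x - T x) \<le> (K1 + K2) * hnorm x" for x
    using hnorm_triangle_diff[of "S x" "T x"] K1(2)[of x] K2(2)[of x] by (simp add: algebra_simps)
  moreover have "clinear (\<lambda>x. S x - T x)"
    using bounded_op_clinear[OF assms(1)] bounded_op_clinear[OF assms(2)]
    by (intro clinearI) (simp_all add: clinear_add clinear_cscale cscale_diff_right)
  ultimately show ?thesis by (intro bounded_opI)
qed

lemma bounded_hconv: assumes "bounded_op T" "hconv X L" shows "hconv (\<lambda>k. T (X k)) (T L)"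
proof -
  obtain K where K: "K \<ge> 0" "\<And>x. hnorm (T x) \<le> K * hnorm x" using assms(1) bounded_op_bound by blast
  have "hnorm (T (X k) - T L) \<le> K * hnorm (X k - L)" for k
    using K(2)[of "X k - L"] clinear_diff[OF bounded_op_clinear[OF assms(1)]] by simp
  then show ?thesis using assms(2) by (rule hconv_le)
qed

lemma funpow_norm: fixes C :: "'a::complex_inner_space \<Rightarrow> 'a"
  shows "(\<And>x. hnorm (C x) \<le> hnorm x) \<Longrightarrow> hnorm ((C ^^ k) x) \<le> hnorm x"
proof (induction k arbitrary: x)
  case 0 then show ?case by simp
next
  case (Suc k)
  have "hnorm ((C ^^ Suc k) x) = hnorm (C ((C ^^ k) x))" by simp
  also have "\<dots> \<le> hnorm ((C ^^ k) x)" by (rule Suc.prems)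
  also have "\<dots> \<le> hnorm x" by (rule Suc.IH[OF Suc.prems])
  finally show ?case .
qed

lemma funpow_selfadj: fixes C :: "'a::complex_inner_space \<Rightarrow> 'a"
  shows "(\<And>x y. cinner (C x) y = cinner x (C y)) \<Longrightarrow> cinner ((C ^^ k) x) y = cinner x ((C ^^ k) y)"
proof (induction k arbitrary: x)
  case 0 then show ?case by simp
next
  case (Suc k)
  have "cinner ((C ^^ Suc k) x) y = cinner ((C ^^ k) (C x)) y" by (simp only: funpow_Suc_right comp_def)
  also have "\<dots> = cinner (C x) ((C ^^ k) y)" by (rule Suc.IH[OF Suc.prems])
  also have "\<dots> = cinner x (C ((C ^^ k) y))" by (rule Suc.prems)
  finally show ?case by simp
qed

lemma funpow_clinear: fixes C :: "'a::complex_inner_space \<Rightarrow> 'a"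
  shows "clinear C \<Longrightarrow> clinear (C ^^ k)"
proof (induction k)
  case 0 then show ?case by (simp add: clinear_def)
next
  case (Suc k)
  then show ?case using Suc by (simp add: clinear_def)
qed

lemma funpow_intertwine: fixes C1 C2 :: "'a \<Rightarrow> 'a"
  shows "(\<And>x. Q (C1 x) = C2 (Q x)) \<Longrightarrow> Q ((C1 ^^ k) x) = (C2 ^^ k) (Q x)"
  by (induction k) auto

lemma cinner_eq_right_unique: "(\<forall>x. cinner x (z1::'a::complex_inner_space) = cinner x z2) \<Longrightarrow> z1 = z2"
proof -
  assume a: "\<forall>x. cinner x z1 = cinner x z2"
  have "cinner (z1 - z2) (z1 - z2) = 0"
    using a by (simp add: cinner_diff_right cinner_diff_left)
  then show ?thesis by simp
qed

lemma adj_unique: assumes "\<forall>x. cinner (T x) y = cinner x z" shows "adj T y = z"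
  unfolding adj_def
proof (rule the_equality)
  show "\<forall>x. cinner (T x) y = cinner x z" by (rule assms)
next
  fix z' assume "\<forall>x. cinner (T x) y = cinner x z'"
  then show "z' = z" using assms cinner_eq_right_unique by metis
qed

lemma adj_eqI: "(\<And>x y. cinner (T x) y = cinner x (G y)) \<Longrightarrow> adj T = G"
  using adj_unique by blast

lemma adj_cinner:
  fixes T :: "'a::chilbert_space \<Rightarrow> 'a"
  assumes "bounded_op T" shows "cinner (T x) y = cinner x (adj T y)"
proof -
  obtain K where K: "K \<ge> 0" "\<And>x. hnorm (T x) \<le> K * hnorm x" using assms bounded_op_bound by blast
  have c: "clinear T" using assms bounded_op_clinear by blast
  have "\<exists>z\<in>UNIV. \<forall>x\<in>UNIV. cinner (T x) y = cinner x z"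
  proof (rule riesz_representation[OF hsubspace_UNIV hclosed_UNIV])
    show "\<forall>x\<in>UNIV. \<forall>x'\<in>UNIV. cinner (T (x + x')) y = cinner (T x) y + cinner (T x') y"
      by (simp add: clinear_add[OF c] cinner_add_left)
    show "\<forall>a. \<forall>x\<in>UNIV. cinner (T (cscale a x)) y = a * cinner (T x) y"
      by (simp add: clinear_cscale[OF c] cinner_cscale_left)
    show "\<forall>x\<in>UNIV. cmod (cinner (T x) y) \<le> (K * hnorm y) * hnorm x"
    proof
      fix x
      have "cmod (cinner (T x) y) \<le> hnorm (T x) * hnorm y" by (rule cauchy_schwarz)
      also have "\<dots> \<le> K * hnorm x * hnorm y" using K(2)[of x] by (simp add: mult_right_mono)
      finally show "cmod (cinner (T x) y) \<le> (K * hnorm y) * hnorm x" by (simp add: algebra_simps)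
    qed
  qed
  then obtain z where "\<forall>x. cinner (T x) y = cinner x z" by blast
  moreover then have "adj T y = z" by (rule adj_unique)
  ultimately show ?thesis by simp
qed

lemma adj_cinner_left: "bounded_op (T::'a::chilbert_space \<Rightarrow> 'a) \<Longrightarrow> cinner (adj T y) x = cinner y (T x)"
proof -
  assume b: "bounded_op T"
  have "cinner (adj T y) x = cnj (cinner x (adj T y))" by (rule cinner_commute)
  also have "\<dots> = cnj (cinner (T x) y)" by (simp add: adj_cinner[OF b])
  also have "\<dots> = cinner y (T x)" by (rule cinner_commute[symmetric])
  finally show ?thesis .
qed

lemma adjoint_norm_bound:
  fixes T :: "'a::complex_inner_space \<Rightarrow> 'a"
  assumes zz: "cinner z z = cinner (T z) y" and T: "hnorm (T z) \<le> K * hnorm z" and K: "0 \<le> K"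
  shows "hnorm z \<le> K * hnorm y"
proof -
  have "(hnorm z)\<^sup>2 \<le> cmod (cinner (T z) y)" using complex_Re_le_cmod by (simp add: hnorm_sq zz)
  also have "\<dots> \<le> hnorm (T z) * hnorm y" by (rule cauchy_schwarz)
  also have "\<dots> \<le> (K * hnorm z) * hnorm y" using T by (simp add: mult_right_mono)
  also have "\<dots> = (K * hnorm y) * hnorm z" by simp
  finally have "hnorm z * hnorm z \<le> (K * hnorm y) * hnorm z" by (simp add: power2_eq_square)
  moreover have "hnorm z = 0 \<or> hnorm z > 0" using hnorm_nonneg[of z] by linarith
  ultimately show ?thesis using K by (auto simp: mult_le_cancel_right)
qed

lemma adj_norm_le:
  fixes T :: "'a::chilbert_space \<Rightarrow> 'a"
  assumes "bounded_op T" "\<And>x. hnorm (T x) \<le> K * hnorm x" "0 \<le> K"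
  shows "hnorm (adj T y) \<le> K * hnorm y"
  by (rule adjoint_norm_bound[where T=T]) (simp_all add: assms adj_cinner[OF assms(1)])

lemma adj_bounded: assumes "bounded_op (T::'a::chilbert_space \<Rightarrow> 'a)" shows "bounded_op (adj T)"
proof -
  obtain K where K: "K \<ge> 0" "\<And>x. hnorm (T x) \<le> K * hnorm x" using assms bounded_op_bound by blast
  have "clinear (adj T)"
  proof (rule clinearI)
    show "adj T (y1 + y2) = adj T y1 + adj T y2" for y1 y2
      by (rule adj_unique) (simp add: cinner_add_right adj_cinner[OF assms])
    show "adj T (cscale a y) = cscale a (adj T y)" for a y
      by (rule adj_unique) (simp add: cinner_cscale_right adj_cinner[OF assms])
  qed
  then show ?thesis using adj_norm_le[OF assms K(2,1)] by (intro bounded_opI)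
qed

lemma adj_adj: assumes "bounded_op (T::'a::chilbert_space \<Rightarrow> 'a)" shows "adj (adj T) = T"
  by (rule adj_eqI) (rule adj_cinner_left[OF assms])

lemma adj_funpow: assumes "bounded_op (T::'a::chilbert_space \<Rightarrow> 'a)"
  shows "cinner ((T ^^ m) x) y = cinner x ((adj T ^^ m) y)"
proof (induction m arbitrary: x)
  case 0 then show ?case by simp
next
  case (Suc m)
  have "cinner ((T ^^ Suc m) x) y = cinner ((T ^^ m) (T x)) y" by (simp only: funpow_Suc_right comp_def)
  also have "\<dots> = cinner (T x) ((adj T ^^ m) y)" by (rule Suc)
  also have "\<dots> = cinner x (adj T ((adj T ^^ m) y))" by (rule adj_cinner[OF assms])
  finally show ?case by simp
qed

lemma adj_commute:
  fixes S T :: "'a::chilbert_space \<Rightarrow> 'a"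
  assumes S: "bounded_op S" and T: "bounded_op T" and comm: "\<And>x. S (T x) = T (S x)"
  shows "adj S (adj T y) = adj T (adj S y)"
proof (rule cinner_eq_right_unique, rule allI)
  fix w
  have "cinner w (adj S (adj T y)) = cinner (T (S w)) y" by (simp add: adj_cinner[OF S] adj_cinner[OF T])
  also have "\<dots> = cinner w (adj T (adj S y))" by (simp add: comm[symmetric] adj_cinner[OF S] adj_cinner[OF T])
  finally show "cinner w (adj S (adj T y)) = cinner w (adj T (adj S y))" .
qed

definition bounded_op_on :: "'a::complex_inner_space set \<Rightarrow> ('a \<Rightarrow> 'a) \<Rightarrow> bool" where
  "bounded_op_on E T \<longleftrightarrow> (\<forall>x\<in>E. \<forall>y\<in>E. T (x + y) = T x + T y) \<and>
     (\<forall>a. \<forall>x\<in>E. T (cscale a x) = cscale a (T x)) \<and> (\<exists>K. \<forall>x\<in>E. hnorm (T x) \<le> K * hnorm x)"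

lemma bounded_op_on_bound:
  assumes "bounded_op_on E T" obtains K where "K \<ge> 0" "\<And>x. x \<in> E \<Longrightarrow> hnorm (T x) \<le> K * hnorm x"
proof -
  obtain K where K: "\<forall>x\<in>E. hnorm (T x) \<le> K * hnorm x" using assms unfolding bounded_op_on_def by blast
  have "hnorm (T x) \<le> max K 0 * hnorm x" if "x \<in> E" for x
  proof -
    have "hnorm (T x) \<le> K * hnorm x" using K that by blast
    also have "\<dots> \<le> max K 0 * hnorm x" by (intro mult_right_mono) simp_all
    finally show ?thesis .
  qed
  then show ?thesis by (intro that[of "max K 0"]) simp_all
qed

lemma adj_on_cinner:
  fixes T :: "'a::chilbert_space \<Rightarrow> 'a"
  assumes E: "hsubspace E" "hclosed E" and T: "bounded_op_on E T"
  shows "adj_on E T y \<in> E" and "\<And>x. x \<in> E \<Longrightarrow> cinner (T x) y = cinner x (adj_on E T y)"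
proof -
  obtain K where K: "K \<ge> 0" "\<And>x. x \<in> E \<Longrightarrow> hnorm (T x) \<le> K * hnorm x"
    using T bounded_op_on_bound by blast
  have "\<exists>z\<in>E. \<forall>x\<in>E. cinner (T x) y = cinner x z"
  proof (rule riesz_representation[OF E])
    show "\<forall>x\<in>E. \<forall>x'\<in>E. cinner (T (x + x')) y = cinner (T x) y + cinner (T x') y"
      using T by (simp add: bounded_op_on_def cinner_add_left)
    show "\<forall>a. \<forall>x\<in>E. cinner (T (cscale a x)) y = a * cinner (T x) y"
      using T by (simp add: bounded_op_on_def cinner_cscale_left)
    show "\<forall>x\<in>E. cmod (cinner (T x) y) \<le> (K * hnorm y) * hnorm x"
    proof
      fix x assume "x \<in> E"
      have "cmod (cinner (T x) y) \<le> hnorm (T x) * hnorm y" by (rule cauchy_schwarz)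
      also have "\<dots> \<le> (K * hnorm x) * hnorm y" using K(2)[OF \<open>x \<in> E\<close>] by (simp add: mult_right_mono)
      finally show "cmod (cinner (T x) y) \<le> (K * hnorm y) * hnorm x" by (simp add: algebra_simps)
    qed
  qed
  then obtain z where z: "z \<in> E" "\<forall>x\<in>E. cinner (T x) y = cinner x z" by blast
  have "adj_on E T y = z" unfolding adj_on_def
  proof (rule the_equality)
    show "z \<in> E \<and> (\<forall>x\<in>E. cinner (T x) y = cinner x z)" using z by blast
  next
    fix z' assume z': "z' \<in> E \<and> (\<forall>x\<in>E. cinner (T x) y = cinner x z')"
    have "z' - z \<in> E" using z' z(1) E(1) by (blast intro: hsubspace_diff)
    then have "cinner (z' - z) z' = cinner (z' - z) z" using z' z(2) by metis
    then have "cinner (z' - z) (z' - z) = 0" by (simp add: cinner_diff_right)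
    then show "z' = z" by simp
  qed
  then show "adj_on E T y \<in> E" "\<And>x. x \<in> E \<Longrightarrow> cinner (T x) y = cinner x (adj_on E T y)"
    using z by simp_all
qed

lemma adj_on_cinner_left:
  fixes T :: "'a::chilbert_space \<Rightarrow> 'a"
  assumes "hsubspace E" "hclosed E" "bounded_op_on E T" "x \<in> E"
  shows "cinner (adj_on E T y) x = cinner y (T x)"
proof -
  have "cinner (adj_on E T y) x = cnj (cinner x (adj_on E T y))" by (rule cinner_commute)
  also have "\<dots> = cnj (cinner (T x) y)" using adj_on_cinner(2)[OF assms] by simp
  finally show ?thesis by (simp add: cinner_commute[of y])
qed

lemma adj_on_bound:
  fixes T :: "'a::chilbert_space \<Rightarrow> 'a"
  assumes E: "hsubspace E" "hclosed E" and T: "bounded_op_on E T"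
  obtains K where "\<And>y. hnorm (adj_on E T y) \<le> K * hnorm y"
proof -
  obtain K where K: "K \<ge> 0" "\<And>x. x \<in> E \<Longrightarrow> hnorm (T x) \<le> K * hnorm x"
    using T bounded_op_on_bound by blast
  have "hnorm (adj_on E T y) \<le> K * hnorm y" for y
  proof (rule adjoint_norm_bound[where T=T])
    show "cinner (adj_on E T y) (adj_on E T y) = cinner (T (adj_on E T y)) y"
      using adj_on_cinner[OF E T] by simp
    show "hnorm (T (adj_on E T y)) \<le> K * hnorm (adj_on E T y)"
      using adj_on_cinner(1)[OF E T] K(2) by blast
  qed (rule K(1))
  then show ?thesis using that by blast
qed

section \<open>Square roots of positive contractions\<close>

text \<open>The Taylor coefficients c_k of 1 - sqrt (1 - t) = (\<Sum>k\<ge>1. c_k t^k): squaring gives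
  s^2 = 2 s - t for s = (\<Sum>k. c_k t^k), whence c_1 = 1/2 and 2 c_n = (\<Sum>0<j<n. c_j c_(n-j)).\<close>

function sqrt_coeff :: "nat \<Rightarrow> real" where
  "sqrt_coeff n = (if n = 0 then 0 else if n = 1 then 1/2 else (\<Sum>j\<in>{1..<n}. sqrt_coeff j * sqrt_coeff (n - j)) / 2)"
  by auto
termination by (relation "Wellfounded.measure id") auto

declare sqrt_coeff.simps[simp del]

lemma sqrt_coeff_0[simp]: "sqrt_coeff 0 = 0" by (simp add: sqrt_coeff.simps)
lemma sqrt_coeff_1[simp]: "sqrt_coeff 1 = 1/2" by (simp add: sqrt_coeff.simps)
lemma sqrt_coeff_Suc0[simp]: "sqrt_coeff (Suc 0) = 1/2" by (simp add: sqrt_coeff.simps)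
lemma sqrt_coeff_rec: "n \<ge> 2 \<Longrightarrow> (\<Sum>j\<in>{1..<n}. sqrt_coeff j * sqrt_coeff (n - j)) = 2 * sqrt_coeff n"
  by (subst (2) sqrt_coeff.simps) auto
lemma sqrt_coeff_nonneg: "sqrt_coeff n \<ge> 0"
proof (induction n rule: less_induct)
  case (less n)
  show ?case
  proof (cases "n \<ge> 2")
    case True
    have "(\<Sum>j\<in>{1..<n}. sqrt_coeff j * sqrt_coeff (n - j)) \<ge> 0"
      by (rule sum_nonneg) (use less True in \<open>auto intro!: mult_nonneg_nonneg\<close>)
    then show ?thesis using sqrt_coeff_rec[OF True] by simp
  next
    case False
    then have "n = 0 \<or> n = 1" by auto
    then show ?thesis by auto
  qed
qed

definition triangle_idx :: "nat \<Rightarrow> (nat \<times> nat) set" where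
  "triangle_idx N = {(j, l). 1 \<le> j \<and> 1 \<le> l \<and> j + l \<le> N}"

lemma triangle_idx_sub: "triangle_idx N \<subseteq> {1..N - 1} \<times> {1..N - 1}"
  unfolding triangle_idx_def by auto

lemma triangle_idx_reindex:
  fixes F :: "nat \<Rightarrow> nat \<Rightarrow> 'b::comm_monoid_add"
  shows "(\<Sum>(j, l)\<in>triangle_idx N. F j l) = (\<Sum>k\<in>{2..N}. \<Sum>j\<in>{1..<k}. F j (k - j))"
proof -
  have "(\<Sum>k\<in>{2..N}. \<Sum>j\<in>{1..<k}. F j (k - j)) = (\<Sum>(k, j)\<in>Sigma {2..N} (\<lambda>k. {1..<k}). F j (k - j))"
    by (rule sum.Sigma) auto
  also have "\<dots> = (\<Sum>(j, l)\<in>triangle_idx N. F j l)"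
  proof (rule sum.reindex_bij_witness[where i="\<lambda>(j, l). (j + l, j)" and j="\<lambda>(k, j). (j, k - j)"])
    show "\<And>a. a \<in> Sigma {2..N} (\<lambda>k. {1..<k}) \<Longrightarrow> (case case a of (k, j) \<Rightarrow> (j, k - j) of (j, l) \<Rightarrow> (j + l, j)) = a"
      by auto
    show "\<And>a. a \<in> Sigma {2..N} (\<lambda>k. {1..<k}) \<Longrightarrow> (case a of (k, j) \<Rightarrow> (j, k - j)) \<in> triangle_idx N"
      unfolding triangle_idx_def by auto
    show "\<And>b. b \<in> triangle_idx N \<Longrightarrow> (case case b of (j, l) \<Rightarrow> (j + l, j) of (k, j) \<Rightarrow> (j, k - j)) = b"
      unfolding triangle_idx_def by auto
    show "\<And>b. b \<in> triangle_idx N \<Longrightarrow> (case b of (j, l) \<Rightarrow> (j + l, j)) \<in> Sigma {2..N} (\<lambda>k. {1..<k})"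
      unfolding triangle_idx_def by auto
    show "\<And>a. a \<in> Sigma {2..N} (\<lambda>k. {1..<k}) \<Longrightarrow> (case case a of (k, j) \<Rightarrow> (j, k - j) of (j, l) \<Rightarrow> F j l) = (case a of (k, j) \<Rightarrow> F j (k - j))"
      by auto
  qed
  finally show ?thesis by simp
qed

definition sqrt_coeff_sum :: "nat \<Rightarrow> real" where "sqrt_coeff_sum N = (\<Sum>k\<in>{1..N}. sqrt_coeff k)"

lemma sqrt_coeff_sum_0[simp]: "sqrt_coeff_sum 0 = 0" by (simp add: sqrt_coeff_sum_def)
lemma sqrt_coeff_sum_nonneg: "sqrt_coeff_sum N \<ge> 0" unfolding sqrt_coeff_sum_def by (rule sum_nonneg) (simp add: sqrt_coeff_nonneg)
lemma sqrt_coeff_sum_mono: "M \<le> N \<Longrightarrow> sqrt_coeff_sum M \<le> sqrt_coeff_sum N"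
  unfolding sqrt_coeff_sum_def by (rule sum_mono2) (auto simp: sqrt_coeff_nonneg)
lemma sqrt_coeff_sum_diff: "M \<le> N \<Longrightarrow> sqrt_coeff_sum N - sqrt_coeff_sum M = (\<Sum>k\<in>{M<..N}. sqrt_coeff k)"
proof -
  assume "M \<le> N"
  then have "{1..N} = {1..M} \<union> {M<..N}" by auto
  moreover have "{1..M} \<inter> {M<..N} = {}" by auto
  ultimately have "sqrt_coeff_sum N = sqrt_coeff_sum M + (\<Sum>k\<in>{M<..N}. sqrt_coeff k)" unfolding sqrt_coeff_sum_def
    by (simp add: sum.union_disjoint)
  then show ?thesis by simp
qed

lemma triangle_sum_sqrt_coeff: "N \<ge> 1 \<Longrightarrow> (\<Sum>(j, l)\<in>triangle_idx N. sqrt_coeff j * sqrt_coeff l) = 2 * sqrt_coeff_sum N - 1"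
proof -
  assume N: "N \<ge> 1"
  have "(\<Sum>(j, l)\<in>triangle_idx N. sqrt_coeff j * sqrt_coeff l) = (\<Sum>k\<in>{2..N}. \<Sum>j\<in>{1..<k}. sqrt_coeff j * sqrt_coeff (k - j))"
    by (rule triangle_idx_reindex)
  also have "\<dots> = (\<Sum>k\<in>{2..N}. 2 * sqrt_coeff k)" by (intro sum.cong refl sqrt_coeff_rec) simp
  also have "\<dots> = 2 * (\<Sum>k\<in>{2..N}. sqrt_coeff k)" by (simp add: sum_distrib_left)
  also have "sqrt_coeff_sum N = sqrt_coeff 1 + (\<Sum>k\<in>{2..N}. sqrt_coeff k)"
  proof -
    have "{1..N} = insert 1 {2..N}" using N by auto
    then show ?thesis unfolding sqrt_coeff_sum_def by simp
  qed
  ultimately show ?thesis by simp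
qed

lemma square_sum_sqrt_coeff: "(\<Sum>(j, l)\<in>{1..N} \<times> {1..N}. sqrt_coeff j * sqrt_coeff l) = (sqrt_coeff_sum N)\<^sup>2"
  unfolding sqrt_coeff_sum_def power2_eq_square sum_product sum.cartesian_product by simp

lemma sqrt_coeff_sum_le_1: "sqrt_coeff_sum N \<le> 1"
proof (induction N rule: less_induct)
  case (less N)
  show ?case
  proof (cases "N \<ge> 1")
    case False then have "N = 0" by simp
    then show ?thesis by simp
  next
    case True
    have "2 * sqrt_coeff_sum N - 1 = (\<Sum>(j, l)\<in>triangle_idx N. sqrt_coeff j * sqrt_coeff l)" using triangle_sum_sqrt_coeff[OF True] by simp
    also have "\<dots> \<le> (\<Sum>(j, l)\<in>{1..N-1} \<times> {1..N-1}. sqrt_coeff j * sqrt_coeff l)"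
      by (rule sum_mono2[OF _ triangle_idx_sub]) (auto simp: sqrt_coeff_nonneg)
    also have "\<dots> = (sqrt_coeff_sum (N - 1))\<^sup>2" by (rule square_sum_sqrt_coeff)
    also have "\<dots> \<le> 1" using less[of "N - 1"] True sqrt_coeff_sum_nonneg[of "N - 1"]
      by (simp add: power_le_one)
    finally show ?thesis by simp
  qed
qed

text \<open>The c_k sum to 1: the products c_j c_l with j, l \<le> N and j + l > N add up to
  (1 - s_N)^2, and they are dominated by 2 (s_N - s_(N div 2)).\<close>

definition corner_idx :: "nat \<Rightarrow> (nat \<times> nat) set" where
  "corner_idx N = {1..N} \<times> {1..N} - triangle_idx N"

lemma corner_sum_eq: "N \<ge> 1 \<Longrightarrow> (\<Sum>(j, l)\<in>corner_idx N. sqrt_coeff j * sqrt_coeff l) = (1 - sqrt_coeff_sum N)\<^sup>2"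
proof -
  assume N: "N \<ge> 1"
  have sub: "triangle_idx N \<subseteq> {1..N} \<times> {1..N}" unfolding triangle_idx_def by auto
  have "(\<Sum>(j, l)\<in>corner_idx N. sqrt_coeff j * sqrt_coeff l) = (\<Sum>(j, l)\<in>{1..N} \<times> {1..N}. sqrt_coeff j * sqrt_coeff l) - (\<Sum>(j, l)\<in>triangle_idx N. sqrt_coeff j * sqrt_coeff l)"
    unfolding corner_idx_def by (rule sum_diff) (use sub in auto)
  also have "\<dots> = (sqrt_coeff_sum N)\<^sup>2 - (2 * sqrt_coeff_sum N - 1)" using square_sum_sqrt_coeff triangle_sum_sqrt_coeff[OF N] by simp
  finally show ?thesis by (simp add: power2_eq_square algebra_simps)
qed

lemma corner_sum_bound: "N \<ge> 1 \<Longrightarrow> (1 - sqrt_coeff_sum N)\<^sup>2 \<le> 2 * (sqrt_coeff_sum N - sqrt_coeff_sum (N div 2))"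
proof -
  assume True: "N \<ge> 1"
  define h where "h = N div 2"
  have hN: "h \<le> N" unfolding h_def by simp
  have sub: "corner_idx N \<subseteq> ({h<..N} \<times> {1..N}) \<union> ({1..N} \<times> {h<..N})"
    unfolding corner_idx_def triangle_idx_def h_def by auto
  have "(1 - sqrt_coeff_sum N)\<^sup>2 = (\<Sum>(j, l)\<in>corner_idx N. sqrt_coeff j * sqrt_coeff l)" using corner_sum_eq[OF True] by simp
  also have "\<dots> \<le> (\<Sum>(j, l)\<in>({h<..N} \<times> {1..N}) \<union> ({1..N} \<times> {h<..N}). sqrt_coeff j * sqrt_coeff l)"
    by (rule sum_mono2[OF _ sub]) (auto simp: sqrt_coeff_nonneg)
  also have "\<dots> \<le> (\<Sum>(j, l)\<in>{h<..N} \<times> {1..N}. sqrt_coeff j * sqrt_coeff l) + (\<Sum>(j, l)\<in>{1..N} \<times> {h<..N}. sqrt_coeff j * sqrt_coeff l)"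
  proof -
    have "\<forall>p\<in>({h<..N} \<times> {1..N}) \<inter> ({1..N} \<times> {h<..N}). (case p of (j, l) \<Rightarrow> sqrt_coeff j * sqrt_coeff l) \<ge> 0"
      by (auto simp: sqrt_coeff_nonneg)
    then have "(\<Sum>(j, l)\<in>({h<..N} \<times> {1..N}) \<inter> ({1..N} \<times> {h<..N}). sqrt_coeff j * sqrt_coeff l) \<ge> 0"
      by (intro sum_nonneg) auto
    then show ?thesis by (subst sum_Un) auto
  qed
  also have "(\<Sum>(j, l)\<in>{h<..N} \<times> {1..N}. sqrt_coeff j * sqrt_coeff l) = (sqrt_coeff_sum N - sqrt_coeff_sum h) * sqrt_coeff_sum N"
    unfolding sqrt_coeff_sum_diff[OF hN] unfolding sqrt_coeff_sum_def sum_product sum.cartesian_product by simp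
  also have "(\<Sum>(j, l)\<in>{1..N} \<times> {h<..N}. sqrt_coeff j * sqrt_coeff l) = sqrt_coeff_sum N * (sqrt_coeff_sum N - sqrt_coeff_sum h)"
    unfolding sqrt_coeff_sum_diff[OF hN] unfolding sqrt_coeff_sum_def sum_product sum.cartesian_product by simp
  finally have "(1 - sqrt_coeff_sum N)\<^sup>2 \<le> 2 * (sqrt_coeff_sum N - sqrt_coeff_sum h) * sqrt_coeff_sum N" by (simp add: algebra_simps)
  also have "\<dots> \<le> 2 * (sqrt_coeff_sum N - sqrt_coeff_sum h)"
    using sqrt_coeff_sum_le_1[of N] sqrt_coeff_sum_mono[OF hN] by (simp add: mult_left_le)
  finally show ?thesis unfolding h_def .
qed

lemma sqrt_coeff_sum_tendsto_1: "sqrt_coeff_sum \<longlonglongrightarrow> 1"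
proof -
  have mono: "mono sqrt_coeff_sum" unfolding mono_def using sqrt_coeff_sum_mono by blast
  have bdd: "bdd_above (range sqrt_coeff_sum)" using sqrt_coeff_sum_le_1 by (intro bdd_aboveI[of _ 1]) auto
  define t where "t = (SUP N. sqrt_coeff_sum N)"
  have lim: "sqrt_coeff_sum \<longlonglongrightarrow> t" unfolding t_def by (rule LIMSEQ_incseq_SUP[OF bdd]) (simp add: mono incseq_def sqrt_coeff_sum_mono)
  have tle: "sqrt_coeff_sum N \<le> t" for N unfolding t_def using bdd by (intro cSUP_upper) auto
  have t1: "t \<le> 1" unfolding t_def using sqrt_coeff_sum_le_1 by (simp add: cSUP_least)
  have "(1 - t)\<^sup>2 \<le> d" if d: "d > 0" for d
  proof -
    obtain M where M: "\<forall>n\<ge>M. dist (sqrt_coeff_sum n) t < d / 2" using lim d unfolding LIMSEQ_def by (meson half_gt_zero)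
    define M1 where "M1 = Suc M"
    have "t - sqrt_coeff_sum M1 < d / 2" using M[rule_format, of M1] tle[of M1] M1_def by (simp add: dist_real_def)
    have "(1 - t)\<^sup>2 \<le> (1 - sqrt_coeff_sum (2 * M1))\<^sup>2"
      using tle[of "2*M1"] t1 by (intro power_mono) auto
    also have "\<dots> \<le> 2 * (sqrt_coeff_sum (2 * M1) - sqrt_coeff_sum M1)" using corner_sum_bound[of "2 * M1"] M1_def by simp
    also have "\<dots> \<le> 2 * (t - sqrt_coeff_sum M1)" using tle[of "2*M1"] by simp
    also have "\<dots> < d" using \<open>t - sqrt_coeff_sum M1 < d / 2\<close> by simp
    finally show ?thesis by simp
  qed
  then have "(1 - t)\<^sup>2 \<le> 0" by (meson dense not_le)
  then have "t = 1" by simp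
  then show ?thesis using lim by simp
qed

lemma corner_sum_tendsto: "(\<lambda>N. (1 - sqrt_coeff_sum N)\<^sup>2) \<longlonglongrightarrow> 0"
proof -
  have "(\<lambda>N. (1 - sqrt_coeff_sum N)\<^sup>2) \<longlonglongrightarrow> (1 - 1)\<^sup>2"
    by (intro tendsto_intros sqrt_coeff_sum_tendsto_1)
  then show ?thesis by simp
qed

definition pos_contraction :: "('a::complex_inner_space \<Rightarrow> 'a) \<Rightarrow> bool" where
  "pos_contraction C \<longleftrightarrow> bounded_op C \<and> (\<forall>x y. cinner (C x) y = cinner x (C y)) \<and>
     (\<forall>x. 0 \<le> Re (cinner (C x) x)) \<and> (\<forall>x. hnorm (C x) \<le> hnorm x)"

lemma pos_contraction_bounded: "pos_contraction C \<Longrightarrow> bounded_op C" unfolding pos_contraction_def by blast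
lemma pos_contraction_selfadj: "pos_contraction C \<Longrightarrow> cinner (C x) y = cinner x (C y)" unfolding pos_contraction_def by blast
lemma pos_contraction_nonneg: "pos_contraction C \<Longrightarrow> 0 \<le> Re (cinner (C x) x)" unfolding pos_contraction_def by blast
lemma pos_contraction_contractive: "pos_contraction C \<Longrightarrow> hnorm (C x) \<le> hnorm x" unfolding pos_contraction_def by blast

lemma pos_contraction_pow_inner:
  assumes "pos_contraction C"
  shows "Im (cinner ((C ^^ k) x) x) = 0 \<and> 0 \<le> Re (cinner ((C ^^ k) x) x) \<and> Re (cinner ((C ^^ k) x) x) \<le> (hnorm x)\<^sup>2"
proof -
  have sa: "\<And>x y. cinner (C x) y = cinner x (C y)" using pos_contraction_selfadj[OF assms] .
  have im: "Im (cinner ((C ^^ k) x) x) = 0"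
  proof -
    have "cinner ((C ^^ k) x) x = cinner x ((C ^^ k) x)" by (rule funpow_selfadj[OF sa])
    also have "\<dots> = cnj (cinner ((C ^^ k) x) x)" by (rule cinner_commute)
    finally have "cinner ((C ^^ k) x) x = cnj (cinner ((C ^^ k) x) x)" .
    from arg_cong[OF this, of Im] show ?thesis by simp
  qed
  have nonneg: "0 \<le> Re (cinner ((C ^^ k) x) x)"
  proof -
    define m where "m = k div 2"
    have m: "k = m + m \<or> k = Suc (m + m)" unfolding m_def by presburger
    then show ?thesis
    proof
      assume "k = m + m"
      then have "cinner ((C ^^ k) x) x = cinner ((C ^^ m) x) ((C ^^ m) x)"
        by (simp add: funpow_add funpow_selfadj[OF sa])
      then show ?thesis by (simp add: cinner_self_nonneg)
    next
      assume "k = Suc (m + m)"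
      then have "cinner ((C ^^ k) x) x = cinner ((C ^^ m) ((C ^^ m) (C x))) x"
        by (simp only: funpow_Suc_right funpow_add comp_def)
      also have "\<dots> = cinner ((C ^^ m) (C x)) ((C ^^ m) x)" by (rule funpow_selfadj[OF sa])
      also have "(C ^^ m) (C x) = C ((C ^^ m) x)" by (simp add: funpow_swap1)
      finally show ?thesis using pos_contraction_nonneg[OF assms] by simp
    qed
  qed
  have "Re (cinner ((C ^^ k) x) x) \<le> cmod (cinner ((C ^^ k) x) x)" by (rule complex_Re_le_cmod)
  also have "\<dots> \<le> hnorm ((C ^^ k) x) * hnorm x" by (rule cauchy_schwarz)
  also have "\<dots> \<le> hnorm x * hnorm x" using funpow_norm[OF pos_contraction_contractive[OF assms]] by (simp add: mult_right_mono)
  finally show ?thesis using im nonneg by (simp add: power2_eq_square)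
qed

definition sqrt_partial :: "('a::complex_inner_space \<Rightarrow> 'a) \<Rightarrow> nat \<Rightarrow> 'a \<Rightarrow> 'a" where
  "sqrt_partial C N x = (\<Sum>k\<in>{1..N}. cscale (of_real (sqrt_coeff k)) ((C ^^ k) x))"

lemma sqrt_partial_clinear: assumes "clinear C" shows "clinear (sqrt_partial C N)"
proof (rule clinearI)
  note l = funpow_clinear[OF assms]
  fix x y show "sqrt_partial C N (x + y) = sqrt_partial C N x + sqrt_partial C N y"
    unfolding sqrt_partial_def by (simp add: clinear_add[OF l] cscale_add_right sum.distrib)
next
  note l = funpow_clinear[OF assms]
  fix a x show "sqrt_partial C N (cscale a x) = cscale a (sqrt_partial C N x)"
    unfolding sqrt_partial_def by (simp add: clinear_cscale[OF l] cscale_sum cscale_cscale mult.commute)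
qed

lemma sqrt_partial_diff_bound:
  assumes "\<And>x. hnorm (C x) \<le> hnorm x" "N \<le> M"
  shows "hnorm (sqrt_partial C M x - sqrt_partial C N x) \<le> (sqrt_coeff_sum M - sqrt_coeff_sum N) * hnorm x"
proof -
  have "{1..M} = {1..N} \<union> {N<..M}" "{1..N} \<inter> {N<..M} = {}" using assms(2) by auto
  then have "sqrt_partial C M x - sqrt_partial C N x = (\<Sum>k\<in>{N<..M}. cscale (of_real (sqrt_coeff k)) ((C ^^ k) x))"
    unfolding sqrt_partial_def by (simp add: sum.union_disjoint)
  then have "hnorm (sqrt_partial C M x - sqrt_partial C N x) \<le> (\<Sum>k\<in>{N<..M}. hnorm (cscale (of_real (sqrt_coeff k)) ((C ^^ k) x)))"
    by (simp add: hnorm_sum)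
  also have "\<dots> \<le> (\<Sum>k\<in>{N<..M}. sqrt_coeff k * hnorm x)"
    by (rule sum_mono) (simp add: hnorm_cscale sqrt_coeff_nonneg funpow_norm[OF assms(1)] mult_left_mono)
  also have "\<dots> = (sqrt_coeff_sum M - sqrt_coeff_sum N) * hnorm x" by (simp add: sqrt_coeff_sum_diff[OF assms(2)] sum_distrib_right)
  finally show ?thesis .
qed

lemma sqrt_partial_bound:
  assumes "\<And>x. hnorm (C x) \<le> hnorm x"
  shows "hnorm (sqrt_partial C N x) \<le> hnorm x"
proof -
  have "sqrt_partial C 0 x = 0" unfolding sqrt_partial_def by simp
  then have "hnorm (sqrt_partial C N x) \<le> sqrt_coeff_sum N * hnorm x" using sqrt_partial_diff_bound[OF assms, of 0 N x] by simp
  also have "\<dots> \<le> hnorm x" using sqrt_coeff_sum_le_1[of N] by (simp add: mult_left_le_one_le sqrt_coeff_sum_nonneg)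
  finally show ?thesis .
qed

lemma sqrt_partial_dist:
  assumes "\<And>x. hnorm (C x) \<le> hnorm x"
  shows "hnorm (sqrt_partial C m x - sqrt_partial C k x) \<le> hnorm x * dist (sqrt_coeff_sum m) (sqrt_coeff_sum k)"
proof (cases "k \<le> m")
  case True
  then show ?thesis using sqrt_partial_diff_bound[OF assms True, of x] sqrt_coeff_sum_mono[OF True]
    by (simp add: dist_real_def mult.commute)
next
  case False
  then have "m \<le> k" by simp
  then show ?thesis using sqrt_partial_diff_bound[OF assms \<open>m \<le> k\<close>, of x] sqrt_coeff_sum_mono[OF \<open>m \<le> k\<close>]
    by (simp add: hnorm_minus_commute dist_real_def mult.commute)
qed

lemma hconv_if_dominated_Cauchy:
  fixes X :: "nat \<Rightarrow> 'a::chilbert_space"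
  assumes a: "Cauchy a" and c: "0 \<le> c" and X: "\<And>m k. hnorm (X m - X k) \<le> c * dist (a m) (a k)"
  shows "\<exists>L. hconv X L"
proof (rule hcauchy_conv, intro allI impI)
  fix e :: real assume "e > 0"
  then obtain N where N: "\<forall>m\<ge>N. \<forall>k\<ge>N. dist (a m) (a k) < e / (c + 1)"
    using a c unfolding Cauchy_def by (metis add_nonneg_pos divide_pos_pos zero_less_one)
  have "hnorm (X m - X k) < e" if "m \<ge> N" "k \<ge> N" for m k
  proof -
    have "hnorm (X m - X k) \<le> c * dist (a m) (a k) + dist (a m) (a k)"
      using X[of m k] zero_le_dist[of "a m" "a k"] by linarith
    also have "\<dots> = (c + 1) * dist (a m) (a k)" by (simp add: algebra_simps)
    also have "\<dots> < (c + 1) * (e / (c + 1))" using N that c by (intro mult_strict_left_mono) auto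
    finally show ?thesis using c by simp
  qed
  then show "\<exists>N. \<forall>m\<ge>N. \<forall>k\<ge>N. hnorm (X m - X k) < e" by blast
qed

definition sqrt_series :: "('a::chilbert_space \<Rightarrow> 'a) \<Rightarrow> 'a \<Rightarrow> 'a" where
  "sqrt_series C x = (SOME L. hconv (\<lambda>N. sqrt_partial C N x) L)"

lemma sqrt_series_conv:
  fixes C :: "'a::chilbert_space \<Rightarrow> 'a"
  assumes "\<And>x. hnorm (C x) \<le> hnorm x"
  shows "hconv (\<lambda>N. sqrt_partial C N x) (sqrt_series C x)"
proof -
  have "Cauchy sqrt_coeff_sum" using sqrt_coeff_sum_tendsto_1 by (rule LIMSEQ_imp_Cauchy)
  from hconv_if_dominated_Cauchy[OF this hnorm_nonneg sqrt_partial_dist[OF assms]]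
  obtain L where "hconv (\<lambda>N. sqrt_partial C N x) L" by blast
  then show ?thesis unfolding sqrt_series_def by (rule someI)
qed

lemma sqrt_series_clinear:
  fixes C :: "'a::chilbert_space \<Rightarrow> 'a"
  assumes "\<And>x. hnorm (C x) \<le> hnorm x" "clinear C"
  shows "clinear (sqrt_series C)"
proof (rule clinearI)
  note c = sqrt_series_conv[OF assms(1)]
  note l = sqrt_partial_clinear[OF assms(2)]
  fix x y
  have "hconv (\<lambda>N. sqrt_partial C N x + sqrt_partial C N y) (sqrt_series C x + sqrt_series C y)" by (rule hconv_add[OF c c])
  then have "hconv (\<lambda>N. sqrt_partial C N (x + y)) (sqrt_series C x + sqrt_series C y)" by (simp add: clinear_add[OF l])
  then show "sqrt_series C (x + y) = sqrt_series C x + sqrt_series C y" using c hconv_unique by blast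
next
  note c = sqrt_series_conv[OF assms(1)]
  note l = sqrt_partial_clinear[OF assms(2)]
  fix a x
  have "hconv (\<lambda>N. cscale a (sqrt_partial C N x)) (cscale a (sqrt_series C x))" by (rule hconv_cscale[OF c])
  then have "hconv (\<lambda>N. sqrt_partial C N (cscale a x)) (cscale a (sqrt_series C x))" by (simp add: clinear_cscale[OF l])
  then show "sqrt_series C (cscale a x) = cscale a (sqrt_series C x)" using c hconv_unique by blast
qed

lemma sqrt_series_bound:
  fixes C :: "'a::chilbert_space \<Rightarrow> 'a"
  assumes "\<And>x. hnorm (C x) \<le> hnorm x"
  shows "hnorm (sqrt_series C x) \<le> hnorm x"
  by (rule hconv_le_bound[OF sqrt_series_conv[OF assms]]) (rule sqrt_partial_bound[OF assms])

lemma sqrt_series_bounded_op: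
  fixes C :: "'a::chilbert_space \<Rightarrow> 'a"
  assumes "\<And>x. hnorm (C x) \<le> hnorm x" "clinear C"
  shows "bounded_op (sqrt_series C)"
  using sqrt_series_clinear[OF assms] sqrt_series_bound[OF assms(1)] by (intro bounded_opI[where K=1]) auto

lemma sqrt_series_intertwine:
  fixes C1 C2 Q :: "'a::chilbert_space \<Rightarrow> 'a"
  assumes "\<And>x. hnorm (C1 x) \<le> hnorm x" "\<And>x. hnorm (C2 x) \<le> hnorm x"
    and Q: "bounded_op Q" and i: "\<And>x. Q (C1 x) = C2 (Q x)"
  shows "Q (sqrt_series C1 x) = sqrt_series C2 (Q x)"
proof -
  have "hconv (\<lambda>N. Q (sqrt_partial C1 N x)) (Q (sqrt_series C1 x))" by (rule bounded_hconv[OF Q sqrt_series_conv[OF assms(1)]])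
  moreover have "Q (sqrt_partial C1 N x) = sqrt_partial C2 N (Q x)" for N
    unfolding sqrt_partial_def using bounded_op_clinear[OF Q]
    by (simp add: clinear_sum clinear_cscale funpow_intertwine[of Q C1 C2, OF i])
  ultimately have "hconv (\<lambda>N. sqrt_partial C2 N (Q x)) (Q (sqrt_series C1 x))" by simp
  then show ?thesis using sqrt_series_conv[OF assms(2)] hconv_unique by blast
qed

lemma sqrt_partial_sq_expand:
  fixes C :: "'a::complex_inner_space \<Rightarrow> 'a"
  assumes l: "clinear C" and N: "N \<ge> 1"
  shows "sqrt_partial C N (sqrt_partial C N x) = cscale 2 (sqrt_partial C N x) - C x +
          (\<Sum>(j, l)\<in>corner_idx N. cscale (of_real (sqrt_coeff j * sqrt_coeff l)) ((C ^^ (j + l)) x))"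
proof -
  define G where "G = (\<lambda>j l. cscale (of_real (sqrt_coeff j * sqrt_coeff l)) ((C ^^ (j + l)) x))"
  note lk = funpow_clinear[OF l]
  have "sqrt_partial C N (sqrt_partial C N x) = (\<Sum>j\<in>{1..N}. \<Sum>l\<in>{1..N}. G j l)"
    unfolding sqrt_partial_def G_def
    by (simp add: clinear_sum[OF lk] clinear_cscale[OF lk] cscale_sum cscale_cscale funpow_add mult.commute)
  also have "\<dots> = (\<Sum>(j, l)\<in>{1..N} \<times> {1..N}. G j l)" by (rule sum.cartesian_product)
  also have "\<dots> = (\<Sum>(j, l)\<in>corner_idx N. G j l) + (\<Sum>(j, l)\<in>triangle_idx N. G j l)"
    unfolding corner_idx_def by (rule sum.subset_diff) (auto simp: triangle_idx_def)
  also have "(\<Sum>(j, l)\<in>triangle_idx N. G j l) = (\<Sum>k\<in>{2..N}. \<Sum>j\<in>{1..<k}. G j (k - j))"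
    by (rule triangle_idx_reindex)
  also have "\<dots> = (\<Sum>k\<in>{2..N}. cscale (of_real (2 * sqrt_coeff k)) ((C ^^ k) x))"
  proof (rule sum.cong[OF refl])
    fix k assume k: "k \<in> {2..N}"
    have "(\<Sum>j\<in>{1..<k}. G j (k - j)) = (\<Sum>j\<in>{1..<k}. cscale (of_real (sqrt_coeff j * sqrt_coeff (k - j))) ((C ^^ k) x))"
      unfolding G_def by (rule sum.cong) auto
    also have "\<dots> = cscale (\<Sum>j\<in>{1..<k}. of_real (sqrt_coeff j * sqrt_coeff (k - j))) ((C ^^ k) x)"
      by (rule cscale_sum_left)
    also have "(\<Sum>j\<in>{1..<k}. complex_of_real (sqrt_coeff j * sqrt_coeff (k - j))) = of_real (2 * sqrt_coeff k)"
      using sqrt_coeff_rec[of k] k by (simp del: of_real_mult add: of_real_sum[symmetric])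
    finally show "(\<Sum>j\<in>{1..<k}. G j (k - j)) = cscale (of_real (2 * sqrt_coeff k)) ((C ^^ k) x)" .
  qed
  also have "\<dots> = cscale 2 (\<Sum>k\<in>{2..N}. cscale (of_real (sqrt_coeff k)) ((C ^^ k) x))"
    by (simp add: cscale_sum cscale_cscale)
  also have "(\<Sum>k\<in>{2..N}. cscale (of_real (sqrt_coeff k)) ((C ^^ k) x)) = sqrt_partial C N x - cscale (1/2) (C x)"
  proof -
    have "{1..N} = insert 1 {2..N}" using N by auto
    then have "sqrt_partial C N x = cscale (of_real (sqrt_coeff 1)) ((C ^^ 1) x) + (\<Sum>k\<in>{2..N}. cscale (of_real (sqrt_coeff k)) ((C ^^ k) x))"
      unfolding sqrt_partial_def by simp
    then show ?thesis by simp
  qed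
  also have "cscale 2 (sqrt_partial C N x - cscale (1/2) (C x)) = cscale 2 (sqrt_partial C N x) - C x"
    by (simp add: cscale_diff_right cscale_cscale cscale_one)
  finally show ?thesis unfolding G_def by (simp add: algebra_simps)
qed

lemma corner_op_sum_bound:
  fixes C :: "'a::complex_inner_space \<Rightarrow> 'a"
  assumes "\<And>x. hnorm (C x) \<le> hnorm x" "N \<ge> 1"
  shows "hnorm (\<Sum>(j, l)\<in>corner_idx N. cscale (of_real (sqrt_coeff j * sqrt_coeff l)) ((C ^^ (j + l)) x)) \<le> (1 - sqrt_coeff_sum N)\<^sup>2 * hnorm x"
proof -
  have "hnorm (\<Sum>(j, l)\<in>corner_idx N. cscale (of_real (sqrt_coeff j * sqrt_coeff l)) ((C ^^ (j + l)) x))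
      \<le> (\<Sum>(j, l)\<in>corner_idx N. hnorm (cscale (of_real (sqrt_coeff j * sqrt_coeff l)) ((C ^^ (j + l)) x)))"
    by (rule order_trans[OF hnorm_sum]) (simp add: case_prod_beta)
  also have "\<dots> \<le> (\<Sum>(j, l)\<in>corner_idx N. sqrt_coeff j * sqrt_coeff l * hnorm x)"
  proof (rule sum_mono)
    fix p assume "p \<in> corner_idx N"
    obtain j l where p: "p = (j, l)" by (cases p)
    have "hnorm (cscale (of_real (sqrt_coeff j * sqrt_coeff l)) ((C ^^ (j + l)) x)) = sqrt_coeff j * sqrt_coeff l * hnorm ((C ^^ (j + l)) x)"
    proof -
      have "cmod (complex_of_real (sqrt_coeff j * sqrt_coeff l)) = sqrt_coeff j * sqrt_coeff l"
        by (simp only: norm_of_real) (simp add: sqrt_coeff_nonneg)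
      then show ?thesis by (simp only: hnorm_cscale)
    qed
    also have "\<dots> \<le> sqrt_coeff j * sqrt_coeff l * hnorm x"
      using funpow_norm[OF assms(1)] by (intro mult_left_mono) (auto simp: sqrt_coeff_nonneg)
    finally show "(case p of (j, l) \<Rightarrow> hnorm (cscale (of_real (sqrt_coeff j * sqrt_coeff l)) ((C ^^ (j + l)) x))) \<le> (case p of (j, l) \<Rightarrow> sqrt_coeff j * sqrt_coeff l * hnorm x)"
      using p by simp
  qed
  also have "\<dots> = (\<Sum>(j, l)\<in>corner_idx N. sqrt_coeff j * sqrt_coeff l) * hnorm x"
    by (simp add: sum_distrib_right case_prod_beta)
  also have "\<dots> = (1 - sqrt_coeff_sum N)\<^sup>2 * hnorm x" using corner_sum_eq[OF assms(2)] by simp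
  finally show ?thesis .
qed

text \<open>The operator form of s^2 = 2 s - t.\<close>

lemma sqrt_series_sq:
  fixes C :: "'a::chilbert_space \<Rightarrow> 'a"
  assumes c: "\<And>x. hnorm (C x) \<le> hnorm x" and l: "clinear C"
  shows "sqrt_series C (sqrt_series C x) = cscale 2 (sqrt_series C x) - C x"
proof -
  note conv = sqrt_series_conv[OF c]
  note pl = sqrt_partial_clinear[OF l]
  define X where "X = (\<lambda>N. sqrt_partial C N (sqrt_partial C N x))"
  have "hconv (\<lambda>N. sqrt_partial C N (sqrt_partial C N x - sqrt_series C x)) 0"
  proof (rule hconv_le[OF _ conv[of x], where c=1])
    fix k show "hnorm (sqrt_partial C k (sqrt_partial C k x - sqrt_series C x) - 0) \<le> 1 * hnorm (sqrt_partial C k x - sqrt_series C x)"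
      using sqrt_partial_bound[OF c] by simp
  qed
  from hconv_add[OF this conv[of "sqrt_series C x"]]
  have "hconv X (sqrt_series C (sqrt_series C x))" unfolding X_def by (simp add: clinear_diff[OF pl])
  then have A: "hconv (\<lambda>N. X (Suc N)) (sqrt_series C (sqrt_series C x))" by (rule hconv_Suc)
  define E where "E = (\<lambda>N. \<Sum>(j, l)\<in>corner_idx N. cscale (of_real (sqrt_coeff j * sqrt_coeff l)) ((C ^^ (j + l)) x))"
  have E0: "hconv (\<lambda>N. E (Suc N)) 0"
    unfolding hconv_def
  proof (rule tendsto0_le)
    show "(\<lambda>N. (1 - sqrt_coeff_sum (Suc N))\<^sup>2 * hnorm x) \<longlonglongrightarrow> 0"
      using LIMSEQ_Suc[OF corner_sum_tendsto] by (intro tendsto_mult_left_zero) simp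
    fix N show "norm (hnorm (E (Suc N) - 0)) \<le> (1 - sqrt_coeff_sum (Suc N))\<^sup>2 * hnorm x"
      unfolding E_def using corner_op_sum_bound[OF c, of "Suc N" x] by simp
  qed
  have "hconv (\<lambda>N. cscale 2 (sqrt_partial C (Suc N) x) - C x + E (Suc N)) (cscale 2 (sqrt_series C x) - C x + 0)"
    by (intro hconv_add hconv_diff hconv_cscale hconv_const E0 hconv_Suc conv)
  moreover have "X (Suc N) = cscale 2 (sqrt_partial C (Suc N) x) - C x + E (Suc N)" for N
    unfolding X_def E_def by (rule sqrt_partial_sq_expand[OF l]) simp
  ultimately have "hconv (\<lambda>N. X (Suc N)) (cscale 2 (sqrt_series C x) - C x)" by simp
  with A show ?thesis using hconv_unique by blast
qed

lemma sqrt_series_inner: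
  fixes C :: "'a::chilbert_space \<Rightarrow> 'a"
  assumes p: "pos_contraction C"
  shows "Im (cinner (sqrt_series C x) x) = 0 \<and> 0 \<le> Re (cinner (sqrt_series C x) x) \<and> Re (cinner (sqrt_series C x) x) \<le> (hnorm x)\<^sup>2"
proof -
  note conv = sqrt_series_conv[OF pos_contraction_contractive[OF p]]
  have lim: "(\<lambda>N. cinner (sqrt_partial C N x) x) \<longlonglongrightarrow> cinner (sqrt_series C x) x" by (rule hconv_cinner_left[OF conv])
  have eq: "cinner (sqrt_partial C N x) x = (\<Sum>k\<in>{1..N}. of_real (sqrt_coeff k) * cinner ((C ^^ k) x) x)" for N
    unfolding sqrt_partial_def by (simp add: cinner_sum_left cinner_cscale_left)
  have im: "Im (cinner (sqrt_partial C N x) x) = 0" for N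
    unfolding eq using pos_contraction_pow_inner[OF p] by (simp add: Im_sum)
  have re0: "0 \<le> Re (cinner (sqrt_partial C N x) x)" for N
    unfolding eq using pos_contraction_pow_inner[OF p] by (simp add: Re_sum sqrt_coeff_nonneg sum_nonneg)
  have re1: "Re (cinner (sqrt_partial C N x) x) \<le> (hnorm x)\<^sup>2" for N
  proof -
    have "Re (cinner (sqrt_partial C N x) x) = (\<Sum>k\<in>{1..N}. sqrt_coeff k * Re (cinner ((C ^^ k) x) x))"
      unfolding eq by (simp add: Re_sum)
    also have "\<dots> \<le> (\<Sum>k\<in>{1..N}. sqrt_coeff k * (hnorm x)\<^sup>2)"
      using pos_contraction_pow_inner[OF p] by (intro sum_mono mult_left_mono) (auto simp: sqrt_coeff_nonneg)
    also have "\<dots> = sqrt_coeff_sum N * (hnorm x)\<^sup>2" unfolding sqrt_coeff_sum_def by (simp add: sum_distrib_right)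
    also have "\<dots> \<le> (hnorm x)\<^sup>2" using sqrt_coeff_sum_le_1[of N] by (simp add: mult_left_le_one_le sqrt_coeff_sum_nonneg)
    finally show ?thesis .
  qed
  have "(\<lambda>N. Im (cinner (sqrt_partial C N x) x)) \<longlonglongrightarrow> Im (cinner (sqrt_series C x) x)" by (rule tendsto_Im[OF lim])
  then have "Im (cinner (sqrt_series C x) x) = 0" using im by (simp add: LIMSEQ_const_iff)
  moreover have "(\<lambda>N. Re (cinner (sqrt_partial C N x) x)) \<longlonglongrightarrow> Re (cinner (sqrt_series C x) x)" by (rule tendsto_Re[OF lim])
  then have "0 \<le> Re (cinner (sqrt_series C x) x)" "Re (cinner (sqrt_series C x) x) \<le> (hnorm x)\<^sup>2"
    using re0 re1 by (auto intro: LIMSEQ_le_const LIMSEQ_le_const2)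
  ultimately show ?thesis by simp
qed

definition sqrt_one_minus :: "('a::chilbert_space \<Rightarrow> 'a) \<Rightarrow> 'a \<Rightarrow> 'a" where
  "sqrt_one_minus C x = x - sqrt_series C x"

lemma sqrt_one_minus_positive: assumes p: "pos_contraction C" shows "positive_op (sqrt_one_minus C)"
  unfolding positive_op_def
proof (intro conjI allI)
  have c: "\<And>x. hnorm (C x) \<le> hnorm x" "clinear C" using pos_contraction_contractive[OF p] bounded_op_clinear[OF pos_contraction_bounded[OF p]] by auto
  show "bounded_op (sqrt_one_minus C)" unfolding sqrt_one_minus_def by (rule bounded_op_diff[OF bounded_op_id sqrt_series_bounded_op[OF c]])
  fix x
  show "Im (cinner (sqrt_one_minus C x) x) = 0" unfolding sqrt_one_minus_def
    using sqrt_series_inner[OF p, of x] cinner_self_real[of x] by (simp add: cinner_diff_left)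
  show "0 \<le> Re (cinner (sqrt_one_minus C x) x)" unfolding sqrt_one_minus_def
    using sqrt_series_inner[OF p, of x] hnorm_sq[of x] by (simp add: cinner_diff_left)
qed

lemma sqrt_one_minus_sq: assumes p: "pos_contraction C" shows "sqrt_one_minus C (sqrt_one_minus C x) = x - C x"
proof -
  have c: "\<And>x. hnorm (C x) \<le> hnorm x" "clinear C" using pos_contraction_contractive[OF p] bounded_op_clinear[OF pos_contraction_bounded[OF p]] by auto
  note yl = sqrt_series_clinear[OF c]
  have "sqrt_one_minus C (sqrt_one_minus C x) = x - sqrt_series C x - (sqrt_series C x - sqrt_series C (sqrt_series C x))"
    unfolding sqrt_one_minus_def by (simp add: clinear_diff[OF yl])
  also have "\<dots> = x - C x" unfolding sqrt_series_sq[OF c] cscale_two by (simp add: algebra_simps)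
  finally show ?thesis .
qed

lemma positive_op_selfadj: assumes R: "positive_op R" shows "cinner (R x) y = cinner x (R y)"
proof -
  have l: "clinear R" using R unfolding positive_op_def bounded_op_def by blast
  have im: "\<And>z. Im (cinner (R z) z) = 0" using R unfolding positive_op_def by blast
  define a where "a = cinner (R x) y"
  define b where "b = cinner (R y) x"
  have "cinner (R (x + y)) (x + y) = cinner (R x) x + a + b + cinner (R y) y"
    unfolding a_def b_def by (simp add: clinear_add[OF l] cinner_add_left cinner_add_right)
  then have 1: "Im a + Im b = 0" using im[of "x + y"] im[of x] im[of y] by simp
  have "cinner (R (x + cscale \<i> y)) (x + cscale \<i> y) = cinner (R x) x + (- \<i>) * a + \<i> * b + cinner (R y) y"
    unfolding a_def b_def
    by (simp add: clinear_add[OF l] clinear_cscale[OF l] cinner_add_left cinner_add_right cinner_cscale_left cinner_cscale_right algebra_simps)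
  then have 2: "Re b - Re a = 0" using im[of "x + cscale \<i> y"] im[of x] im[of y] by simp
  have "a = cnj b" using 1 2 by (simp add: complex_eq_iff)
  then show ?thesis unfolding a_def b_def by (metis cinner_commute)
qed

lemma positive_op_form_eq_0: assumes R: "positive_op R" and z: "cinner (R y) y = 0" shows "R y = 0"
proof -
  have l: "clinear R" using R unfolding positive_op_def bounded_op_def by blast
  have pos: "\<And>w. 0 \<le> Re (cinner (R w) w)" using R unfolding positive_op_def by blast
  define z where "z = R y"
  define n where "n = Re (cinner z z)"
  define c where "c = Re (cinner (R z) z)"
  have n0: "n \<ge> 0" unfolding n_def by (rule cinner_self_nonneg)
  have c0: "c \<ge> 0" unfolding c_def by (rule pos)
  have nz: "cinner z z = of_real n" unfolding n_def by (rule cinner_self_eq)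
  have expand: "0 \<le> 2 * s * n + s\<^sup>2 * c" for s :: real
  proof -
    have "cinner (R (y + cscale (of_real s) z)) (y + cscale (of_real s) z)
        = cinner (R y) y + of_real s * cinner (R y) z + of_real s * cinner (R z) y + of_real s * of_real s * cinner (R z) z"
      by (simp add: clinear_add[OF l] clinear_cscale[OF l] cinner_add_left cinner_add_right cinner_cscale_left cinner_cscale_right algebra_simps)
    also have "cinner (R z) y = cinner z z" using positive_op_selfadj[OF R, of z y] z_def by simp
    also have "cinner (R y) z = cinner z z" using z_def by simp
    finally have "cinner (R (y + cscale (of_real s) z)) (y + cscale (of_real s) z) = of_real (2 * s * n) + of_real (s * s) * cinner (R z) z"
      using z nz by simp
    then have "Re (cinner (R (y + cscale (of_real s) z)) (y + cscale (of_real s) z)) = 2 * s * n + s\<^sup>2 * c"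
      unfolding c_def by (simp add: power2_eq_square)
    then show ?thesis using pos by metis
  qed
  have cp: "c + 1 > 0" using c0 by simp
  define q where "q = n / (c + 1)"
  have nq: "n = q * (c + 1)" using cp by (simp add: q_def)
  have "0 \<le> 2 * (- q) * n + (- q)\<^sup>2 * c" by (rule expand)
  also have "2 * (- q) * n + (- q)\<^sup>2 * c = - (q\<^sup>2 * (c + 2))"
    unfolding nq by (simp add: algebra_simps power2_eq_square)
  finally have "q\<^sup>2 * (c + 2) \<le> 0" by simp
  moreover have "c + 2 > 0" using c0 by simp
  ultimately have "q\<^sup>2 \<le> 0" by (simp add: mult_le_0_iff)
  then have "q = 0" by simp
  then have "n = 0" using nq by simp
  then have "cinner z z = 0" using nz by simp
  then show ?thesis unfolding z_def by simp
qed

lemma sqrt_one_minus_unique: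
  fixes C :: "'a::chilbert_space \<Rightarrow> 'a"
  assumes p: "pos_contraction C" and R: "positive_op R" and sq: "\<And>x. R (R x) = x - C x"
  shows "R = sqrt_one_minus C"
proof
  fix x
  have c: "\<And>x. hnorm (C x) \<le> hnorm x" "clinear C" using pos_contraction_contractive[OF p] bounded_op_clinear[OF pos_contraction_bounded[OF p]] by auto
  have Rb: "bounded_op R" using R unfolding positive_op_def by blast
  have lR: "clinear R" using Rb bounded_op_clinear by blast
  define S where "S = sqrt_one_minus C"
  have Sp: "positive_op S" unfolding S_def by (rule sqrt_one_minus_positive[OF p])
  have lS: "clinear S" using Sp unfolding positive_op_def bounded_op_def by blast
  have Ssq: "\<And>x. S (S x) = x - C x" unfolding S_def by (rule sqrt_one_minus_sq[OF p])
  have RC: "R (C x) = C (R x)" for x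
  proof -
    have "C x = x - R (R x)" using sq[of x] by simp
    then have "R (C x) = R x - R (R (R x))" by (simp add: clinear_diff[OF lR])
    also have "C (R x) = R x - R (R (R x))" using sq[of "R x"] by simp
    ultimately show ?thesis by simp
  qed
  have RY: "R (sqrt_series C x) = sqrt_series C (R x)" for x by (rule sqrt_series_intertwine[OF c(1) c(1) Rb RC])
  have RS: "R (S x) = S (R x)" for x unfolding S_def sqrt_one_minus_def using RY by (simp add: clinear_diff[OF lR])
  define v where "v = S x - R x"
  have "S v + R v = 0"
    unfolding v_def using Ssq[of x] sq[of x] RS[of x] by (simp add: clinear_diff[OF lS] clinear_diff[OF lR])
  then have "cinner (S v) v + cinner (R v) v = 0" by (metis cinner_add_left cinner_zero_left)
  moreover have "Im (cinner (S v) v) = 0" "0 \<le> Re (cinner (S v) v)" using Sp unfolding positive_op_def by auto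
  moreover have "Im (cinner (R v) v) = 0" "0 \<le> Re (cinner (R v) v)" using R unfolding positive_op_def by auto
  ultimately have "cinner (S v) v = 0" "cinner (R v) v = 0" by (simp_all add: complex_eq_iff)
  then have "S v = 0" "R v = 0" using positive_op_form_eq_0 Sp R by blast+
  moreover have "cinner v v = cinner (S x - R x) v" by (subst (1) v_def) (rule refl)
  moreover have "cinner (S x - R x) v = cinner x (S v) - cinner x (R v)"
    by (simp add: cinner_diff_left positive_op_selfadj[OF Sp, of x] positive_op_selfadj[OF R, of x])
  ultimately have "cinner v v = 0" by simp
  then show "R x = sqrt_one_minus C x" unfolding v_def S_def by simp
qed

lemma op_sqrt_one_minus:
  fixes C :: "'a::chilbert_space \<Rightarrow> 'a"
  assumes p: "pos_contraction C"
  shows "op_sqrt (\<lambda>x. x - C x) = sqrt_one_minus C"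
  unfolding op_sqrt_def
proof (rule the_equality)
  show "positive_op (sqrt_one_minus C) \<and> sqrt_one_minus C \<circ> sqrt_one_minus C = (\<lambda>x. x - C x)"
    using sqrt_one_minus_positive[OF p] sqrt_one_minus_sq[OF p] by (auto simp: comp_def)
next
  fix R assume "positive_op R \<and> R \<circ> R = (\<lambda>x. x - C x)"
  then show "R = sqrt_one_minus C" using sqrt_one_minus_unique[OF p] by (metis comp_apply)
qed

section \<open>Defect operators\<close>

lemma adj_contraction:
  fixes T :: "'a::chilbert_space \<Rightarrow> 'a"
  assumes "bounded_op T" "\<And>x. hnorm (T x) \<le> hnorm x"
  shows "hnorm (adj T y) \<le> hnorm y"
  using adj_norm_le[of T 1] assms by simp

lemma pos_contraction_TT:
  fixes T :: "'a::chilbert_space \<Rightarrow> 'a"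
  assumes b: "bounded_op T" and c: "\<And>x. hnorm (T x) \<le> hnorm x"
  shows "pos_contraction (\<lambda>x. adj T (T x))"
  unfolding pos_contraction_def
proof (intro conjI allI)
  show "bounded_op (\<lambda>x. adj T (T x))" by (rule bounded_op_comp[OF adj_bounded[OF b] b])
  fix x y
  show "cinner (adj T (T x)) y = cinner x (adj T (T y))"
    by (simp add: adj_cinner_left[OF b] adj_cinner[OF b])
  show "0 \<le> Re (cinner (adj T (T x)) x)"
    by (simp add: adj_cinner_left[OF b] cinner_self_nonneg)
  show "hnorm (adj T (T x)) \<le> hnorm x"
    using adj_contraction[OF b c, of "T x"] c[of x] by simp
qed

lemma defect_eq:
  fixes T :: "'a::chilbert_space \<Rightarrow> 'a"
  assumes b: "bounded_op T" and c: "\<And>x. hnorm (T x) \<le> hnorm x"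
  shows "defect T = sqrt_one_minus (\<lambda>x. adj T (T x))"
  unfolding defect_def by (rule op_sqrt_one_minus[OF pos_contraction_TT[OF b c]])

lemma defect_positive:
  fixes T :: "'a::chilbert_space \<Rightarrow> 'a"
  assumes b: "bounded_op T" and c: "\<And>x. hnorm (T x) \<le> hnorm x"
  shows "positive_op (defect T)"
  unfolding defect_eq[OF b c] by (rule sqrt_one_minus_positive[OF pos_contraction_TT[OF b c]])

lemma defect_bounded:
  fixes T :: "'a::chilbert_space \<Rightarrow> 'a"
  assumes b: "bounded_op T" and c: "\<And>x. hnorm (T x) \<le> hnorm x"
  shows "bounded_op (defect T)"
  using defect_positive[OF b c] unfolding positive_op_def by blast

lemma defect_clinear:
  fixes T :: "'a::chilbert_space \<Rightarrow> 'a"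
  assumes b: "bounded_op T" and c: "\<And>x. hnorm (T x) \<le> hnorm x"
  shows "clinear (defect T)"
  using defect_bounded[OF b c] bounded_op_clinear by blast

lemma defect_sq:
  fixes T :: "'a::chilbert_space \<Rightarrow> 'a"
  assumes b: "bounded_op T" and c: "\<And>x. hnorm (T x) \<le> hnorm x"
  shows "defect T (defect T x) = x - adj T (T x)"
  unfolding defect_eq[OF b c] by (rule sqrt_one_minus_sq[OF pos_contraction_TT[OF b c]])

lemma defect_selfadj:
  fixes T :: "'a::chilbert_space \<Rightarrow> 'a"
  assumes b: "bounded_op T" and c: "\<And>x. hnorm (T x) \<le> hnorm x"
  shows "cinner (defect T x) y = cinner x (defect T y)"
  by (rule positive_op_selfadj[OF defect_positive[OF b c]])

lemma defect_inner:
  fixes T :: "'a::chilbert_space \<Rightarrow> 'a"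
  assumes b: "bounded_op T" and c: "\<And>x. hnorm (T x) \<le> hnorm x"
  shows "cinner (defect T x) (defect T y) = cinner x y - cinner (T x) (T y)"
proof -
  have "cinner (defect T x) (defect T y) = cinner (defect T (defect T x)) y" by (simp add: defect_selfadj[OF b c])
  also have "\<dots> = cinner x y - cinner (T x) (T y)"
    by (simp add: defect_sq[OF b c] cinner_diff_left adj_cinner_left[OF b])
  finally show ?thesis .
qed

lemma defect_norm:
  fixes T :: "'a::chilbert_space \<Rightarrow> 'a"
  assumes b: "bounded_op T" and c: "\<And>x. hnorm (T x) \<le> hnorm x"
  shows "(hnorm (defect T x))\<^sup>2 = (hnorm x)\<^sup>2 - (hnorm (T x))\<^sup>2"
  using arg_cong[OF defect_inner[OF b c, of x x], of Re] by (simp add: hnorm_sq)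

lemma defect_intertwine:
  fixes T1 T2 Q :: "'a::chilbert_space \<Rightarrow> 'a"
  assumes b1: "bounded_op T1" and c1: "\<And>x. hnorm (T1 x) \<le> hnorm x"
    and b2: "bounded_op T2" and c2: "\<And>x. hnorm (T2 x) \<le> hnorm x"
    and Q: "bounded_op Q" and i: "\<And>x. Q (adj T1 (T1 x)) = adj T2 (T2 (Q x))"
  shows "Q (defect T1 x) = defect T2 (Q x)"
proof -
  have "Q (sqrt_series (\<lambda>x. adj T1 (T1 x)) x) = sqrt_series (\<lambda>x. adj T2 (T2 x)) (Q x)"
    by (rule sqrt_series_intertwine[OF pos_contraction_contractive[OF pos_contraction_TT[OF b1 c1]] pos_contraction_contractive[OF pos_contraction_TT[OF b2 c2]] Q i])
  then show ?thesis unfolding defect_eq[OF b1 c1] defect_eq[OF b2 c2] sqrt_one_minus_def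
    by (simp add: clinear_diff[OF bounded_op_clinear[OF Q]])
qed

lemma adj_of_contraction:
  fixes P :: "'a::chilbert_space \<Rightarrow> 'a"
  assumes b: "bounded_op P" and c: "\<And>x. hnorm (P x) \<le> hnorm x"
  shows "bounded_op (adj P)" "\<And>x. hnorm (adj P x) \<le> hnorm x" "adj (adj P) = P"
  using adj_bounded[OF b] adj_contraction[OF b c] adj_adj[OF b] by auto

lemma defect_P_intertwine:
  fixes P :: "'a::chilbert_space \<Rightarrow> 'a"
  assumes b: "bounded_op P" and c: "\<And>x. hnorm (P x) \<le> hnorm x"
  shows "P (defect P x) = defect (adj P) (P x)"
    and "adj P (defect (adj P) x) = defect P (adj P x)"
proof -
  note a = adj_of_contraction[OF b c]
  show "P (defect P x) = defect (adj P) (P x)"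
    by (rule defect_intertwine[OF b c a(1) a(2) b]) (simp add: a(3))
  show "adj P (defect (adj P) x) = defect P (adj P x)"
    by (rule defect_intertwine[OF a(1) a(2) b c a(1)]) (simp add: a(3))
qed

lemma range_clinear_subspace: "clinear T \<Longrightarrow> hsubspace (range T)"
  unfolding hsubspace_def
  by (auto simp: clinear_zero clinear_add[symmetric] clinear_cscale[symmetric] intro: range_eqI[of _ _ 0])

lemma defect_space_props:
  fixes T :: "'a::chilbert_space \<Rightarrow> 'a"
  assumes b: "bounded_op T" and c: "\<And>x. hnorm (T x) \<le> hnorm x"
  shows "hsubspace (defect_space T)" "hclosed (defect_space T)" "defect T x \<in> defect_space T"
  unfolding defect_space_def
  using hsubspace_hclosure[OF range_clinear_subspace[OF defect_clinear[OF b c]]] hclosed_hclosure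
    hclosure_sub[of "range (defect T)"] by auto

section \<open>Square-summable sequences\<close>

definition l2s :: "(nat \<Rightarrow> 'a::complex_inner_space) \<Rightarrow> bool" where
  "l2s f \<longleftrightarrow> summable (\<lambda>k. (hnorm (f k))\<^sup>2)"

definition l2n2 :: "(nat \<Rightarrow> 'a::complex_inner_space) \<Rightarrow> real" where
  "l2n2 f = (\<Sum>k. (hnorm (f k))\<^sup>2)"

lemma l2n2_nonneg: "l2s f \<Longrightarrow> 0 \<le> l2n2 f"
  unfolding l2s_def l2n2_def by (rule suminf_nonneg) auto

lemma cinner_le_sq: "cmod (cinner (a::'a::complex_inner_space) b) \<le> ((hnorm a)\<^sup>2 + (hnorm b)\<^sup>2) / 2"
proof -
  have "cmod (cinner a b) \<le> hnorm a * hnorm b" by (rule cauchy_schwarz)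
  also have "\<dots> \<le> ((hnorm a)\<^sup>2 + (hnorm b)\<^sup>2) / 2"
    using sum_squares_bound[of "hnorm a" "hnorm b"] by (simp add: power2_eq_square)
  finally show ?thesis .
qed

lemma l2_abs_summable:
  assumes "l2s f" "l2s g" shows "summable (\<lambda>k. norm (cinner (f k) (g k)))"
proof (rule summable_comparison_test'[where N=0])
  show "summable (\<lambda>k. ((hnorm (f k))\<^sup>2 + (hnorm (g k))\<^sup>2) / 2)"
    using assms unfolding l2s_def by (intro summable_divide summable_add)
  fix k show "norm (norm (cinner (f k) (g k))) \<le> ((hnorm (f k))\<^sup>2 + (hnorm (g k))\<^sup>2) / 2"
    using cinner_le_sq by simp
qed

lemma l2_summable: "l2s f \<Longrightarrow> l2s g \<Longrightarrow> summable (\<lambda>k. cinner (f k) (g k))"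
  by (rule summable_norm_cancel[OF l2_abs_summable])

lemma finite_cs: "(\<Sum>k\<in>A. hnorm (f k) * hnorm (g k)) \<le> sqrt (\<Sum>k\<in>A. (hnorm (f k))\<^sup>2) * sqrt (\<Sum>k\<in>A. (hnorm (g k :: 'a::complex_inner_space))\<^sup>2)"
proof -
  have "(\<Sum>k\<in>A. hnorm (f k) * hnorm (g k)) \<le> \<bar>\<Sum>k\<in>A. hnorm (f k) * hnorm (g k)\<bar>" by simp
  also have "\<dots> = sqrt ((\<Sum>k\<in>A. hnorm (f k) * hnorm (g k))\<^sup>2)" by simp
  also have "\<dots> \<le> sqrt ((\<Sum>k\<in>A. (hnorm (f k))\<^sup>2) * (\<Sum>k\<in>A. (hnorm (g k))\<^sup>2))"
    by (rule real_sqrt_le_mono[OF Cauchy_Schwarz_ineq_sum])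
  also have "\<dots> = sqrt (\<Sum>k\<in>A. (hnorm (f k))\<^sup>2) * sqrt (\<Sum>k\<in>A. (hnorm (g k))\<^sup>2)"
    by (simp add: real_sqrt_mult)
  finally show ?thesis .
qed

lemma partial_le_l2n2: "l2s f \<Longrightarrow> (\<Sum>k<N. (hnorm (f k))\<^sup>2) \<le> l2n2 f"
  unfolding l2s_def l2n2_def by (rule sum_le_suminf) auto

lemma l2_cs: assumes "l2s f" "l2s g"
  shows "cmod (l2_inner f g) \<le> sqrt (l2n2 f) * sqrt (l2n2 g)"
proof -
  have lim: "(\<lambda>N. \<Sum>k<N. cinner (f k) (g k)) \<longlonglongrightarrow> l2_inner f g"
    unfolding l2_inner_def by (rule summable_LIMSEQ[OF l2_summable[OF assms]])
  have "cmod (\<Sum>k<N. cinner (f k) (g k)) \<le> sqrt (l2n2 f) * sqrt (l2n2 g)" for N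
  proof -
    have "cmod (\<Sum>k<N. cinner (f k) (g k)) \<le> (\<Sum>k<N. cmod (cinner (f k) (g k)))" by (rule norm_sum)
    also have "\<dots> \<le> (\<Sum>k<N. hnorm (f k) * hnorm (g k))" by (intro sum_mono cauchy_schwarz)
    also have "\<dots> \<le> sqrt (\<Sum>k<N. (hnorm (f k))\<^sup>2) * sqrt (\<Sum>k<N. (hnorm (g k))\<^sup>2)" by (rule finite_cs)
    also have "\<dots> \<le> sqrt (l2n2 f) * sqrt (l2n2 g)"
      by (intro mult_mono real_sqrt_le_mono partial_le_l2n2 assms) (auto intro: l2n2_nonneg assms sum_nonneg)
    finally show ?thesis .
  qed
  then show ?thesis using tendsto_norm[OF lim] by (intro LIMSEQ_le_const2[of "\<lambda>N. cmod (\<Sum>k<N. cinner (f k) (g k))"]) auto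
qed

lemma l2s_add: assumes "l2s f" "l2s g" shows "l2s (\<lambda>k. f k + g k)"
  unfolding l2s_def
proof (rule summable_comparison_test'[where N=0])
  show "summable (\<lambda>k. 2 * (hnorm (f k))\<^sup>2 + 2 * (hnorm (g k))\<^sup>2)"
    using assms unfolding l2s_def by (intro summable_add summable_mult)
  fix k
  have "hnorm (f k + g k) \<le> hnorm (f k) + hnorm (g k)" by (rule hnorm_triangle)
  then have "(hnorm (f k + g k))\<^sup>2 \<le> (hnorm (f k) + hnorm (g k))\<^sup>2" by (simp add: power_mono)
  also have "\<dots> \<le> 2 * (hnorm (f k))\<^sup>2 + 2 * (hnorm (g k))\<^sup>2"
    using sum_squares_bound[of "hnorm (f k)" "hnorm (g k)"] by (simp add: power2_sum)
  finally show "norm ((hnorm (f k + g k))\<^sup>2) \<le> 2 * (hnorm (f k))\<^sup>2 + 2 * (hnorm (g k))\<^sup>2" by simp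
qed

lemma l2s_bounded: assumes "l2s f" "\<And>k. hnorm (g k) \<le> K * hnorm (f k)" shows "l2s g"
  unfolding l2s_def
proof (rule summable_comparison_test'[where N=0])
  show "summable (\<lambda>k. (max K 0)\<^sup>2 * (hnorm (f k))\<^sup>2)"
    using assms(1) unfolding l2s_def by (intro summable_mult)
  fix k
  have "hnorm (g k) \<le> max K 0 * hnorm (f k)" using assms(2)[of k] hnorm_nonneg[of "f k"]
    by (smt (verit) mult_right_mono)
  then have "(hnorm (g k))\<^sup>2 \<le> (max K 0 * hnorm (f k))\<^sup>2" by (simp add: power_mono)
  then show "norm ((hnorm (g k))\<^sup>2) \<le> (max K 0)\<^sup>2 * (hnorm (f k))\<^sup>2" by (simp add: power_mult_distrib)
qed

lemma l2s_minus: assumes "l2s f" shows "l2s (\<lambda>k. - f k)"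
  by (rule l2s_bounded[OF assms, where K=1]) (simp add: hnorm_minus)

lemma l2s_diff: "l2s f \<Longrightarrow> l2s g \<Longrightarrow> l2s (\<lambda>k. f k - g k)"
  using l2s_add[OF _ l2s_minus, of f g] by simp

lemma l2s_shift_fwd: "l2s f \<Longrightarrow> l2s (\<lambda>k. f (k + j))"
  unfolding l2s_def by (simp only: summable_iff_shift[of "\<lambda>k. (hnorm (f k))\<^sup>2" j])

lemma l2s_shift: assumes "l2s f" shows "l2s (\<lambda>k. if k = 0 then 0 else f (k - 1))"
proof -
  have "summable (\<lambda>k. (hnorm (f k))\<^sup>2)" using assms unfolding l2s_def .
  then have "summable (\<lambda>k. (hnorm (if Suc k = 0 then 0 else f (Suc k - 1)))\<^sup>2)" by simp
  then show ?thesis unfolding l2s_def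
    using summable_Suc_iff[of "\<lambda>k. (hnorm (if k = 0 then 0 else f (k - 1)))\<^sup>2"] by blast
qed

lemma H2_l2s: "f \<in> H2 E \<Longrightarrow> l2s f"
  unfolding H2_def l2s_def by blast

lemma l2_inner_add_left: "l2s f \<Longrightarrow> l2s g \<Longrightarrow> l2s h \<Longrightarrow> l2_inner (\<lambda>k. f k + g k) h = l2_inner f h + l2_inner g h"
  unfolding l2_inner_def by (simp add: cinner_add_left suminf_add l2_summable)
lemma l2_inner_diff_left: "l2s f \<Longrightarrow> l2s g \<Longrightarrow> l2s h \<Longrightarrow> l2_inner (\<lambda>k. f k - g k) h = l2_inner f h - l2_inner g h"
  unfolding l2_inner_def by (simp add: cinner_diff_left suminf_diff l2_summable)
lemma l2_inner_diff_right: "l2s f \<Longrightarrow> l2s g \<Longrightarrow> l2s h \<Longrightarrow> l2_inner h (\<lambda>k. f k - g k) = l2_inner h f - l2_inner h g"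
  unfolding l2_inner_def by (simp add: cinner_diff_right suminf_diff l2_summable)
lemma l2_inner_cscale_left: "l2s f \<Longrightarrow> l2s h \<Longrightarrow> l2_inner (\<lambda>k. cscale a (f k)) h = a * l2_inner f h"
  unfolding l2_inner_def by (simp add: cinner_cscale_left suminf_mult l2_summable)

lemma l2_inner_cnj: "l2s f \<Longrightarrow> l2s g \<Longrightarrow> l2_inner g f = cnj (l2_inner f g)"
proof -
  assume a: "l2s f" "l2s g"
  have "(\<lambda>k. cinner (f k) (g k)) sums l2_inner f g" unfolding l2_inner_def by (rule summable_sums[OF l2_summable[OF a]])
  then have "(\<lambda>k. cnj (cinner (f k) (g k))) sums cnj (l2_inner f g)" by (simp add: sums_cnj)
  moreover have "(\<lambda>k. cnj (cinner (f k) (g k))) = (\<lambda>k. cinner (g k) (f k))"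
    by (rule ext) (rule cinner_commute[symmetric])
  ultimately have "(\<lambda>k. cinner (g k) (f k)) sums cnj (l2_inner f g)" by simp
  then show ?thesis unfolding l2_inner_def by (rule sums_unique[symmetric])
qed

lemma l2_inner_self: "l2s f \<Longrightarrow> l2_inner f f = of_real (l2n2 f)"
proof -
  assume a: "l2s f"
  have "l2_inner f f = (\<Sum>k. complex_of_real ((hnorm (f k))\<^sup>2))"
    unfolding l2_inner_def by (simp only: hnorm_sq_c)
  also have "\<dots> = of_real (l2n2 f)" unfolding l2n2_def
    by (rule suminf_of_real[symmetric]) (use a in \<open>simp add: l2s_def\<close>)
  finally show ?thesis .
qed

lemma l2_zero: assumes "l2s f" "l2n2 f = 0" shows "f k = 0"
proof -
  have "\<forall>n. (hnorm (f n))\<^sup>2 = 0" using assms suminf_eq_zero_iff[of "\<lambda>k. (hnorm (f k))\<^sup>2"]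
    unfolding l2s_def l2n2_def by simp
  then show ?thesis by simp
qed

lemma l2_eq: assumes "l2s f" "l2s g" "l2_inner (\<lambda>k. f k - g k) (\<lambda>k. f k - g k) = 0" shows "f = g"
proof
  fix k
  have "l2s (\<lambda>k. f k - g k)" by (rule l2s_diff[OF assms(1,2)])
  then have "l2n2 (\<lambda>k. f k - g k) = 0" using assms(3) l2_inner_self by fastforce
  then have "f k - g k = 0" using l2_zero \<open>l2s (\<lambda>k. f k - g k)\<close> by blast
  then show "f k = g k" by simp
qed

section \<open>The functional model of a pure contraction\<close>

locale pure_contraction =
  fixes P :: "'a::chilbert_space \<Rightarrow> 'a"
  assumes bounded_P: "bounded_op P" and contraction_P: "\<And>x. hnorm (P x) \<le> hnorm x"
    and pure: "\<And>x. (\<lambda>m. hnorm ((adj P ^^ m) x)) \<longlonglongrightarrow> 0"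
begin

abbreviation "Ps \<equiv> adj P"
abbreviation "DP \<equiv> defect P"
abbreviation "DPs \<equiv> defect (adj P)"
abbreviation "DPs_space \<equiv> defect_space (adj P)"
abbreviation "DP_space \<equiv> defect_space P"

lemma bounded_Ps: "bounded_op Ps" and contraction_Ps: "\<And>x. hnorm (Ps x) \<le> hnorm x" and adj_Ps: "adj Ps = P"
  using adj_of_contraction[OF bounded_P contraction_P] by auto

lemma clinear_P: "clinear P" using bounded_P bounded_op_clinear by blast
lemma clinear_Ps: "clinear Ps" using bounded_Ps bounded_op_clinear by blast
lemma bounded_DP: "bounded_op DP" by (rule defect_bounded[OF bounded_P contraction_P])
lemma bounded_DPs: "bounded_op DPs" by (rule defect_bounded[OF bounded_Ps contraction_Ps])
lemma clinear_DP: "clinear DP" using bounded_DP bounded_op_clinear by blast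
lemma clinear_DPs: "clinear DPs" using bounded_DPs bounded_op_clinear by blast

lemma DPs_sq: "DPs (DPs x) = x - P (Ps x)" using defect_sq[OF bounded_Ps contraction_Ps] adj_Ps by simp
lemma DPs_selfadj: "cinner (DPs x) y = cinner x (DPs y)" by (rule defect_selfadj[OF bounded_Ps contraction_Ps])
lemma DP_selfadj: "cinner (DP x) y = cinner x (DP y)" by (rule defect_selfadj[OF bounded_P contraction_P])
lemma DPs_inner: "cinner (DPs x) (DPs y) = cinner x y - cinner (Ps x) (Ps y)" by (rule defect_inner[OF bounded_Ps contraction_Ps])
lemma DP_norm: "(hnorm (DP x))\<^sup>2 = (hnorm x)\<^sup>2 - (hnorm (P x))\<^sup>2" by (rule defect_norm[OF bounded_P contraction_P])
lemma DPs_norm: "(hnorm (DPs x))\<^sup>2 = (hnorm x)\<^sup>2 - (hnorm (Ps x))\<^sup>2" by (rule defect_norm[OF bounded_Ps contraction_Ps])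
lemma P_DP: "P (DP x) = DPs (P x)" by (rule defect_P_intertwine(1)[OF bounded_P contraction_P])
lemma Ps_DPs: "Ps (DPs x) = DP (Ps x)" by (rule defect_P_intertwine(2)[OF bounded_P contraction_P])
lemma DPs_space_props: "hsubspace DPs_space" "hclosed DPs_space" "DPs x \<in> DPs_space" using defect_space_props[OF bounded_Ps contraction_Ps] by auto
lemma DP_space_props: "hsubspace DP_space" "hclosed DP_space" "DP x \<in> DP_space" using defect_space_props[OF bounded_P contraction_P] by auto

lemma P_cinner: "cinner (P x) y = cinner x (Ps y)" by (rule adj_cinner[OF bounded_P])
lemma Ps_cinner: "cinner (Ps y) x = cinner y (P x)" by (rule adj_cinner_left[OF bounded_P])
lemma Ps_pow_cinner: "cinner ((Ps ^^ k) x) y = cinner x ((P ^^ k) y)"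
  using adj_funpow[OF bounded_Ps] adj_Ps by simp
lemma Ps_pow_norm: "hnorm ((Ps ^^ k) x) \<le> hnorm x" by (rule funpow_norm[OF contraction_Ps])
lemma clinear_Ps_pow: "clinear (Ps ^^ k)" by (rule funpow_clinear[OF clinear_Ps])
lemma clinear_P_pow: "clinear (P ^^ k)" by (rule funpow_clinear[OF clinear_P])

text \<open>W h is the sequence of Taylor coefficients of D_{P*} (I - z P*)^{-1} h, i.e. the
  Sz.-Nagy--Foias embedding of H into H^2 (x) D_{P*}.\<close>

definition W :: "'a \<Rightarrow> nat \<Rightarrow> 'a" where "W h = (\<lambda>k. DPs ((Ps ^^ k) h))"

lemma W_add: "W (x + y) = (\<lambda>k. W x k + W y k)"
  unfolding W_def by (simp add: clinear_add[OF clinear_Ps_pow] clinear_add[OF clinear_DPs])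
lemma W_cscale: "W (cscale a x) = (\<lambda>k. cscale a (W x k))"
  unfolding W_def by (simp add: clinear_cscale[OF clinear_Ps_pow] clinear_cscale[OF clinear_DPs])
lemma W_diff: "W (x - y) = (\<lambda>k. W x k - W y k)"
  unfolding W_def by (simp add: clinear_diff[OF clinear_Ps_pow] clinear_diff[OF clinear_DPs])
lemma W_Ps_shift: "W (Ps y) k = W y (Suc k)"
  unfolding W_def by (simp add: funpow_swap1)
lemma W_in_DPs_space: "W x k \<in> DPs_space" unfolding W_def by (rule DPs_space_props(3))

lemma W_partial: "(\<Sum>k<N. cinner (W x k) (W y k)) = cinner x y - cinner ((Ps ^^ N) x) ((Ps ^^ N) y)"
proof (induction N)
  case 0 then show ?case by simp
next
  case (Suc N)
  have "cinner (W x N) (W y N) = cinner ((Ps ^^ N) x) ((Ps ^^ N) y) - cinner ((Ps ^^ Suc N) x) ((Ps ^^ Suc N) y)"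
    unfolding W_def by (simp add: DPs_inner)
  then show ?case using Suc by simp
qed

lemma pow_inner_tendsto: "(\<lambda>N. cinner ((Ps ^^ N) x) ((Ps ^^ N) y)) \<longlonglongrightarrow> 0"
proof (rule tendsto0_le)
  show "(\<lambda>N. hnorm ((Ps ^^ N) x) * hnorm y) \<longlonglongrightarrow> 0"
    by (rule tendsto_mult_left_zero[OF pure])
  fix N
  have "cmod (cinner ((Ps ^^ N) x) ((Ps ^^ N) y)) \<le> hnorm ((Ps ^^ N) x) * hnorm ((Ps ^^ N) y)" by (rule cauchy_schwarz)
  also have "\<dots> \<le> hnorm ((Ps ^^ N) x) * hnorm y" by (intro mult_left_mono Ps_pow_norm) simp
  finally show "norm (cinner ((Ps ^^ N) x) ((Ps ^^ N) y)) \<le> hnorm ((Ps ^^ N) x) * hnorm y" by simp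
qed

lemma W_sums: "(\<lambda>k. cinner (W x k) (W y k)) sums cinner x y"
proof -
  have "(\<lambda>N. cinner x y - cinner ((Ps ^^ N) x) ((Ps ^^ N) y)) \<longlonglongrightarrow> cinner x y - 0"
    by (intro tendsto_diff tendsto_const pow_inner_tendsto)
  then show ?thesis unfolding sums_def W_partial by simp
qed

lemma W_l2s: "l2s (W x)"
proof -
  have "summable (\<lambda>k. cinner (W x k) (W x k))" using W_sums sums_summable by blast
  then have "summable (\<lambda>k. Re (cinner (W x k) (W x k)))" by (rule summable_Re)
  then show ?thesis unfolding l2s_def by (simp add: hnorm_sq)
qed

lemma W_isometry: "l2_inner (W x) (W y) = cinner x y"
  unfolding l2_inner_def using W_sums sums_unique by metis

lemma W_l2n2: "l2n2 (W x) = (hnorm x)\<^sup>2"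
proof -
  have "complex_of_real (l2n2 (W x)) = cinner x x" using l2_inner_self[OF W_l2s] W_isometry by simp
  then show ?thesis using hnorm_sq_c[of x] by (metis of_real_eq_iff)
qed

lemma W_H2: "W x \<in> H2 DPs_space"
  unfolding H2_def using W_in_DPs_space W_l2s unfolding l2s_def by blast

lemma W_inj: "W x = W y \<Longrightarrow> x = y"
proof -
  assume "W x = W y"
  then have "W (x - y) = (\<lambda>k. 0)" by (simp add: W_diff)
  then have "cinner (x - y) (x - y) = 0" using W_isometry[of "x - y" "x - y"] by (simp add: l2_inner_def)
  then show "x = y" by simp
qed

lemma theta_0: "theta_coeff P 0 x = - P x" unfolding theta_coeff_def by simp
lemma theta_Suc: "theta_coeff P (Suc r) x = DPs ((Ps ^^ r) (DP x))" unfolding theta_coeff_def by simp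
lemma theta_W: "theta_coeff P (Suc r) x = W (DP x) r" unfolding theta_Suc W_def by simp
lemma theta_clinear: "clinear (theta_coeff P m)"
proof (cases m)
  case 0 then show ?thesis unfolding theta_coeff_def using clinear_P
    by (simp add: clinear_def cscale_minus_right)
next
  case (Suc r) then show ?thesis unfolding theta_coeff_def using clinear_DPs clinear_DP clinear_Ps_pow
    by (simp add: clinear_def)
qed

lemma theta_telescope: "(\<Sum>r<Suc m. (P ^^ r) (DPs (theta_coeff P r x))) = - (P ^^ Suc m) ((Ps ^^ m) (DP x))"
proof (induction m)
  case 0
  have "DPs (- P x) = - P (DP x)" by (simp add: clinear_minus[OF clinear_DPs] P_DP)
  then show ?case by (simp add: theta_0)
next
  case (Suc m)
  have "(P ^^ Suc m) (DPs (theta_coeff P (Suc m) x)) = (P ^^ Suc m) ((Ps ^^ m) (DP x)) - (P ^^ Suc (Suc m)) ((Ps ^^ Suc m) (DP x))"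
  proof -
    have e1: "(P ^^ Suc m) (P z) = (P ^^ Suc (Suc m)) z" for z
      by (simp only: funpow_Suc_right[of "Suc m"] comp_def)
    have e2: "Ps ((Ps ^^ m) (DP x)) = (Ps ^^ Suc m) (DP x)" by simp
    show ?thesis by (simp only: theta_Suc DPs_sq clinear_diff[OF clinear_P_pow] e1 e2)
  qed
  have "(\<Sum>r<Suc (Suc m). (P ^^ r) (DPs (theta_coeff P r x))) = (\<Sum>r<Suc m. (P ^^ r) (DPs (theta_coeff P r x))) + (P ^^ Suc m) (DPs (theta_coeff P (Suc m) x))"
    by (rule sum.lessThan_Suc)
  then show ?case using Suc \<open>(P ^^ Suc m) (DPs (theta_coeff P (Suc m) x)) = _\<close> by (simp only:) (simp add: algebra_simps)
qed

lemma DP_norm_telescope: "(\<Sum>i<N. (hnorm (DP ((P ^^ i) y)))\<^sup>2) = (hnorm y)\<^sup>2 - (hnorm ((P ^^ N) y))\<^sup>2"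
  by (induction N) (simp_all add: DP_norm)

lemma backward_sum_bound:
  fixes f :: "nat \<Rightarrow> 'a" and N :: nat
  defines "V \<equiv> (\<Sum>j<N. (Ps ^^ (N - Suc j)) (DP (f j)))"
  shows "hnorm V \<le> sqrt (\<Sum>j<N. (hnorm (f j))\<^sup>2)"
proof (cases "V = 0")
  case True then show ?thesis by (simp add: sum_nonneg)
next
  case False
  have "(hnorm V)\<^sup>2 = Re (cinner V V)" by (rule hnorm_sq)
  also have "cinner V V = (\<Sum>j<N. cinner (f j) (DP ((P ^^ (N - Suc j)) V)))"
    by (subst (1) V_def) (simp add: cinner_sum_left Ps_pow_cinner DP_selfadj)
  also have "Re \<dots> \<le> cmod \<dots>" by (rule complex_Re_le_cmod)
  also have "\<dots> \<le> (\<Sum>j<N. hnorm (f j) * hnorm (DP ((P ^^ (N - Suc j)) V)))"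
    by (rule order_trans[OF norm_sum]) (intro sum_mono cauchy_schwarz)
  also have "\<dots> \<le> sqrt (\<Sum>j<N. (hnorm (f j))\<^sup>2) * sqrt (\<Sum>j<N. (hnorm (DP ((P ^^ (N - Suc j)) V)))\<^sup>2)"
    by (rule finite_cs)
  also have "sqrt (\<Sum>j<N. (hnorm (f j))\<^sup>2) * sqrt (\<Sum>j<N. (hnorm (DP ((P ^^ (N - Suc j)) V)))\<^sup>2) \<le> sqrt (\<Sum>j<N. (hnorm (f j))\<^sup>2) * hnorm V"
  proof (rule mult_left_mono)
    have "(\<Sum>j<N. (hnorm (DP ((P ^^ (N - Suc j)) V)))\<^sup>2) = (\<Sum>i<N. (hnorm (DP ((P ^^ i) V)))\<^sup>2)"
      by (rule sum.nat_diff_reindex[where g="\<lambda>i. (hnorm (DP ((P ^^ i) V)))\<^sup>2"])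
    also have "\<dots> \<le> (hnorm V)\<^sup>2" unfolding DP_norm_telescope by simp
    finally show "sqrt (\<Sum>j<N. (hnorm (DP ((P ^^ (N - Suc j)) V)))\<^sup>2) \<le> hnorm V"
      by (simp add: real_le_lsqrt real_sqrt_le_iff)
  qed (simp add: sum_nonneg)
  finally have "(hnorm V)\<^sup>2 \<le> sqrt (\<Sum>j<N. (hnorm (f j))\<^sup>2) * hnorm V" .
  moreover have "hnorm V > 0" using False hnorm_nonneg[of V] hnorm_eq_zero by (metis less_eq_real_def)
  ultimately show ?thesis by (simp add: power2_eq_square)
qed

text \<open>By the telescoping identity the N-th partial sum of <W x, M_Theta f> equals
  -<P*^N x, V_N> with |V_N| \<le> |f|, so it tends to 0 by purity.\<close>

lemma theta_partial:
  "(\<Sum>k<N. cinner (W x k) (mult_theta P f k)) = - cinner ((Ps ^^ N) x) (\<Sum>j<N. (Ps ^^ (N - Suc j)) (DP (f j)))"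
proof -
  define G where "G = (\<lambda>j r. (P ^^ (j + r)) (DPs (theta_coeff P r (f j))))"
  have "(\<Sum>k<N. cinner (W x k) (mult_theta P f k)) = (\<Sum>k<N. \<Sum>j\<le>k. cinner x (G j (k - j)))"
    unfolding mult_theta_def W_def G_def
    by (intro sum.cong refl) (simp add: cinner_sum_right DPs_selfadj Ps_pow_cinner)
  also have "\<dots> = cinner x (\<Sum>k<N. \<Sum>j\<le>k. G j (k - j))" by (simp add: cinner_sum_right)
  also have "(\<Sum>k<N. \<Sum>j\<le>k. G j (k - j)) = (\<Sum>(j, r)\<in>{(j, r). j + r < N}. G j r)"
    by (rule sum.triangle_reindex[symmetric])
  also have "\<dots> = (\<Sum>j<N. \<Sum>r<N - j. G j r)"
  proof -
    have "{(j, r). j + r < N} = Sigma {..<N} (\<lambda>j. {..<N - j})" by auto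
    then show ?thesis by (simp add: sum.Sigma)
  qed
  also have "\<dots> = (\<Sum>j<N. - (P ^^ N) ((Ps ^^ (N - Suc j)) (DP (f j))))"
  proof (rule sum.cong[OF refl])
    fix j assume j: "j \<in> {..<N}"
    then obtain m where m: "N - j = Suc m" by (metis Suc_diff_Suc lessThan_iff)
    have "(\<Sum>r<N - j. G j r) = (P ^^ j) (\<Sum>r<Suc m. (P ^^ r) (DPs (theta_coeff P r (f j))))"
      unfolding G_def m by (simp only: clinear_sum[OF clinear_P_pow] funpow_add comp_def)
    also have "\<dots> = (P ^^ j) (- (P ^^ Suc m) ((Ps ^^ m) (DP (f j))))" by (simp only: theta_telescope)
    also have "\<dots> = - (P ^^ N) ((Ps ^^ (N - Suc j)) (DP (f j)))"
    proof -
      have NN: "N = j + Suc m" "N - Suc j = m" using m j by auto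
      have "(P ^^ j) (- (P ^^ Suc m) ((Ps ^^ m) (DP (f j)))) = - (P ^^ (j + Suc m)) ((Ps ^^ m) (DP (f j)))"
        by (simp only: clinear_minus[OF clinear_P_pow] funpow_add comp_def)
      then have "(P ^^ j) (- (P ^^ Suc m) ((Ps ^^ m) (DP (f j)))) = - (P ^^ N) ((Ps ^^ m) (DP (f j)))"
        by (simp only: NN(1))
      then show ?thesis by (simp only: NN(2))
    qed
    finally show "(\<Sum>r<N - j. G j r) = - (P ^^ N) ((Ps ^^ (N - Suc j)) (DP (f j)))" .
  qed
  also have "\<dots> = - (P ^^ N) (\<Sum>j<N. (Ps ^^ (N - Suc j)) (DP (f j)))"
    by (simp add: clinear_sum[OF clinear_P_pow] sum_negf)
  finally show ?thesis by (simp add: cinner_minus_right Ps_pow_cinner[symmetric])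
qed

lemma W_orthogonal_mult_theta: assumes f: "l2s f" shows "l2_inner (W x) (mult_theta P f) = 0"
proof -
  have "(\<lambda>N. \<Sum>k<N. cinner (W x k) (mult_theta P f k)) \<longlonglongrightarrow> 0"
  proof (rule tendsto0_le)
    show "(\<lambda>N. hnorm ((Ps ^^ N) x) * sqrt (l2n2 f)) \<longlonglongrightarrow> 0" by (rule tendsto_mult_left_zero[OF pure])
    fix N
    have "norm (\<Sum>k<N. cinner (W x k) (mult_theta P f k))
        = cmod (cinner ((Ps ^^ N) x) (\<Sum>j<N. (Ps ^^ (N - Suc j)) (DP (f j))))"
      unfolding theta_partial by (simp add: norm_minus_cancel)
    also have "\<dots> \<le> hnorm ((Ps ^^ N) x) * hnorm (\<Sum>j<N. (Ps ^^ (N - Suc j)) (DP (f j)))" by (rule cauchy_schwarz)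
    also have "\<dots> \<le> hnorm ((Ps ^^ N) x) * sqrt (l2n2 f)"
    proof (rule mult_left_mono)
      have "hnorm (\<Sum>j<N. (Ps ^^ (N - Suc j)) (DP (f j))) \<le> sqrt (\<Sum>j<N. (hnorm (f j))\<^sup>2)" by (rule backward_sum_bound)
      also have "\<dots> \<le> sqrt (l2n2 f)" by (intro real_sqrt_le_mono partial_le_l2n2 f)
      finally show "hnorm (\<Sum>j<N. (Ps ^^ (N - Suc j)) (DP (f j))) \<le> sqrt (l2n2 f)" .
    qed simp
    finally show "norm (\<Sum>k<N. cinner (W x k) (mult_theta P f k)) \<le> hnorm ((Ps ^^ N) x) * sqrt (l2n2 f)" .
  qed
  then have "(\<lambda>k. cinner (W x k) (mult_theta P f k)) sums 0" unfolding sums_def .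
  then show ?thesis unfolding l2_inner_def by (rule sums_unique[symmetric])
qed

lemma W_in_model_space: "W x \<in> model_space P"
  unfolding model_space_def using W_H2 W_orthogonal_mult_theta H2_l2s by blast

lemma Ps_maps_DPs_space: assumes y: "y \<in> DPs_space" shows "Ps y \<in> DP_space"
proof -
  obtain X where X: "\<forall>k. X k \<in> range DPs" "hconv X y"
    using hclosure_seq[of y "range DPs"] y unfolding defect_space_def by blast
  have "\<forall>k. Ps (X k) \<in> hclosure (range DP)"
  proof
    fix k
    obtain w where w: "X k = DPs w" using X(1) by blast
    have "Ps (X k) = Ps (DPs w)" by (simp only: w)
    also have "\<dots> = DP (Ps w)" by (rule Ps_DPs)
    finally have "Ps (X k) = DP (Ps w)" .
    moreover have "DP (Ps w) \<in> hclosure (range DP)" by (rule subsetD[OF hclosure_sub rangeI])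
    ultimately show "Ps (X k) \<in> hclosure (range DP)" by simp
  qed
  moreover have "hconv (\<lambda>k. Ps (X k)) (Ps y)" by (rule bounded_hconv[OF bounded_Ps X(2)])
  ultimately show ?thesis unfolding defect_space_def by (rule hconv_in_hclosure)
qed

lemma W_adj_tail_exists:
  assumes g: "l2s g" shows "\<exists>u. \<forall>y. l2_inner (W y) (\<lambda>k. g (k + j)) = cinner y u"
proof -
  have gj: "l2s (\<lambda>k. g (k + j))" by (rule l2s_shift_fwd[OF g])
  have "\<exists>u\<in>UNIV. \<forall>y\<in>UNIV. l2_inner (W y) (\<lambda>k. g (k + j)) = cinner y u"
  proof (rule riesz_representation[OF hsubspace_UNIV hclosed_UNIV])
    show "\<forall>x\<in>UNIV. \<forall>y\<in>UNIV. l2_inner (W (x + y)) (\<lambda>k. g (k + j)) =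
        l2_inner (W x) (\<lambda>k. g (k + j)) + l2_inner (W y) (\<lambda>k. g (k + j))"
      unfolding W_add by (simp add: l2_inner_add_left[OF W_l2s W_l2s gj])
    show "\<forall>a. \<forall>x\<in>UNIV. l2_inner (W (cscale a x)) (\<lambda>k. g (k + j)) = a * l2_inner (W x) (\<lambda>k. g (k + j))"
      unfolding W_cscale by (simp add: l2_inner_cscale_left[OF W_l2s gj])
    show "\<forall>x\<in>UNIV. cmod (l2_inner (W x) (\<lambda>k. g (k + j))) \<le> sqrt (l2n2 (\<lambda>k. g (k + j))) * hnorm x"
      using l2_cs[OF W_l2s gj] by (simp add: W_l2n2 mult.commute)
  qed
  then show ?thesis by blast
qed

text \<open>W_adj_tail j g is W* applied to the j-fold backward shift of g.\<close>

definition W_adj_tail :: "nat \<Rightarrow> (nat \<Rightarrow> 'a) \<Rightarrow> 'a" where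
  "W_adj_tail j g = (SOME u. \<forall>y. l2_inner (W y) (\<lambda>k. g (k + j)) = cinner y u)"

lemma l2_inner_W_tail:
  assumes "l2s g" shows "l2_inner (W y) (\<lambda>k. g (k + j)) = cinner y (W_adj_tail j g)"
  using someI_ex[OF W_adj_tail_exists[OF assms, of j]] unfolding W_adj_tail_def by blast

lemma W_adj_tail_rec: assumes g: "l2s g" shows "W_adj_tail j g = DPs (g j) + P (W_adj_tail (Suc j) g)"
proof -
  have "cinner y (W_adj_tail j g) = cinner y (DPs (g j) + P (W_adj_tail (Suc j) g))" for y
  proof -
    have gj: "l2s (\<lambda>k. g (k + j))" by (rule l2s_shift_fwd[OF g])
    have sm: "summable (\<lambda>k. cinner (W y k) (g (k + j)))" by (rule l2_summable[OF W_l2s gj])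
    have "cinner y (W_adj_tail j g) = (\<Sum>k. cinner (W y k) (g (k + j)))" using l2_inner_W_tail[OF g] unfolding l2_inner_def by simp
    also have "\<dots> = cinner (W y 0) (g j) + (\<Sum>k. cinner (W y (Suc k)) (g (Suc k + j)))"
      using suminf_split_head[OF sm] by simp
    also have "(\<Sum>k. cinner (W y (Suc k)) (g (Suc k + j))) = l2_inner (W (Ps y)) (\<lambda>k. g (k + Suc j))"
      unfolding l2_inner_def W_Ps_shift by simp
    also have "\<dots> = cinner (Ps y) (W_adj_tail (Suc j) g)" by (rule l2_inner_W_tail[OF g])
    also have "cinner (Ps y) (W_adj_tail (Suc j) g) = cinner y (P (W_adj_tail (Suc j) g))" by (rule Ps_cinner)
    also have "cinner (W y 0) (g j) = cinner y (DPs (g j))" unfolding W_def by (simp add: DPs_selfadj)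
    finally show ?thesis by (simp add: cinner_add_right)
  qed
  then show ?thesis by (intro cinner_eq_right_unique) blast
qed

lemma mult_theta_single:
  "mult_theta P (\<lambda>k. if k = j then \<xi> else 0) k = (if j \<le> k then theta_coeff P (k - j) \<xi> else 0)"
proof -
  have "mult_theta P (\<lambda>k. if k = j then \<xi> else 0) k = (\<Sum>i\<le>k. if i = j then theta_coeff P (k - j) \<xi> else 0)"
    unfolding mult_theta_def by (intro sum.cong refl) (simp add: clinear_zero[OF theta_clinear])
  also have "\<dots> = (if j \<le> k then theta_coeff P (k - j) \<xi> else 0)" by (simp add: sum.delta)
  finally show ?thesis .
qed

lemma single_in_H2:
  assumes "hsubspace E" "\<xi> \<in> E" shows "(\<lambda>k. if k = j then \<xi> else 0) \<in> H2 E"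
proof -
  have "(\<lambda>k. (hnorm (if k = j then \<xi> else 0))\<^sup>2) = (\<lambda>k. if k = j then (hnorm \<xi>)\<^sup>2 else 0)" by auto
  then have "summable (\<lambda>k. (hnorm (if k = j then \<xi> else 0))\<^sup>2)"
    using sums_single[of j "\<lambda>_. (hnorm \<xi>)\<^sup>2"] sums_summable by metis
  then show ?thesis unfolding H2_def using assms hsubspace_zero by auto
qed

lemma l2_inner_mult_theta_single:
  assumes g: "l2s g"
  shows "l2_inner g (mult_theta P (\<lambda>k. if k = j then \<xi> else 0)) =
    cinner (DP (W_adj_tail (Suc j) g)) \<xi> - cinner (Ps (g j)) \<xi>"
proof -
  define u where "u = W_adj_tail (Suc j) g"
  define a where "a = (\<lambda>k. cinner (g k) (mult_theta P (\<lambda>k. if k = j then \<xi> else 0) k))"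
  define b where "b = (\<lambda>r. cinner (g (r + j)) (theta_coeff P r \<xi>))"
  have ab: "a (r + j) = b r" for r unfolding a_def b_def mult_theta_single by simp
  have a0: "(\<Sum>i<j. a i) = 0" unfolding a_def mult_theta_single by simp
  have "(\<lambda>r. b (Suc r)) = (\<lambda>r. cinner (g (r + Suc j)) (W (DP \<xi>) r))"
    unfolding b_def theta_W by simp
  moreover have "summable (\<lambda>r. cinner (g (r + Suc j)) (W (DP \<xi>) r))"
    by (rule l2_summable[OF l2s_shift_fwd[OF g] W_l2s])
  ultimately have bS: "(\<lambda>r. b (Suc r)) sums l2_inner (\<lambda>r. g (r + Suc j)) (W (DP \<xi>))"
    unfolding l2_inner_def by (simp add: summable_sums)
  have "l2_inner (\<lambda>r. g (r + Suc j)) (W (DP \<xi>)) = cnj (l2_inner (W (DP \<xi>)) (\<lambda>k. g (k + Suc j)))"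
    by (rule l2_inner_cnj[OF W_l2s l2s_shift_fwd[OF g]])
  also have "\<dots> = cnj (cinner (DP \<xi>) u)" unfolding u_def by (rule arg_cong[OF l2_inner_W_tail[OF g]])
  also have "\<dots> = cinner (DP u) \<xi>" by (simp add: cinner_commute[of u] DP_selfadj)
  finally have "b sums (cinner (DP u) \<xi> + b 0)" using bS by (simp add: sums_Suc_iff)
  then have "(\<lambda>r. a (r + j)) sums (cinner (DP u) \<xi> + b 0)" using ab by simp
  then have "a sums (cinner (DP u) \<xi> + b 0)" using a0 sums_iff_shift[of a j] by simp
  moreover have "b 0 = - cinner (Ps (g j)) \<xi>"
    unfolding b_def theta_0 by (simp add: cinner_minus_right Ps_cinner)
  ultimately show ?thesis unfolding l2_inner_def a_def u_def using sums_unique by fastforce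
qed

text \<open>Testing the orthogonality of g to the range of M_Theta on single vectors gives
  D_P u_(j+1) = P* g_j for u_j = W_adj_tail j g.\<close>

lemma W_adj_tail_orth: assumes gM: "g \<in> model_space P" shows "DP (W_adj_tail (Suc j) g) = Ps (g j)"
proof -
  have gH: "g \<in> H2 DPs_space" using gM unfolding model_space_def by blast
  define z where "z = DP (W_adj_tail (Suc j) g) - Ps (g j)"
  have "cinner z \<xi> = 0" if "\<xi> \<in> DP_space" for \<xi>
  proof -
    have "l2_inner g (mult_theta P (\<lambda>k. if k = j then \<xi> else 0)) = 0"
      using gM single_in_H2[OF DP_space_props(1) that] unfolding model_space_def by blast
    then show ?thesis
      using l2_inner_mult_theta_single[OF H2_l2s[OF gH]] unfolding z_def by (simp add: cinner_diff_left)
  qed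
  moreover have "g j \<in> DPs_space" using gH unfolding H2_def by blast
  then have "z \<in> DP_space" unfolding z_def
    using DP_space_props(1,3) Ps_maps_DPs_space by (blast intro: hsubspace_diff)
  ultimately have "cinner z z = 0" by blast
  then show ?thesis unfolding z_def by simp
qed

lemma W_adj_tail_norm: assumes gM: "g \<in> model_space P"
  shows "(hnorm (W_adj_tail j g))\<^sup>2 = (hnorm (W_adj_tail (Suc j) g))\<^sup>2 + (hnorm (g j))\<^sup>2"
proof -
  have gH: "g \<in> H2 DPs_space" using gM unfolding model_space_def by blast
  have g: "l2s g" by (rule H2_l2s[OF gH])
  define u where "u = W_adj_tail (Suc j) g"
  define y where "y = g j"
  have r1: "W_adj_tail j g = DPs y + P u" unfolding u_def y_def by (rule W_adj_tail_rec[OF g])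
  have r2: "DP u = Ps y" unfolding u_def y_def by (rule W_adj_tail_orth[OF gM])
  have i1: "Re (cinner (DPs y) (P u)) = (hnorm (Ps y))\<^sup>2"
  proof -
    have "cinner (DPs y) (P u) = cinner y (DPs (P u))" by (rule DPs_selfadj)
    also have "DPs (P u) = P (DP u)" by (simp add: P_DP)
    also have "cinner y (P (DP u)) = cinner (Ps y) (DP u)" by (simp add: Ps_cinner)
    finally show ?thesis using r2 by (simp add: hnorm_sq)
  qed
  have "(hnorm (W_adj_tail j g))\<^sup>2 = (hnorm (DPs y))\<^sup>2 + (hnorm (P u))\<^sup>2 + 2 * Re (cinner (DPs y) (P u))"
    unfolding r1 by (rule hnorm_add_sq)
  also have "\<dots> = (hnorm y)\<^sup>2 - (hnorm (Ps y))\<^sup>2 + ((hnorm u)\<^sup>2 - (hnorm (DP u))\<^sup>2) + 2 * (hnorm (Ps y))\<^sup>2"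
    using DPs_norm[of y] DP_norm[of u] i1 by simp
  also have "\<dots> = (hnorm u)\<^sup>2 + (hnorm y)\<^sup>2" using r2 by simp
  finally show ?thesis unfolding u_def y_def .
qed

lemma W_adj_tail_norm_sum: assumes gM: "g \<in> model_space P"
  shows "(hnorm (W_adj_tail 0 g))\<^sup>2 = (hnorm (W_adj_tail N g))\<^sup>2 + (\<Sum>j<N. (hnorm (g j))\<^sup>2)"
proof (induction N)
  case 0 then show ?case by simp
next
  case (Suc N) then show ?case using W_adj_tail_norm[OF gM, of N] by simp
qed

text \<open>Surjectivity: u_0 = W_adj_tail 0 g satisfies |u_0|^2 \<ge> |g|^2 and <W u_0, g> = |u_0|^2,
  hence |g - W u_0|^2 = |g|^2 - |u_0|^2 \<le> 0.\<close>

lemma model_space_W_preimage: assumes gM: "g \<in> model_space P" shows "g = W (W_adj_tail 0 g)"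
proof -
  have gH: "g \<in> H2 DPs_space" using gM unfolding model_space_def by blast
  have g: "l2s g" by (rule H2_l2s[OF gH])
  define h where "h = W_adj_tail 0 g"
  have le: "l2n2 g \<le> (hnorm h)\<^sup>2"
    unfolding l2n2_def h_def
  proof (rule suminf_le_const)
    show "summable (\<lambda>k. (hnorm (g k))\<^sup>2)" using g unfolding l2s_def .
    fix N show "(\<Sum>k<N. (hnorm (g k))\<^sup>2) \<le> (hnorm (W_adj_tail 0 g))\<^sup>2"
      using W_adj_tail_norm_sum[OF gM, of N] by simp
  qed
  have Wg: "l2_inner (W h) g = cinner h h"
    using l2_inner_W_tail[OF g, of h 0] unfolding h_def by simp
  have gW: "l2_inner g (W h) = cinner h h"
    using l2_inner_cnj[OF W_l2s g, of h] Wg by (simp add: cinner_commute[of h h, symmetric])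
  define D where "D = (\<lambda>k. g k - W h k)"
  have D: "l2s D" unfolding D_def by (rule l2s_diff[OF g W_l2s])
  have "l2_inner D D = l2_inner g D - l2_inner (W h) D"
    unfolding D_def by (rule l2_inner_diff_left[OF g W_l2s l2s_diff[OF g W_l2s]])
  also have "l2_inner g D = l2_inner g g - l2_inner g (W h)"
    unfolding D_def by (rule l2_inner_diff_right[OF g W_l2s g])
  also have "l2_inner (W h) D = l2_inner (W h) g - l2_inner (W h) (W h)"
    unfolding D_def by (rule l2_inner_diff_right[OF g W_l2s W_l2s])
  finally have "l2_inner D D = l2_inner g g - cinner h h"
    using Wg gW W_isometry[of h h] by simp
  then have "complex_of_real (l2n2 D) = complex_of_real (l2n2 g - (hnorm h)\<^sup>2)"
    using l2_inner_self[OF D] l2_inner_self[OF g] hnorm_sq_c[of h] by simp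
  then have "l2n2 D = l2n2 g - (hnorm h)\<^sup>2" by (simp only: of_real_eq_iff)
  then have "l2n2 D = 0" using le l2n2_nonneg[OF D] by simp
  then have "D k = 0" for k using l2_zero[OF D] by blast
  then show ?thesis unfolding D_def h_def by auto
qed

lemma W_bij: "bij_betw W UNIV (model_space P)"
  unfolding bij_betw_def
proof
  show "inj W" by (rule injI) (rule W_inj)
  show "range W = model_space P"
    using W_in_model_space model_space_W_preimage by blast
qed

lemma l2_proj_model_space_eq:
  assumes g: "l2s g" and hM: "h \<in> model_space P"
    and orth: "\<And>y. l2_inner (\<lambda>k. g k - h k) (W y) = 0"
  shows "l2_proj (model_space P) g = h"
  unfolding l2_proj_def
proof (rule the_equality)
  show "h \<in> model_space P \<and> (\<forall>m\<in>model_space P. l2_inner (\<lambda>k. g k - h k) m = 0)"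
    using hM orth model_space_W_preimage by metis
next
  fix h' assume h': "h' \<in> model_space P \<and> (\<forall>m\<in>model_space P. l2_inner (\<lambda>k. g k - h' k) m = 0)"
  obtain a where a: "h = W a" using model_space_W_preimage[OF hM] by blast
  obtain b where b: "h' = W b" using model_space_W_preimage h' by blast
  have D: "(\<lambda>k. h' k - h k) = W (b - a)" unfolding a b W_diff by simp
  have l1: "l2s (\<lambda>k. g k - h k)" unfolding a by (rule l2s_diff[OF g W_l2s])
  have l2: "l2s (\<lambda>k. g k - h' k)" unfolding b by (rule l2s_diff[OF g W_l2s])
  have "(\<lambda>k. h' k - h k) = (\<lambda>k. (g k - h k) - (g k - h' k))" by (simp add: algebra_simps)
  then have "l2_inner (\<lambda>k. h' k - h k) (W (b - a)) = l2_inner (\<lambda>k. g k - h k) (W (b - a)) - l2_inner (\<lambda>k. g k - h' k) (W (b - a))"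
    using l2_inner_diff_left[OF l1 l2 W_l2s] by simp
  also have "\<dots> = 0" using orth h' W_in_model_space by simp
  finally have "l2_inner (\<lambda>k. h' k - h k) (\<lambda>k. h' k - h k) = 0" using D by simp
  then show "h' = h" using l2_eq[of h' h] a b W_l2s by blast
qed

text \<open>Since W is unitary onto the model space, W T = P_M A W follows from W* A W = T,
  which is tested against the vectors W y.\<close>

lemma W_compression:
  assumes g: "l2s g" and T: "\<And>y. l2_inner g (W y) = cinner (T x) y"
  shows "W (T x) = l2_proj (model_space P) g"
proof (rule l2_proj_model_space_eq[OF g W_in_model_space, symmetric])
  fix y
  show "l2_inner (\<lambda>k. g k - W (T x) k) (W y) = 0"
    using l2_inner_diff_left[OF g W_l2s W_l2s] T W_isometry by simp
qed

lemma unitarily_equiv_comprI: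
  assumes "\<And>x. W (T x) = l2_proj (model_space P) (A (W x))"
  shows "unitarily_equiv_compr T (model_space P) A"
  unfolding unitarily_equiv_compr_def
  using W_bij W_add W_cscale W_isometry assms by (intro exI[of _ W]) auto

lemma l2_inner_shift_W: "l2_inner (shift (W x)) (W y) = cinner (P x) y"
proof -
  define a where "a = (\<lambda>k. cinner (shift (W x) k) (W y k))"
  have "(\<lambda>k. a (Suc k)) = (\<lambda>k. cinner (W x k) (W (Ps y) k))" unfolding a_def shift_def W_Ps_shift by simp
  then have "(\<lambda>k. a (Suc k)) sums cinner x (Ps y)" using W_sums by simp
  moreover have "a 0 = 0" unfolding a_def shift_def by simp
  ultimately have "a sums cinner x (Ps y)" by (simp add: sums_Suc_iff)
  then show ?thesis unfolding l2_inner_def a_def using sums_unique P_cinner by metis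
qed

lemma unitarily_equiv_compr_P: "unitarily_equiv_compr P (model_space P) shift"
proof (rule unitarily_equiv_comprI)
  show "W (P x) = l2_proj (model_space P) (shift (W x))" for x
  proof (rule W_compression[where T=P and x=x])
    show "l2s (shift (W x))" unfolding shift_def by (rule l2s_shift[OF W_l2s])
  qed (rule l2_inner_shift_W)
qed

end

section \<open>The model of the fundamental operators\<close>

locale fundamental_pair = pure_contraction +
  fixes S1 S2 B1 B2 :: "'a \<Rightarrow> 'a"
  assumes bounded_S1: "bounded_op S1" and bounded_S2: "bounded_op S2"
    and S1_P: "\<And>x. S1 (P x) = P (S1 x)"
    and B1_maps: "\<forall>x\<in>defect_space (adj P). B1 x \<in> defect_space (adj P)"
    and bounded_B1: "bounded_op_on (defect_space (adj P)) B1"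
    and bounded_B2: "bounded_op_on (defect_space (adj P)) B2"
    and fundamental_1: "\<And>x. adj S1 x - S2 (adj P x) = defect (adj P) (B1 (defect (adj P) x))"
    and fundamental_2: "\<And>x. adj S2 x - S1 (adj P x) = defect (adj P) (B2 (defect (adj P) x))"
begin

abbreviation "B1s \<equiv> adj_on DPs_space B1"
abbreviation "B2s \<equiv> adj_on DPs_space B2"

lemmas B1s = adj_on_cinner[OF DPs_space_props(1,2) bounded_B1]
lemmas B2s = adj_on_cinner[OF DPs_space_props(1,2) bounded_B2]

text \<open>The two fundamental equations combine into the intertwining relation
  D_{P*} S1* = B1 D_{P*} + B2* D_{P*} P*, both sides being compared on the dense range of D_{P*}.\<close>

lemma DPs_adj_S1: "DPs (adj S1 z) = B1 (DPs z) + B2s (DPs (Ps z))"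
proof -
  define v where "v = DPs (adj S1 z) - (B1 (DPs z) + B2s (DPs (Ps z)))"
  have vE: "v \<in> DPs_space" unfolding v_def
    using DPs_space_props B1_maps B2s by (intro hsubspace_diff hsubspace_add) auto
  have "cinner (DPs w) v = 0" for w
  proof -
    have "cinner (DPs w) (B2s (DPs (Ps z))) = cinner (DPs (B2 (DPs w))) (Ps z)"
      using B2s(2) DPs_space_props(3) by (simp add: DPs_selfadj)
    also have "\<dots> = cinner w (S2 (Ps z)) - cinner w (P (Ps (adj S1 z)))"
      by (simp add: fundamental_2[symmetric] cinner_diff_left adj_cinner_left[OF bounded_S2]
          adj_cinner[OF bounded_S1] Ps_cinner adj_commute[OF bounded_S1 bounded_P S1_P])
    finally show ?thesis unfolding v_def
      by (simp add: cinner_diff_right cinner_add_right DPs_selfadj DPs_sq fundamental_1[symmetric])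
  qed
  then have "cinner v v = 0" using orth_hclosure[of v "range DPs" v] vE unfolding defect_space_def by blast
  then show ?thesis unfolding v_def by simp
qed

lemma W_adj_S1: "W (adj S1 y) k = B1 (W y k) + B2s (W y (Suc k))"
proof -
  have "(Ps ^^ k) (adj S1 y) = adj S1 ((Ps ^^ k) y)"
    by (induction k) (simp_all add: adj_commute[OF bounded_S1 bounded_P S1_P])
  then show ?thesis unfolding W_def by (simp add: DPs_adj_S1 funpow_swap1)
qed

definition model_S1 :: "(nat \<Rightarrow> 'a) \<Rightarrow> nat \<Rightarrow> 'a" where
  "model_S1 g = (\<lambda>k. B1s (g k) + (if k = 0 then 0 else B2 (g (k - 1))))"

lemma l2s_model_S1_W: "l2s (model_S1 (W x))"
proof -
  obtain K1 where K1: "\<And>y. hnorm (B1s y) \<le> K1 * hnorm y"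
    using adj_on_bound[OF DPs_space_props(1,2) bounded_B1] by blast
  obtain K2 where K2: "\<And>y. y \<in> DPs_space \<Longrightarrow> hnorm (B2 y) \<le> K2 * hnorm y"
    using bounded_op_on_bound[OF bounded_B2] by blast
  have "l2s (\<lambda>k. B1s (W x k))" by (rule l2s_bounded[OF W_l2s K1])
  moreover have "l2s (\<lambda>k. B2 (W x k))" by (rule l2s_bounded[OF W_l2s[of x], where K=K2]) (simp add: K2 W_in_DPs_space)
  ultimately show ?thesis unfolding model_S1_def by (intro l2s_add l2s_shift)
qed

lemma l2_inner_model_S1_W: "l2_inner (model_S1 (W x)) (W y) = cinner (S1 x) y"
proof -
  define A where "A = (\<lambda>k. cinner (W x k) (B1 (W y k)))"
  define C where "C = (\<lambda>k. cinner (W x k) (B2s (W y (Suc k))))"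
  define Bq where "Bq = (\<lambda>k. cinner (if k = 0 then 0 else B2 (W x (k - 1))) (W y k))"
  obtain K1 where K1: "\<And>y. y \<in> DPs_space \<Longrightarrow> hnorm (B1 y) \<le> K1 * hnorm y"
    using bounded_op_on_bound[OF bounded_B1] by blast
  have "l2s (\<lambda>k. B1 (W y k))" by (rule l2s_bounded[OF W_l2s[of y], where K=K1]) (simp add: K1 W_in_DPs_space)
  then have Asum: "summable A" unfolding A_def by (rule l2_summable[OF W_l2s])
  obtain K2 where K2: "\<And>y. hnorm (B2s y) \<le> K2 * hnorm y"
    using adj_on_bound[OF DPs_space_props(1,2) bounded_B2] by blast
  have "l2s (\<lambda>k. B2s (W y (Suc k)))"
    by (rule l2s_bounded[OF l2s_shift_fwd[OF W_l2s, of y 1], where K=K2]) (simp add: K2)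
  then have Csum: "summable C" unfolding C_def by (rule l2_summable[OF W_l2s])
  \<comment> \<open>the shifted B2-part of the model operator pairs with the B2*-part of W S1* y\<close>
  have "(\<lambda>k. Bq (Suc k)) = C" unfolding Bq_def C_def
    by (rule ext) (simp add: B2s(2) W_in_DPs_space)
  then have "(\<lambda>k. Bq (Suc k)) sums suminf C" using summable_sums[OF Csum] by simp
  then have "Bq sums (suminf C + Bq 0)" by (simp only: sums_Suc_iff)
  then have Bqs: "Bq sums suminf C" unfolding Bq_def by simp
  have "(\<lambda>k. cinner (model_S1 (W x) k) (W y k)) = (\<lambda>k. A k + Bq k)"
    unfolding model_S1_def A_def Bq_def
    by (rule ext) (simp add: cinner_add_left adj_on_cinner_left[OF DPs_space_props(1,2) bounded_B1] W_in_DPs_space)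
  moreover have "(\<lambda>k. A k + Bq k) sums (suminf A + suminf C)" by (rule sums_add[OF summable_sums[OF Asum] Bqs])
  moreover have "(\<lambda>k. A k + C k) sums cinner x (adj S1 y)"
    using W_sums[of x "adj S1 y"] unfolding A_def C_def W_adj_S1 by (simp add: cinner_add_right)
  then have "suminf A + suminf C = cinner x (adj S1 y)"
    using sums_add[OF summable_sums[OF Asum] summable_sums[OF Csum]] sums_unique2 by blast
  ultimately show ?thesis
    unfolding l2_inner_def using adj_cinner[OF bounded_S1] by (metis sums_unique)
qed

lemma unitarily_equiv_compr_S1: "unitarily_equiv_compr S1 (model_space P) model_S1"
  by (rule unitarily_equiv_comprI, rule W_compression[where T=S1, OF l2s_model_S1_W l2_inner_model_S1_W])

end

section \<open>Gamma_n-contractions\<close>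

lemma mono_op_unit:
  "mono_op T (\<lambda>j. if j = i then 1 else 0) m = (if i < m then T i else id)"
  by (induction m) (auto simp: less_Suc_eq)

definition coordinate_mpoly :: "nat \<Rightarrow> (nat \<Rightarrow> nat) \<Rightarrow> complex" where
  "coordinate_mpoly i = (\<lambda>\<alpha>. if \<alpha> = (\<lambda>j. if j = i then 1 else 0) then 1 else 0)"

lemma coordinate_mpoly:
  assumes "i < n"
  shows "is_mpoly n (coordinate_mpoly i)"
    and "mpoly_op n (coordinate_mpoly i) T = T i"
    and "mpoly_eval n (coordinate_mpoly i) w = w i"
proof -
  have supp: "{\<alpha>. coordinate_mpoly i \<alpha> \<noteq> 0} = {\<lambda>j. if j = i then 1 else 0}"
    unfolding coordinate_mpoly_def by auto
  show "is_mpoly n (coordinate_mpoly i)"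
    unfolding is_mpoly_def supp using assms by (auto simp: coordinate_mpoly_def split: if_splits)
  show "mpoly_op n (coordinate_mpoly i) T = T i"
    unfolding mpoly_op_def supp using assms by (simp add: coordinate_mpoly_def mono_op_unit cscale_one)
  have "mpoly_eval n (coordinate_mpoly i) w = (\<Prod>j<n. w j ^ (if j = i then 1 else 0))"
    unfolding mpoly_eval_def supp by (simp add: coordinate_mpoly_def)
  also have "\<dots> = (\<Prod>j<n. if j = i then w j else 1)" by (intro prod.cong) auto
  finally have "mpoly_eval n (coordinate_mpoly i) w = (\<Prod>j<n. if j = i then w j else 1)" .
  then show "mpoly_eval n (coordinate_mpoly i) w = w i" using assms by (simp add: prod.delta)
qed

lemma esym_n: "esym n n z = (\<Prod>j<n. z j)"
proof -
  have "J = {..<n}" if "J \<subseteq> {..<n}" "card J = n" for J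
    using that by (intro card_subset_eq) auto
  then have "{J. J \<subseteq> {..<n} \<and> card J = n} = {{..<n}}" by auto
  then show ?thesis unfolding esym_def by simp
qed

lemma Gamma_last_coordinate_le_1:
  assumes "n \<ge> 1" "w \<in> Gamma n"
  shows "cmod (w (n - 1)) \<le> 1"
proof -
  obtain z where z: "\<forall>j<n. cmod (z j) \<le> 1" "\<forall>k<n. w k = esym n (Suc k) z"
    using assms(2) unfolding Gamma_def by blast
  have "w (n - 1) = (\<Prod>j<n. z j)" using z(2)[rule_format, of "n - 1"] assms(1) esym_n[of n z] by simp
  then have "cmod (w (n - 1)) = (\<Prod>j<n. cmod (z j))" by (simp add: prod_norm)
  also have "\<dots> \<le> 1" using z(1) by (intro prod_le_1) auto
  finally show ?thesis .
qed

lemma hnorm_le_op_norm: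
  assumes "bounded_op Q"
  shows "hnorm (Q x) \<le> op_norm Q * hnorm x"
proof -
  obtain K where K: "K \<ge> 0" "\<And>x. hnorm (Q x) \<le> K * hnorm x" using assms bounded_op_bound by blast
  have "bdd_above {hnorm (Q x) |x. hnorm x \<le> 1}"
  proof (rule bdd_aboveI)
    fix r assume "r \<in> {hnorm (Q x) |x. hnorm x \<le> 1}"
    then obtain y where "r = hnorm (Q y)" "hnorm y \<le> 1" by blast
    then show "r \<le> K" using K(2)[of y] mult_left_le[of "hnorm y" K] K(1) by simp
  qed
  then have unit: "hnorm (Q y) \<le> op_norm Q" if "hnorm y \<le> 1" for y
    unfolding op_norm_def using that by (intro cSup_upper) blast+
  show ?thesis
  proof (cases "x = 0")
    case True then show ?thesis using clinear_zero[OF bounded_op_clinear[OF assms]] by simp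
  next
    case False
    then have hx: "hnorm x > 0" using hnorm_nonneg[of x] hnorm_eq_zero by (metis less_eq_real_def)
    have "hnorm (Q (cscale (of_real (1 / hnorm x)) x)) \<le> op_norm Q"
      using hx by (intro unit) (simp add: hnorm_cscale norm_divide)
    then show ?thesis
      using hx by (simp add: clinear_cscale[OF bounded_op_clinear[OF assms]] hnorm_cscale norm_divide field_simps)
  qed
qed

text \<open>Only the von Neumann inequality for the last coordinate polynomial is needed:
  its supremum over Gamma_n is at most 1 because the last coordinate is a product of n
  points of the closed disc.\<close>

lemma gamma_contraction_last_contractive:
  fixes T :: "nat \<Rightarrow> 'a::complex_inner_space \<Rightarrow> 'a"
  assumes n: "n \<ge> 1" and gc: "gamma_contraction n T"
  shows "hnorm (T (n - 1) x) \<le> hnorm x"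
proof -
  have i: "n - 1 < n" using n by simp
  note coord = coordinate_mpoly[OF i]
  define vals where "vals = {cmod (mpoly_eval n (coordinate_mpoly (n - 1)) w) | w. w \<in> Gamma n}"
  have "(\<lambda>k. if k < n then esym n (Suc k) (\<lambda>_. 0) else 0) \<in> Gamma n"
    unfolding Gamma_def by (intro CollectI exI[of _ "\<lambda>_. 0"]) auto
  then have "vals \<noteq> {}" unfolding vals_def by blast
  then have "Sup vals \<le> 1"
    unfolding vals_def using Gamma_last_coordinate_le_1[OF n] coord(3) by (intro cSup_least) auto
  moreover have "op_norm (mpoly_op n (coordinate_mpoly (n - 1)) T) \<le> Sup vals"
    using gc coord(1) unfolding gamma_contraction_def vals_def by blast
  ultimately have "op_norm (T (n - 1)) \<le> 1" using coord(2)[of T] by simp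
  moreover have "bounded_op (T (n - 1))" using gc i unfolding gamma_contraction_def by blast
  then have "hnorm (T (n - 1) x) \<le> op_norm (T (n - 1)) * hnorm x" by (rule hnorm_le_op_norm)
  ultimately show ?thesis using mult_right_mono[of "op_norm (T (n - 1))" 1 "hnorm x"] by simp
qed

lemma gamma_contraction_gtuple:
  assumes n: "n \<ge> 2" and gc: "gamma_contraction n (gtuple n S P)"
  shows "bounded_op P" "\<And>x. hnorm (P x) \<le> hnorm x"
    and "\<And>i. i \<in> {1..n-1} \<Longrightarrow> bounded_op (S i)"
    and "\<And>i x. i \<in> {1..n-1} \<Longrightarrow> S i (P x) = P (S i x)"
proof -
  have last: "gtuple n S P (n - 1) = P" "n - 1 < n" using n unfolding gtuple_def by auto
  have coord: "gtuple n S P (i - 1) = S i" "i - 1 < n" if "i \<in> {1..n-1}" for i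
    unfolding gtuple_def using that by auto
  have bounded: "\<And>i. i < n \<Longrightarrow> bounded_op (gtuple n S P i)"
    and comm: "\<And>i j. i < n \<Longrightarrow> j < n \<Longrightarrow> gtuple n S P i \<circ> gtuple n S P j = gtuple n S P j \<circ> gtuple n S P i"
    using gc unfolding gamma_contraction_def by blast+
  show "bounded_op P" using bounded[OF last(2)] last(1) by simp
  show "bounded_op (S i)" if "i \<in> {1..n-1}" for i using bounded[OF coord(2)[OF that]] coord(1)[OF that] by simp
  show "S i (P x) = P (S i x)" if "i \<in> {1..n-1}" for i x
    using fun_cong[OF comm[OF coord(2)[OF that] last(2)], of x] coord(1)[OF that] last(1) by simp
  show "hnorm (P x) \<le> hnorm x" for x
    using gamma_contraction_last_contractive[OF _ gc, of x] n last(1) by simp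
qed

theorem mainTheorem10:
  fixes n :: nat
    and S :: "nat \<Rightarrow> 'h::chilbert_space \<Rightarrow> 'h"
    and P :: "'h \<Rightarrow> 'h"
    and B :: "nat \<Rightarrow> 'h \<Rightarrow> 'h"
  assumes n: "n \<ge> 2"
    and gc: "gamma_contraction n (gtuple n S P)"
    and pure: "\<forall>x. (\<lambda>m. hnorm ((adj P ^^ m) x)) \<longlonglongrightarrow> 0"
    and fund: "\<forall>i\<in>{1..n-1}.
        (\<forall>x\<in>defect_space (adj P). B i x \<in> defect_space (adj P)) \<and>
        (\<forall>x\<in>defect_space (adj P). \<forall>y\<in>defect_space (adj P). B i (x + y) = B i x + B i y) \<and>
        (\<forall>a. \<forall>x\<in>defect_space (adj P). B i (cscale a x) = cscale a (B i x)) \<and>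
        (\<exists>K. \<forall>x\<in>defect_space (adj P). hnorm (B i x) \<le> K * hnorm x) \<and>
        (\<forall>x. adj (S i) x - S (n - i) (adj P x) = defect (adj P) (B i (defect (adj P) x)))"
  shows "(\<forall>i\<in>{1..n-1}. unitarily_equiv_compr (S i) (model_space P) (model_S n B P i))
       \<and> unitarily_equiv_compr P (model_space P) shift"
proof -
  note gt = gamma_contraction_gtuple[OF n gc]
  interpret pure_contraction P using gt(1,2) pure by unfold_locales auto
  have "unitarily_equiv_compr (S i) (model_space P) (model_S n B P i)" if i: "i \<in> {1..n-1}" for i
  proof -
    have j: "n - i \<in> {1..n-1}" and ji: "n - (n - i) = i" using i n by auto
    have "\<forall>x. adj (S (n - i)) x - S (n - (n - i)) (adj P x) = defect (adj P) (B (n - i) (defect (adj P) x))"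
      using fund j by blast
    then interpret fundamental_pair P "S i" "S (n - i)" "B i" "B (n - i)"
      using gt(3)[OF i] gt(3)[OF j] gt(4)[OF i] fund i j
      by unfold_locales (auto simp: bounded_op_on_def ji)
    show ?thesis using unitarily_equiv_compr_S1 unfolding model_S1_def model_S_def .
  qed
  then show ?thesis using unitarily_equiv_compr_P by blast
qed

end
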